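(* Let $\mathcal{H}=\mathcal{H}_1\otimes\cdots\otimes\mathcal{H}_n$ be a tensor product of finite-dimensional complex Hilbert spaces, $\ket{\psi}\in\mathcal{H}$ a unit vector and $\rho=\ket{\psi}\bra{\psi}$. For each $k$ with $0\le k\le n$ let $\mathrm{Harm}^k(\rho)\subseteq\Omega^k(\rho)$ be the space of harmonic entanglement $k$-forms, i.e. those $\omega$ with $d^k\omega=0$ and $\delta^{k-1}\omega=0$. Then $$\mathrm{Harm}^k(\rho)\cong\mathrm{Harm}^{n-k}(\rho).$$
   Context: Notation. For $I\subseteq\{1,\dots,n\}$, $\mathcal{H}_I=\bigotimes_{i\in I}\mathcal{H}_i$ with factors in increasing order; $\rho_I=\mathrm{tr}_{I^C}(\rho)$ is the reduced density matrix (partial trace over the complementary factors), $s_I$ is the orthogonal projection onto $\mathrm{im}(\rho_I)$, and $\mathcal{O}|_{\rho_I}=s_I\mathcal{O}s_I$ for an operator $\mathcal{O}$ on $\mathcal{H}_I$. Entanglement forms. $\Omega^0(\rho)=\mathbb{C}$, and for $1\le k\le n$, $\Omega^k(\rho)=\prod_{|I|=k}\{s_I\mathcal{O}s_I:\mathcal{O}\in\mathrm{End}(\mathcal{H}_I)\}$ (tuples $\omega=(\omega_I)_{|I|=k}$ indexed by the $k$-element subsets). Signed tensor product. For $j\notin J$ and an operator $X$ on $\mathcal{H}_J$, $\mathbb{I}_j\,\widehat{\otimes}\,X$ denotes $(-1)^{p}$ times the operator on $\mathcal{H}_{J\cup\{j\}}$ (factors in increasing order) acting as the identity on the factor $\mathcal{H}_j$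 and as $X$ on the remaining factors, where $p=\#\{i\in J: i<j\}$. Coboundary. $d^0\lambda=(\lambda s_{\{1\}},\dots,\lambda s_{\{n\}})$ for $\lambda\in\mathbb{C}$; for $1\le m\le n-1$, $d^m:\Omega^m(\rho)\to\Omega^{m+1}(\rho)$ has components $(d^m\omega)_I = \big(m\sum_{j\in I}\mathbb{I}_j\,\widehat{\otimes}\,\omega_{I\setminus\{j\}}\big)\big|_{\rho_I}$ for $|I|=m+1$; $d^n=0$. (This satisfies $d^{m}\circ d^{m-1}=0$.) Inner product. On $\Omega^0=\mathbb{C}$, $\langle z,w\rangle=z\bar w$. For $1\le k\le n$ and each $|I|=k$, take a Schmidt decomposition $\ket{\psi}=\sum_{\alpha=1}^{S}\lambda_\alpha\ket{\alpha_I}\otimes\ket{\alpha_{I^C}}$ of $\ket\psi$ with respect to the bipartition $\mathcal{H}_I\otimes\mathcal{H}_{I^C}$ (factors reordered; $\mathcal{H}_\emptyset=\mathbb{C}$), with $\lambda_\alpha>0$ and orthonormal $\ket{\alpha_I}$, which span $\mathrm{im}(\rho_I)$; write $(\omega_I)_{\alpha\beta}=\bra{\alpha_I}\omega_I\ket{\beta_I}$. Then $$\langle\omega,\eta\rangle=\sum_{|I|=k}\sum_{\alpha,\beta=1}^{S}\lambda_\alpha\lambda_\beta\,(\omega_I)_{\alpha\beta}\,\overline{(\eta_I)_{\alpha\beta}},$$ which is positive definite and independent of the choice of Schmidt bases. (In the paper this is defined as $\mathrm{tr}((\omega\wedge\ast\eta)|_{\rho})$ via a wedge product and Hodge star, and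 shown to equal this formula.) Codifferential. $\delta^{k-1}:\Omega^k(\rho)\to\Omega^{k-1}(\rho)$ is the adjoint of $d^{k-1}$ with respect to these inner products: $\langle d^{k-1}\omega,\eta\rangle=\langle\omega,\delta^{k-1}\eta\rangle$. For $k=0$, $\delta^{-1}=0$. *)

theory Defs
  imports Complex_Main
begin

text \<open>Parties are indexed by 0..<n (party i corresponds to the paper's i+1),
  the i-th factor is C^(dims i). A basis multi-index on a subset I of parties is a
  function a :: nat => nat with a i < dims i for i in I and a i = 0 outside I.
  Vectors on H_I are functions on such multi-indices, operators on H_I are
  matrices indexed by pairs of multi-indices (zero outside idx I x idx I).
  A form is a function from subsets I to operators on H_I.\<close>

type_synonym mindex = "nat \<Rightarrow> nat"
type_synonym qop = "mindex \<Rightarrow> mindex \<Rightarrow> complex"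
type_synonym eform = "nat set \<Rightarrow> qop"

definition idx :: "(nat \<Rightarrow> nat) \<Rightarrow> nat set \<Rightarrow> mindex set" where
  "idx dims I = {a. (\<forall>i\<in>I. a i < dims i) \<and> (\<forall>i. i \<notin> I \<longrightarrow> a i = 0)}"

definition zidx :: mindex where "zidx = (\<lambda>i. 0)"

definition merge :: "nat set \<Rightarrow> mindex \<Rightarrow> mindex \<Rightarrow> mindex" where
  "merge I a c = (\<lambda>i. if i \<in> I then a i else c i)"

definition restr :: "nat set \<Rightarrow> mindex \<Rightarrow> mindex" where
  "restr J a = (\<lambda>i. if i \<in> J then a i else 0)"

definition mmul :: "(nat \<Rightarrow> nat) \<Rightarrow> nat set \<Rightarrow> qop \<Rightarrow> qop \<Rightarrow> qop" where
  "mmul dims I A B = (\<lambda>a b. \<Sum>c\<in>idx dims I. A a c * B c b)"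

definition mapp :: "(nat \<Rightarrow> nat) \<Rightarrow> nat set \<Rightarrow> qop \<Rightarrow> (mindex \<Rightarrow> complex) \<Rightarrow> (mindex \<Rightarrow> complex)" where
  "mapp dims I A v = (\<lambda>a. \<Sum>b\<in>idx dims I. A a b * v b)"

definition op_supported :: "(nat \<Rightarrow> nat) \<Rightarrow> nat set \<Rightarrow> qop \<Rightarrow> bool" where
  "op_supported dims I A \<longleftrightarrow> (\<forall>a b. (a \<notin> idx dims I \<or> b \<notin> idx dims I) \<longrightarrow> A a b = 0)"

definition unit_state :: "nat \<Rightarrow> (nat \<Rightarrow> nat) \<Rightarrow> (mindex \<Rightarrow> complex) \<Rightarrow> bool" where
  "unit_state n dims psi \<longleftrightarrow> (\<Sum>a\<in>idx dims {0..<n}. (cmod (psi a))^2) = 1"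

text \<open>Reduced density matrix rho_I = tr_{I^C} |psi><psi|.\<close>
definition rho_red :: "nat \<Rightarrow> (nat \<Rightarrow> nat) \<Rightarrow> (mindex \<Rightarrow> complex) \<Rightarrow> nat set \<Rightarrow> qop" where
  "rho_red n dims psi I = (\<lambda>a b. if a \<in> idx dims I \<and> b \<in> idx dims I then
      (\<Sum>c\<in>idx dims ({0..<n} - I). psi (merge I a c) * cnj (psi (merge I b c))) else 0)"

definition supp_proj :: "nat \<Rightarrow> (nat \<Rightarrow> nat) \<Rightarrow> (mindex \<Rightarrow> complex) \<Rightarrow> nat set \<Rightarrow> qop" where
  "supp_proj n dims psi I = (THE P. op_supported dims I P \<and> mmul dims I P P = P \<and>
      (\<forall>a b. P b a = cnj (P a b)) \<and>
      range (mapp dims I P) = range (mapp dims I (rho_red n dims psi I)))"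

definition restrict_rho :: "nat \<Rightarrow> (nat \<Rightarrow> nat) \<Rightarrow> (mindex \<Rightarrow> complex) \<Rightarrow> nat set \<Rightarrow> qop \<Rightarrow> qop" where
  "restrict_rho n dims psi I X =
     mmul dims I (mmul dims I (supp_proj n dims psi I) X) (supp_proj n dims psi I)"

definition zero_form :: eform where "zero_form = (\<lambda>I a b. 0)"

definition form_add :: "eform \<Rightarrow> eform \<Rightarrow> eform" where
  "form_add x y = (\<lambda>I a b. x I a b + y I a b)"

definition form_scale :: "complex \<Rightarrow> eform \<Rightarrow> eform" where
  "form_scale c x = (\<lambda>I a b. c * x I a b)"

text \<open>Omega^k(rho): tuples (omega_I)_{|I|=k} with omega_I = s_I O s_I; components at
  other index sets are fixed to 0. Omega^0 consists of the scalar component at I = {},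
  where H_{} = C and s_{} = 1.\<close>
definition Omega :: "nat \<Rightarrow> (nat \<Rightarrow> nat) \<Rightarrow> (mindex \<Rightarrow> complex) \<Rightarrow> nat \<Rightarrow> eform set" where
  "Omega n dims psi k = {\<omega>. \<forall>I. if I \<subseteq> {0..<n} \<and> card I = k
      then (\<exists>X. op_supported dims I X \<and> \<omega> I = restrict_rho n dims psi I X)
      else \<omega> I = (\<lambda>a b. 0)}"

definition sten :: "(nat \<Rightarrow> nat) \<Rightarrow> nat \<Rightarrow> nat set \<Rightarrow> qop \<Rightarrow> qop" where
  "sten dims j J X = (\<lambda>a b. if a \<in> idx dims (insert j J) \<and> b \<in> idx dims (insert j J) \<and> a j = b j
      then (-1) ^ card {i\<in>J. i < j} * X (restr J a) (restr J b) else 0)"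

definition dform :: "nat \<Rightarrow> (nat \<Rightarrow> nat) \<Rightarrow> (mindex \<Rightarrow> complex) \<Rightarrow> nat \<Rightarrow> eform \<Rightarrow> eform" where
  "dform n dims psi m \<omega> = (\<lambda>I. if I \<subseteq> {0..<n} \<and> card I = Suc m then
      (if m = 0 then (\<lambda>a b. \<omega> {} zidx zidx * supp_proj n dims psi I a b)
       else restrict_rho n dims psi I
              (\<lambda>a b. of_nat m * (\<Sum>j\<in>I. sten dims j (I - {j}) (\<omega> (I - {j})) a b)))
    else (\<lambda>a b. 0))"

definition schmidt :: "nat \<Rightarrow> (nat \<Rightarrow> nat) \<Rightarrow> (mindex \<Rightarrow> complex) \<Rightarrow> nat set \<Rightarrow>
    nat \<Rightarrow> (nat \<Rightarrow> real) \<Rightarrow> (nat \<Rightarrow> mindex \<Rightarrow> complex) \<Rightarrow> (nat \<Rightarrow> mindex \<Rightarrow> complex) \<Rightarrow> bool" where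
  "schmidt n dims psi I S lam u v \<longleftrightarrow>
     (\<forall>\<alpha><S. lam \<alpha> > 0) \<and>
     (\<forall>\<alpha><S. \<forall>\<beta><S. (\<Sum>a\<in>idx dims I. u \<alpha> a * cnj (u \<beta> a)) = (if \<alpha> = \<beta> then 1 else 0)) \<and>
     (\<forall>\<alpha><S. \<forall>\<beta><S. (\<Sum>c\<in>idx dims ({0..<n} - I). v \<alpha> c * cnj (v \<beta> c)) = (if \<alpha> = \<beta> then 1 else 0)) \<and>
     (\<forall>a\<in>idx dims I. \<forall>c\<in>idx dims ({0..<n} - I).
        psi (merge I a c) = (\<Sum>\<alpha><S. complex_of_real (lam \<alpha>) * u \<alpha> a * v \<alpha> c))"

definition schmidt_choice where
  "schmidt_choice n dims psi I = (SOME (S, lam, u, v). schmidt n dims psi I S lam u v)"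

definition mat_entry :: "(nat \<Rightarrow> nat) \<Rightarrow> nat set \<Rightarrow> (mindex \<Rightarrow> complex) \<Rightarrow> qop \<Rightarrow> (mindex \<Rightarrow> complex) \<Rightarrow> complex" where
  "mat_entry dims I x A y = (\<Sum>a\<in>idx dims I. \<Sum>b\<in>idx dims I. cnj (x a) * A a b * y b)"

definition inner_form :: "nat \<Rightarrow> (nat \<Rightarrow> nat) \<Rightarrow> (mindex \<Rightarrow> complex) \<Rightarrow> nat \<Rightarrow> eform \<Rightarrow> eform \<Rightarrow> complex" where
  "inner_form n dims psi k \<omega> \<eta> =
    (if k = 0 then \<omega> {} zidx zidx * cnj (\<eta> {} zidx zidx)
     else (\<Sum>I\<in>{I. I \<subseteq> {0..<n} \<and> card I = k}.
        (case schmidt_choice n dims psi I of (S, lam, u, v) \<Rightarrow>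
          \<Sum>\<alpha><S. \<Sum>\<beta><S. complex_of_real (lam \<alpha> * lam \<beta>) *
             mat_entry dims I (u \<alpha>) (\<omega> I) (u \<beta>) * cnj (mat_entry dims I (u \<alpha>) (\<eta> I) (u \<beta>)))))"

definition codiff :: "nat \<Rightarrow> (nat \<Rightarrow> nat) \<Rightarrow> (mindex \<Rightarrow> complex) \<Rightarrow> nat \<Rightarrow> eform \<Rightarrow> eform" where
  "codiff n dims psi k \<eta> = (if k = 0 then zero_form else
     (THE \<xi>. \<xi> \<in> Omega n dims psi (k - 1) \<and>
        (\<forall>\<omega>\<in>Omega n dims psi (k - 1).
           inner_form n dims psi k (dform n dims psi (k - 1) \<omega>) \<eta> =
           inner_form n dims psi (k - 1) \<omega> \<xi>)))"

definition Harm :: "nat \<Rightarrow> (nat \<Rightarrow> nat) \<Rightarrow> (mindex \<Rightarrow> complex) \<Rightarrow> nat \<Rightarrow> eform set" where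
  "Harm n dims psi k = {\<omega> \<in> Omega n dims psi k.
      dform n dims psi k \<omega> = zero_form \<and> codiff n dims psi k \<omega> = zero_form}"

end

(* For every bipartition I | I^C, the Schmidt decomposition psi = sum_a lam_a u_a (x) v_a
   identifies the supports of rho_I and rho_{I^C}. Transporting operators along this
   identification gives a linear Hodge star from k-forms to (n-k)-forms with star star = +-1,
   and in terms of it the inner product is <w, e> = sum_I <psi| w_I (x) ((star e)_{I^C})^* |psi>.
   Moving the identity factors of d from one tensor factor to the other shows that the adjoint
   of d is, up to positive factors and signs, star d star.  So delta e = 0 iff d (star e) = 0,
   and d e = 0 iff delta (star e) = 0, and star maps harmonic k-forms bijectively and linearly
   onto harmonic (n-k)-forms.  The Schmidt decomposition comes from a variational proof of the
   spectral theorem for the Gram matrix of psi. *)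

theory Submission
  imports Defs "HOL-Analysis.Analysis"
begin

section \<open>Inner products and orthonormal families\<close>

definition cinner :: "'a set \<Rightarrow> ('a \<Rightarrow> complex) \<Rightarrow> ('a \<Rightarrow> complex) \<Rightarrow> complex" where
  "cinner A x y = (\<Sum>a\<in>A. x a * cnj (y a))"

lemma cnj_cinner: "cnj (cinner A x y) = cinner A y x"
  by (simp add: cinner_def mult.commute)

lemma cinner_add_left: "cinner A (\<lambda>a. x a + y a) z = cinner A x z + cinner A y z"
  by (simp add: cinner_def algebra_simps sum.distrib)
lemma cinner_add_right: "cinner A x (\<lambda>a. y a + z a) = cinner A x y + cinner A x z"
  by (simp add: cinner_def algebra_simps sum.distrib)
lemma cinner_diff_left: "cinner A (\<lambda>a. x a - y a) z = cinner A x z - cinner A y z"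
  by (simp add: cinner_def algebra_simps sum_subtractf)
lemma cinner_diff_right: "cinner A x (\<lambda>a. y a - z a) = cinner A x y - cinner A x z"
  by (simp add: cinner_def algebra_simps sum_subtractf)
lemma cinner_scale_left: "cinner A (\<lambda>a. c * x a) z = c * cinner A x z"
  by (simp add: cinner_def algebra_simps sum_distrib_left)
lemma cinner_scale_right: "cinner A x (\<lambda>a. c * y a) = cnj c * cinner A x y"
  by (simp add: cinner_def algebra_simps sum_distrib_left)
lemma cinner_sum_left: "cinner A (\<lambda>a. \<Sum>i\<in>I. f i a) z = (\<Sum>i\<in>I. cinner A (f i) z)"
  by (simp add: cinner_def sum_distrib_right sum.swap[of _ I])
lemma cinner_sum_right: "cinner A x (\<lambda>a. \<Sum>i\<in>I. f i a) = (\<Sum>i\<in>I. cinner A x (f i))"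
  by (simp add: cinner_def sum_distrib_left sum.swap[of _ I])
lemma cinner_cong: "(\<And>a. a \<in> A \<Longrightarrow> x a = x' a) \<Longrightarrow> (\<And>a. a \<in> A \<Longrightarrow> y a = y' a) \<Longrightarrow> cinner A x y = cinner A x' y'"
  by (simp add: cinner_def)

lemma cinner_self: "cinner A x x = of_real (\<Sum>a\<in>A. (cmod (x a))^2)"
  unfolding cinner_def of_real_sum by (intro sum.cong refl) (simp only: complex_norm_square)

lemma Re_cinner_self: "Re (cinner A x x) = (\<Sum>a\<in>A. (cmod (x a))^2)"
  by (simp add: cinner_self)

lemma cinner_self_nonneg: "Re (cinner A x x) \<ge> 0"
  by (simp add: Re_cinner_self sum_nonneg)

lemma cinner_self_real: "cinner A x x = of_real (Re (cinner A x x))"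
  by (simp add: cinner_self)

lemma cinner_self_eq_0D: "finite A \<Longrightarrow> Re (cinner A x x) = 0 \<Longrightarrow> a \<in> A \<Longrightarrow> x a = 0"
  by (simp add: Re_cinner_self sum_nonneg_eq_0_iff)

lemma cinner_hermitian_apply:
  assumes herm: "\<forall>x\<in>A. \<forall>y\<in>A. R x y = cnj (R y x)"
  shows "cinner A (\<lambda>x. \<Sum>y\<in>A. R x y * f y) g = cinner A f (\<lambda>x. \<Sum>y\<in>A. R x y * g y)"
proof -
  have "cinner A (\<lambda>x. \<Sum>y\<in>A. R x y * f y) g = (\<Sum>x\<in>A. \<Sum>y\<in>A. R x y * f y * cnj (g x))"
    by (simp add: cinner_def sum_distrib_right)
  also have "\<dots> = (\<Sum>y\<in>A. \<Sum>x\<in>A. f y * cnj (R y x * g x))"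
  proof (subst sum.swap, intro sum.cong refl)
    fix x y assume "x \<in> A" "y \<in> A"
    then show "R x y * f y * cnj (g x) = f y * cnj (R y x * g x)"
      by (subst herm[rule_format]) (simp_all add: mult_ac)
  qed
  also have "\<dots> = cinner A f (\<lambda>x. \<Sum>y\<in>A. R x y * g y)"
    by (simp add: cinner_def sum_distrib_left)
  finally show ?thesis .
qed

definition orthonormal :: "'a set \<Rightarrow> (nat \<Rightarrow> 'a \<Rightarrow> complex) \<Rightarrow> nat \<Rightarrow> bool" where
  "orthonormal A w m \<longleftrightarrow> (\<forall>i<m. \<forall>j<m. cinner A (w i) (w j) = (if i = j then 1 else 0))"

lemma cinner_orthonormal_sum:
  assumes "orthonormal A w m" "j < m"
  shows "cinner A (\<lambda>a. \<Sum>i<m. c i * w i a) (w j) = c j"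
proof -
  have "cinner A (\<lambda>a. \<Sum>i<m. c i * w i a) (w j) = (\<Sum>i<m. c i * cinner A (w i) (w j))"
    by (simp add: cinner_sum_left cinner_scale_left)
  also have "\<dots> = (\<Sum>i<m. if i = j then c i else 0)"
    using assms by (intro sum.cong) (auto simp: orthonormal_def)
  finally show ?thesis using assms by simp
qed

lemma bessel_inequality:
  assumes "orthonormal A w m"
  shows "(\<Sum>i<m. (cmod (cinner A x (w i)))^2) \<le> Re (cinner A x x)"
proof -
  define c where "c i = cinner A x (w i)" for i
  define p where "p a = x a - (\<Sum>i<m. c i * w i a)" for a
  have cw: "cinner A (\<lambda>a. \<Sum>i<m. c i * w i a) (w j) = c j" if "j < m" for j
    using cinner_orthonormal_sum[OF assms that] .
  have pw: "cinner A p (w j) = 0" if "j < m" for j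
    unfolding p_def cinner_diff_left using cw[OF that] by (simp add: c_def)
  have pe: "p = (\<lambda>a. x a - (\<Sum>i<m. c i * w i a))" by (simp add: fun_eq_iff p_def)
  have "cinner A p p = cinner A p (\<lambda>a. x a - (\<Sum>i<m. c i * w i a))"
    by (simp only: pe[symmetric])
  also have "\<dots> = cinner A p x - cinner A p (\<lambda>a. \<Sum>i<m. c i * w i a)"
    by (rule cinner_diff_right)
  also have "cinner A p (\<lambda>a. \<Sum>i<m. c i * w i a) = 0"
    by (simp add: cinner_sum_right cinner_scale_right pw)
  also have "cinner A p x = cinner A x x - (\<Sum>i<m. c i * cnj (c i))"
  proof -
    have wx: "cinner A (w i) x = cnj (c i)" for i by (simp add: c_def cnj_cinner)
    have "cinner A p x = cinner A x x - cinner A (\<lambda>a. \<Sum>i<m. c i * w i a) x"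
      by (simp only: pe cinner_diff_left)
    also have "cinner A (\<lambda>a. \<Sum>i<m. c i * w i a) x = (\<Sum>i<m. c i * cnj (c i))"
      by (simp only: cinner_sum_left cinner_scale_left wx)
    finally show ?thesis .
  qed
  finally have "cinner A p p = cinner A x x - (\<Sum>i<m. c i * cnj (c i))" by simp
  hence "Re (cinner A p p) = Re (cinner A x x) - (\<Sum>i<m. (cmod (c i))^2)"
    by (simp add: complex_norm_square[symmetric])
  with cinner_self_nonneg[of A p] show ?thesis by (simp add: c_def)
qed

lemma orthonormal_le_card:
  assumes "finite A" "orthonormal A w m"
  shows "m \<le> card A"
proof -
  have "real m = (\<Sum>i<m. Re (cinner A (w i) (w i)))"
    using assms(2) by (simp add: orthonormal_def)
  also have "\<dots> = (\<Sum>i<m. \<Sum>a\<in>A. (cmod (w i a))^2)"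
    by (simp add: Re_cinner_self)
  also have "\<dots> = (\<Sum>a\<in>A. \<Sum>i<m. (cmod (cinner A (\<lambda>b. if b = a then 1 else 0) (w i)))^2)"
  proof -
    have "cinner A (\<lambda>b. if b = a then 1 else 0) (w i) = cnj (w i a)" if "a \<in> A" for a i
    proof -
      have "cinner A (\<lambda>b. if b = a then 1 else 0) (w i) = (\<Sum>b\<in>A. if b = a then cnj (w i a) else 0)"
        unfolding cinner_def by (rule sum.cong) auto
      then show ?thesis using that assms(1) by simp
    qed
    then show ?thesis by (simp add: sum.swap[of _ A])
  qed
  also have "\<dots> \<le> (\<Sum>a\<in>A. Re (cinner A (\<lambda>b. if b = a then 1 else 0) (\<lambda>b. if b = a then 1 else 0)))"
    by (intro sum_mono bessel_inequality[OF assms(2)])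
  also have "\<dots> = (\<Sum>a\<in>A. 1)"
  proof (intro sum.cong refl)
    fix a assume a: "a \<in> A"
    have "cinner A (\<lambda>b. if b = a then 1 else 0) (\<lambda>b. if b = a then 1 else 0) = (\<Sum>b\<in>A. if b = a then 1 else 0)"
      unfolding cinner_def by (rule sum.cong) auto
    then show "Re (cinner A (\<lambda>b. if b = a then 1 else 0) (\<lambda>b. if b = a then 1 else 0)) = 1"
      using a assms(1) by simp
  qed
  finally show ?thesis by simp
qed

section \<open>A variational spectral theorem\<close>

lemma nonneg_le_quadratic_imp_zero:
  fixes N D :: real
  assumes N: "N \<ge> 0" and le: "\<And>t. t > 0 \<Longrightarrow> 2 * t * N \<le> t^2 * D"
  shows "N = 0"
proof (rule ccontr)
  assume "N \<noteq> 0"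
  with N have n: "N > 0" by simp
  define t where "t = N / (\<bar>D\<bar> + 1)"
  have t: "t > 0" using n by (simp add: t_def add_pos_nonneg)
  from le[OF t] have "2 * N \<le> t * D" using t by (simp add: power2_eq_square mult.assoc)
  also have "t * D \<le> t * \<bar>D\<bar>" using t by (simp add: mult_left_mono)
  also have "t * \<bar>D\<bar> = N * (\<bar>D\<bar> / (\<bar>D\<bar> + 1))" by (simp add: t_def)
  also have "\<dots> < N * 1" using n by (intro mult_strict_left_mono) auto
  finally show False using n by simp
qed

lemma compact_bounded_box:
  "compact (Pi UNIV (\<lambda>a. if a \<in> A then cball (0::complex) 1 else {0}))"
proof -
  have "compactin (product_topology (\<lambda>i. euclidean) UNIV) (PiE UNIV (\<lambda>a. if a \<in> A then cball (0::complex) 1 else {0}))"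
    by (subst compactin_PiE) auto
  then show ?thesis
    by (metis PiE_UNIV_domain compactin_euclidean_iff euclidean_product_topology)
qed

lemma continuous_cinner: "continuous_on UNIV (\<lambda>x::'a \<Rightarrow> complex. cinner A x (w::'a \<Rightarrow> complex))"
  unfolding cinner_def by (intro continuous_intros continuous_on_product_coordinates)

lemma continuous_cinner_self: "continuous_on UNIV (\<lambda>x::'a \<Rightarrow> complex. cinner A x x)"
  unfolding cinner_def by (intro continuous_intros continuous_on_product_coordinates)

locale gram_factor =
  fixes A :: "'a set" and C :: "'c set" and M :: "'a \<Rightarrow> 'c \<Rightarrow> complex"
  assumes finite_A: "finite A" and finite_C: "finite C"
begin

definition gram where "gram a b = (\<Sum>c\<in>C. M a c * cnj (M b c))"
definition gram_app where "gram_app x = (\<lambda>a. \<Sum>b\<in>A. gram a b * x b)"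
definition gram_quad :: "('a \<Rightarrow> complex) \<Rightarrow> real" where
  "gram_quad x = Re (cinner A (gram_app x) x)"

text \<open>Vectors are functions on the whole type, so the unit sphere is only compact after
  fixing them to vanish outside \<open>A\<close>.\<close>
definition unit_orth :: "(nat \<Rightarrow> 'a \<Rightarrow> complex) \<Rightarrow> nat \<Rightarrow> ('a \<Rightarrow> complex) set" where
  "unit_orth w m = {x. (\<forall>a. a \<notin> A \<longrightarrow> x a = 0) \<and> cinner A x x = 1 \<and> (\<forall>i<m. cinner A x (w i) = 0)}"

definition eigenfamily :: "(nat \<Rightarrow> 'a \<Rightarrow> complex) \<Rightarrow> (nat \<Rightarrow> real) \<Rightarrow> nat \<Rightarrow> bool" where
  "eigenfamily w \<mu> m \<longleftrightarrow> orthonormal A w m \<and> (\<forall>i<m. \<mu> i > 0) \<and>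
     (\<forall>i<m. \<forall>a\<in>A. gram_app (w i) a = of_real (\<mu> i) * w i a)"

lemma cnj_gram: "cnj (gram b a) = gram a b"
  by (simp add: gram_def mult.commute)

lemma gram_app_cong: "(\<And>b. b \<in> A \<Longrightarrow> x b = x' b) \<Longrightarrow> gram_app x a = gram_app x' a"
  by (simp add: gram_app_def)

lemma gram_app_add: "gram_app (\<lambda>b. x b + y b) a = gram_app x a + gram_app y a"
  by (simp add: gram_app_def algebra_simps sum.distrib)

lemma gram_app_scale: "gram_app (\<lambda>b. c * x b) a = c * gram_app x a"
  by (simp add: gram_app_def algebra_simps sum_distrib_left)

lemma gram_app_selfadjoint: "cinner A (gram_app x) y = cinner A x (gram_app y)"
  unfolding gram_app_def by (rule cinner_hermitian_apply) (simp add: cnj_gram)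

lemma sum_column_cinner:
  "(\<Sum>c\<in>C. cinner A (\<lambda>b. M b c) x * cnj (cinner A (\<lambda>b. M b c) y)) = cinner A (gram_app y) x"
proof -
  have "(\<Sum>c\<in>C. cinner A (\<lambda>b. M b c) x * cnj (cinner A (\<lambda>b. M b c) y))
      = (\<Sum>c\<in>C. \<Sum>a\<in>A. \<Sum>b\<in>A. M a c * cnj (x a) * (cnj (M b c) * y b))"
    by (simp add: cinner_def sum_distrib_left sum_distrib_right) (rule sum.cong[OF refl], rule sum.swap)
  also have "\<dots> = (\<Sum>a\<in>A. \<Sum>c\<in>C. \<Sum>b\<in>A. M a c * cnj (x a) * (cnj (M b c) * y b))"
    by (rule sum.swap)
  also have "\<dots> = (\<Sum>a\<in>A. \<Sum>b\<in>A. \<Sum>c\<in>C. M a c * cnj (x a) * (cnj (M b c) * y b))"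
    by (intro sum.cong refl) (rule sum.swap)
  also have "\<dots> = cinner A (gram_app y) x"
    by (simp add: cinner_def gram_app_def gram_def sum_distrib_left sum_distrib_right mult_ac)
  finally show ?thesis .
qed

lemma cinner_gram_app_self:
  "cinner A (gram_app x) x = of_real (\<Sum>c\<in>C. (cmod (cinner A (\<lambda>b. M b c) x))^2)"
proof -
  have "cinner A (gram_app x) x = (\<Sum>c\<in>C. cinner A (\<lambda>b. M b c) x * cnj (cinner A (\<lambda>b. M b c) x))"
    by (rule sum_column_cinner[symmetric])
  also have "\<dots> = of_real (\<Sum>c\<in>C. (cmod (cinner A (\<lambda>b. M b c) x))^2)"
    unfolding of_real_sum by (intro sum.cong refl) (simp only: complex_norm_square)
  finally show ?thesis .
qed

lemma gram_quad_eq: "gram_quad x = (\<Sum>c\<in>C. (cmod (cinner A (\<lambda>b. M b c) x))^2)"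
  by (simp add: gram_quad_def cinner_gram_app_self)

lemma gram_quad_nonneg: "gram_quad x \<ge> 0"
  by (simp add: gram_quad_eq sum_nonneg)

lemma cinner_gram_app_self_real: "cinner A (gram_app x) x = of_real (gram_quad x)"
  by (simp add: gram_quad_def cinner_gram_app_self)

lemma gram_quad_vanishing: "(\<And>a. a \<in> A \<Longrightarrow> x a = 0) \<Longrightarrow> gram_quad x = 0"
  by (simp add: gram_quad_def cinner_def)

lemma gram_quad_zero_norm: "Re (cinner A x x) = 0 \<Longrightarrow> gram_quad x = 0"
  by (intro gram_quad_vanishing cinner_self_eq_0D[OF finite_A])

lemma gram_quad_scale: "gram_quad (\<lambda>a. of_real s * x a) = s^2 * gram_quad x"
proof -
  have "gram_app (\<lambda>a. of_real s * x a) = (\<lambda>a. of_real s * gram_app x a)"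
    by (simp add: fun_eq_iff gram_app_scale)
  then show ?thesis
    by (simp add: gram_quad_def cinner_scale_left cinner_scale_right power2_eq_square)
qed

lemma continuous_gram_quad: "continuous_on UNIV gram_quad"
  unfolding gram_quad_def[abs_def] cinner_def gram_app_def
  by (intro continuous_intros continuous_on_product_coordinates)

lemma compact_unit_orth: "compact (unit_orth w m)"
proof -
  have box: "unit_orth w m \<subseteq> Pi UNIV (\<lambda>a. if a \<in> A then cball (0::complex) 1 else {0})"
  proof
    fix x assume x: "x \<in> unit_orth w m"
    have "cmod (x a) \<le> 1" if a: "a \<in> A" for a
    proof -
      have "(cmod (x a))^2 \<le> (\<Sum>b\<in>A. (cmod (x b))^2)"
        using a finite_A by (intro member_le_sum) auto
      also have "\<dots> = 1" using x Re_cinner_self[of A x] by (simp add: unit_orth_def)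
      finally show ?thesis by (simp add: power_le_one_iff abs_le_square_iff)
    qed
    then show "x \<in> Pi UNIV (\<lambda>a. if a \<in> A then cball (0::complex) 1 else {0})"
      using x by (auto simp: unit_orth_def)
  qed
  have "unit_orth w m = (\<Inter>a\<in>-A. {x. x a = 0}) \<inter> {x. cinner A x x = 1} \<inter> (\<Inter>i\<in>{..<m}. {x. cinner A x (w i) = 0})"
    by (auto simp: unit_orth_def)
  moreover have "closed {x::'a\<Rightarrow>complex. x a = 0}" for a
    by (rule closed_Collect_eq) (auto intro: continuous_intros)
  moreover have "closed {x. cinner A x x = 1}"
    by (rule closed_Collect_eq) (auto intro: continuous_intros continuous_cinner_self)
  moreover have "closed {x. cinner A x (w i) = 0}" for i
    by (rule closed_Collect_eq) (auto intro: continuous_intros continuous_cinner)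
  ultimately have "closed (unit_orth w m)" by (auto intro!: closed_Int closed_INT)
  with box show ?thesis
    using compact_Int_closed[OF compact_bounded_box] by (metis inf.absorb_iff2)
qed

lemma normalize_into_unit_orth:
  assumes zw: "\<forall>i<m. cinner A z (w i) = 0" and zr: "Re (cinner A z z) > 0"
  shows "\<exists>z'\<in>unit_orth w m. gram_quad z' = gram_quad z / Re (cinner A z z)"
proof
  define s where "s = 1 / sqrt (Re (cinner A z z))"
  define z' where "z' = (\<lambda>a. if a \<in> A then of_real s * z a else 0)"
  have e1: "cinner A z' y = of_real s * cinner A z y" for y
    by (subst cinner_scale_left[symmetric], rule cinner_cong) (auto simp: z'_def)
  have e2: "cinner A y z' = of_real s * cinner A y z" for y
  proof -
    have "cinner A y z' = cinner A y (\<lambda>a. of_real s * z a)"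
      by (rule cinner_cong) (auto simp: z'_def)
    then show ?thesis by (simp add: cinner_scale_right)
  qed
  have s2: "s^2 * Re (cinner A z z) = 1" using zr by (simp add: s_def power_divide)
  have "cinner A z' z' = of_real (s^2 * Re (cinner A z z))"
    unfolding e1 e2 by (subst cinner_self_real) (simp add: power2_eq_square)
  then have "cinner A z' z' = 1" using s2 by simp
  moreover have "\<forall>i<m. cinner A z' (w i) = 0" using zw by (simp add: e1)
  ultimately show "z' \<in> unit_orth w m" by (simp add: unit_orth_def z'_def)
  have "gram_app z' a = gram_app (\<lambda>a. of_real s * z a) a" for a
    by (rule gram_app_cong) (auto simp: z'_def)
  then have "gram_quad z' = gram_quad (\<lambda>a. of_real s * z a)"
    unfolding gram_quad_def by (intro arg_cong[where f=Re] cinner_cong) (auto simp: z'_def)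
  then show "gram_quad z' = gram_quad z / Re (cinner A z z)"
    using s2 zr by (simp add: gram_quad_scale field_simps)
qed

lemma gram_quad_le_max:
  assumes max: "\<And>y. y \<in> unit_orth w m \<Longrightarrow> gram_quad y \<le> gram_quad x"
    and zw: "\<forall>i<m. cinner A z (w i) = 0"
  shows "gram_quad z \<le> gram_quad x * Re (cinner A z z)"
proof (cases "Re (cinner A z z) = 0")
  case True
  then show ?thesis by (simp add: gram_quad_zero_norm)
next
  case False
  hence r: "Re (cinner A z z) > 0" using cinner_self_nonneg[of A z] by simp
  from normalize_into_unit_orth[OF zw r] max have "gram_quad z / Re (cinner A z z) \<le> gram_quad x"
    by fastforce
  then show ?thesis using r by (simp add: field_simps)
qed

lemma max_gram_quad_second_order:
  assumes max: "\<And>y. y \<in> unit_orth w m \<Longrightarrow> gram_quad y \<le> gram_quad x" and x: "x \<in> unit_orth w m"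
    and yw: "\<forall>i<m. cinner A y (w i) = 0" and xy: "cinner A x y = 0" and yx: "cinner A y x = 0"
    and Rxy: "cinner A (gram_app x) y = cinner A y y" and Ryx: "cinner A (gram_app y) x = cinner A y y"
    and t: "t > 0"
  shows "2 * t * Re (cinner A y y) \<le> t^2 * (gram_quad x * Re (cinner A y y) - gram_quad y)"
proof -
  define z where "z a = x a + of_real t * y a" for a
  have x1: "cinner A x x = 1" and xw: "\<forall>i<m. cinner A x (w i) = 0"
    using x by (auto simp: unit_orth_def)
  have "\<forall>i<m. cinner A z (w i) = 0"
    using xw yw by (simp add: z_def[abs_def] cinner_add_left cinner_scale_left)
  then have bound: "gram_quad z \<le> gram_quad x * Re (cinner A z z)"
    using gram_quad_le_max[OF max] by blast
  have "gram_app z = (\<lambda>a. gram_app x a + of_real t * gram_app y a)"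
    by (simp add: fun_eq_iff z_def[abs_def] gram_app_add gram_app_scale)
  then have "cinner A (gram_app z) z = of_real (gram_quad x) + of_real (2*t) * cinner A y y +
      of_real (t^2) * cinner A (gram_app y) y"
    by (simp add: z_def[abs_def] cinner_add_left cinner_add_right cinner_scale_left
        cinner_scale_right cinner_gram_app_self_real Rxy Ryx power2_eq_square algebra_simps)
  moreover have "cinner A z z = 1 + of_real (t^2) * cinner A y y"
    by (simp add: z_def[abs_def] cinner_add_left cinner_add_right cinner_scale_left
        cinner_scale_right x1 xy yx power2_eq_square)
  ultimately have "gram_quad x + 2 * t * Re (cinner A y y) + t^2 * gram_quad y \<le>
      gram_quad x * (1 + t^2 * Re (cinner A y y))"
    using bound by (simp add: gram_quad_def)
  then show ?thesis by (simp add: algebra_simps)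
qed

text \<open>At a maximiser \<open>x\<close> of the Rayleigh quotient the defect \<open>y = R x - l x\<close> is orthogonal
  to \<open>x\<close> and to the \<open>w i\<close>, and the second-order test in direction \<open>y\<close> forces \<open>y = 0\<close>.\<close>
lemma max_gram_quad_eigenvector:
  assumes eig: "eigenfamily w \<mu> m" and x: "x \<in> unit_orth w m"
    and max: "\<And>y. y \<in> unit_orth w m \<Longrightarrow> gram_quad y \<le> gram_quad x"
  shows "\<forall>a\<in>A. gram_app x a = of_real (gram_quad x) * x a"
proof -
  define l where "l = gram_quad x"
  have x1: "cinner A x x = 1" and xw: "\<forall>i<m. cinner A x (w i) = 0"
    using x by (auto simp: unit_orth_def)
  have hl: "cinner A (gram_app x) x = of_real l"
    by (simp add: l_def cinner_gram_app_self_real)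
  define y where "y a = (if a \<in> A then gram_app x a - of_real l * x a else 0)" for a
  have yeq: "cinner A y v = cinner A (gram_app x) v - of_real l * cinner A x v" for v
    by (subst cinner_scale_left[symmetric], subst cinner_diff_left[symmetric], rule cinner_cong)
      (auto simp: y_def)
  have yw: "\<forall>i<m. cinner A y (w i) = 0"
  proof (intro allI impI)
    fix i assume i: "i < m"
    have "cinner A x (gram_app (w i)) = cinner A x (\<lambda>a. of_real (\<mu> i) * w i a)"
      by (rule cinner_cong) (use eig i in \<open>auto simp: eigenfamily_def\<close>)
    then show "cinner A y (w i) = 0"
      using xw i by (simp add: yeq gram_app_selfadjoint cinner_scale_right)
  qed
  have yx: "cinner A y x = 0" and xy: "cinner A x y = 0"
    using cnj_cinner[of A y x] by (simp_all add: yeq hl x1)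
  have Rx: "gram_app x a = y a + of_real l * x a" if "a \<in> A" for a
    using that by (simp add: y_def)
  have Rxy: "cinner A (gram_app x) y = cinner A y y"
    using cinner_cong[of A "gram_app x" "\<lambda>a. y a + of_real l * x a" y y] Rx
    by (simp add: cinner_add_left cinner_scale_left xy)
  have Ryx: "cinner A (gram_app y) x = cinner A y y"
    using cinner_cong[of A y y "gram_app x" "\<lambda>a. y a + of_real l * x a"] Rx
    by (simp add: gram_app_selfadjoint cinner_add_right cinner_scale_right yx)
  have "Re (cinner A y y) = 0"
    using nonneg_le_quadratic_imp_zero cinner_self_nonneg[of A y]
      max_gram_quad_second_order[OF max x yw xy yx Rxy Ryx] by blast
  then have "y a = 0" if "a \<in> A" for a
    using cinner_self_eq_0D[OF finite_A _ that, of y] by simp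
  then show ?thesis by (simp add: y_def l_def)
qed

lemma exists_orthogonal_eigenvector:
  assumes eig: "eigenfamily w \<mu> m"
    and x0w: "\<forall>i<m. cinner A x0 (w i) = 0" and pos: "gram_quad x0 > 0"
  shows "\<exists>x l. l > 0 \<and> cinner A x x = 1 \<and> (\<forall>i<m. cinner A x (w i) = 0) \<and>
    (\<forall>a\<in>A. gram_app x a = of_real l * x a)"
proof -
  have r0: "Re (cinner A x0 x0) > 0"
    using pos gram_quad_zero_norm cinner_self_nonneg[of A x0] by (metis less_irrefl order_le_less)
  from normalize_into_unit_orth[OF x0w r0] obtain x1
    where x1: "x1 \<in> unit_orth w m" "gram_quad x1 > 0"
    using pos r0 by auto
  obtain x where x: "x \<in> unit_orth w m" and max: "\<And>y. y \<in> unit_orth w m \<Longrightarrow> gram_quad y \<le> gram_quad x"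
    using continuous_attains_sup[OF compact_unit_orth _ continuous_on_subset[OF continuous_gram_quad]]
      x1(1) by blast
  have "gram_quad x > 0" using max[OF x1(1)] x1(2) by simp
  with x max_gram_quad_eigenvector[OF eig x max] show ?thesis
    by (auto simp: unit_orth_def)
qed

lemma eigenfamily_extend:
  assumes eig: "eigenfamily w \<mu> m" and l: "l > 0" and x1: "cinner A x x = 1"
    and xw: "\<forall>i<m. cinner A x (w i) = 0" and xe: "\<forall>a\<in>A. gram_app x a = of_real l * x a"
  shows "eigenfamily (w(m := x)) (\<mu>(m := l)) (Suc m)"
proof -
  have "cinner A ((w(m := x)) i) ((w(m := x)) j) = (if i = j then 1 else 0)"
    if "i < Suc m" "j < Suc m" for i j
    using that eig x1 xw cnj_cinner[of A x "w i"]
    by (cases "i = m"; cases "j = m") (auto simp: eigenfamily_def orthonormal_def)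
  then show ?thesis
    using eig l xe by (auto simp: eigenfamily_def orthonormal_def less_Suc_eq)
qed

lemma maximal_eigenfamily:
  "\<exists>m w \<mu>. eigenfamily w \<mu> m \<and> (\<forall>x. (\<forall>i<m. cinner A x (w i) = 0) \<longrightarrow> gram_quad x \<le> 0)"
proof -
  define P where "P m \<longleftrightarrow> (\<exists>w \<mu>. eigenfamily w \<mu> m)" for m
  have "P 0" by (auto simp: P_def eigenfamily_def orthonormal_def)
  have "{m. P m} \<subseteq> {..card A}"
    using orthonormal_le_card[OF finite_A] by (auto simp: P_def eigenfamily_def)
  then have fin: "finite {m. P m}" by (rule finite_subset) simp
  define m where "m = Max {m. P m}"
  from Max_in[OF fin] \<open>P 0\<close> obtain w \<mu> where eig: "eigenfamily w \<mu> m"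
    by (auto simp: P_def m_def)
  have "gram_quad x \<le> 0" if xw: "\<forall>i<m. cinner A x (w i) = 0" for x
  proof (rule ccontr)
    assume "\<not> ?thesis"
    then obtain x' l where "l > 0" "cinner A x' x' = 1" "\<forall>i<m. cinner A x' (w i) = 0"
      "\<forall>a\<in>A. gram_app x' a = of_real l * x' a"
      using exists_orthogonal_eigenvector[OF eig xw] by auto
    then have "P (Suc m)" unfolding P_def by (blast intro: eigenfamily_extend[OF eig])
    then show False using Max_ge[OF fin] by (fastforce simp: m_def)
  qed
  with eig show ?thesis by blast
qed

lemma columns_expand:
  assumes eig: "eigenfamily w \<mu> m"
    and nonpos: "\<forall>x. (\<forall>i<m. cinner A x (w i) = 0) \<longrightarrow> gram_quad x \<le> 0"
    and a: "a \<in> A" and c: "c \<in> C"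
  shows "M a c = (\<Sum>i<m. cinner A (\<lambda>b. M b c) (w i) * w i a)"
proof -
  define co where "co i = cinner A (\<lambda>b. M b c) (w i)" for i
  define p where "p a = M a c - (\<Sum>i<m. co i * w i a)" for a
  have on: "orthonormal A w m" using eig by (simp add: eigenfamily_def)
  have pw: "cinner A p (w j) = 0" if "j < m" for j
    unfolding p_def[abs_def] cinner_diff_left cinner_orthonormal_sum[OF on that] by (simp add: co_def)
  then have "gram_quad p = 0" using nonpos gram_quad_nonneg[of p] by (meson order.antisym)
  then have "(cmod (cinner A (\<lambda>b. M b c) p))^2 = 0"
    using c finite_C by (simp add: gram_quad_eq sum_nonneg_eq_0_iff)
  then have g: "cinner A (\<lambda>b. M b c) p = 0" by simp
  have "cinner A p p = cinner A p (\<lambda>b. M b c) - (\<Sum>i<m. cnj (co i) * cinner A p (w i))"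
    by (simp add: p_def[abs_def] cinner_diff_right cinner_sum_right cinner_scale_right)
  also have "\<dots> = 0" using g cnj_cinner[of A "\<lambda>b. M b c" p] pw by simp
  finally have "p a = 0" using cinner_self_eq_0D[OF finite_A _ a, of p] by simp
  then show ?thesis by (simp add: p_def co_def)
qed

theorem singular_value_decomposition:
  "\<exists>(S::nat) lam u v. (\<forall>\<alpha><S. lam \<alpha> > (0::real)) \<and>
     (\<forall>\<alpha><S. \<forall>\<beta><S. (\<Sum>a\<in>A. u \<alpha> a * cnj (u \<beta> a)) = (if \<alpha> = \<beta> then 1 else 0)) \<and>
     (\<forall>\<alpha><S. \<forall>\<beta><S. (\<Sum>c\<in>C. v \<alpha> c * cnj (v \<beta> c)) = (if \<alpha> = \<beta> then 1 else 0)) \<and>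
     (\<forall>a\<in>A. \<forall>c\<in>C. M a c = (\<Sum>\<alpha><S. complex_of_real (lam \<alpha>) * u \<alpha> a * v \<alpha> c))"
proof -
  obtain m w \<mu> where eig: "eigenfamily w \<mu> m"
    and nonpos: "\<forall>x. (\<forall>i<m. cinner A x (w i) = 0) \<longrightarrow> gram_quad x \<le> 0"
    using maximal_eigenfamily by blast
  have on: "orthonormal A w m" and \<mu>: "\<forall>i<m. \<mu> i > 0"
    and w: "\<forall>i<m. \<forall>a\<in>A. gram_app (w i) a = of_real (\<mu> i) * w i a"
    using eig by (auto simp: eigenfamily_def)
  define lam where "lam i = sqrt (\<mu> i)" for i
  define v where "v i c = cinner A (\<lambda>b. M b c) (w i) / of_real (lam i)" for i c
  have lam: "\<forall>i<m. lam i > 0" using \<mu> by (simp add: lam_def)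
  have v_on: "(\<Sum>c\<in>C. v i c * cnj (v j c)) = (if i = j then 1 else 0)" if i: "i < m" and j: "j < m" for i j
  proof -
    have "(\<Sum>c\<in>C. cinner A (\<lambda>b. M b c) (w i) * cnj (cinner A (\<lambda>b. M b c) (w j)))
        = cinner A (\<lambda>a. of_real (\<mu> j) * w j a) (w i)"
      unfolding sum_column_cinner by (rule cinner_cong) (use w j in auto)
    also have "\<dots> = of_real (\<mu> j) * (if j = i then 1 else 0)"
      using on i j by (simp add: cinner_scale_left orthonormal_def)
    finally have e: "(\<Sum>c\<in>C. cinner A (\<lambda>b. M b c) (w i) * cnj (cinner A (\<lambda>b. M b c) (w j)))
        = of_real (\<mu> j) * (if j = i then 1 else 0)" .
    have "(\<Sum>c\<in>C. v i c * cnj (v j c)) = (\<Sum>c\<in>C. cinner A (\<lambda>b. M b c) (w i) *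
        cnj (cinner A (\<lambda>b. M b c) (w j))) / (of_real (lam i) * of_real (lam j))"
      by (simp add: v_def sum_divide_distrib)
    also have "\<dots> = (if i = j then 1 else 0)"
      unfolding e using lam i j \<mu>
      by (auto simp: lam_def of_real_mult[symmetric] simp del: of_real_mult)
    finally show ?thesis .
  qed
  have "M a c = (\<Sum>\<alpha><m. complex_of_real (lam \<alpha>) * w \<alpha> a * v \<alpha> c)" if "a \<in> A" "c \<in> C" for a c
    unfolding columns_expand[OF eig nonpos that] using lam
    by (intro sum.cong refl) (auto simp: v_def)
  moreover have "(\<Sum>a\<in>A. w \<alpha> a * cnj (w \<beta> a)) = (if \<alpha> = \<beta> then 1 else 0)" if "\<alpha> < m" "\<beta> < m" for \<alpha> \<beta>
    using on that by (simp add: orthonormal_def cinner_def)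
  ultimately show ?thesis using lam v_on by blast
qed

end

definition spectral_decomp ::
    "'a set \<Rightarrow> ('a \<Rightarrow> 'a \<Rightarrow> complex) \<Rightarrow> nat \<Rightarrow> (nat \<Rightarrow> real) \<Rightarrow> (nat \<Rightarrow> 'a \<Rightarrow> complex) \<Rightarrow> bool" where
  "spectral_decomp A R S lam u \<longleftrightarrow> orthonormal A u S \<and> (\<forall>\<alpha><S. lam \<alpha> > 0) \<and>
     (\<forall>x\<in>A. \<forall>y\<in>A. R x y = (\<Sum>\<alpha><S. of_real ((lam \<alpha>)^2) * u \<alpha> x * cnj (u \<alpha> y)))"

lemma spectral_decomp_apply:
  assumes sd: "spectral_decomp A R S lam u" and x: "x \<in> A"
  shows "(\<Sum>y\<in>A. R x y * z y) = (\<Sum>\<alpha><S. of_real ((lam \<alpha>)^2) * cinner A z (u \<alpha>) * u \<alpha> x)"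
proof -
  have "(\<Sum>y\<in>A. R x y * z y) = (\<Sum>y\<in>A. \<Sum>\<alpha><S. of_real ((lam \<alpha>)^2) * u \<alpha> x * cnj (u \<alpha> y) * z y)"
    using sd x by (simp add: spectral_decomp_def sum_distrib_right)
  also have "\<dots> = (\<Sum>\<alpha><S. of_real ((lam \<alpha>)^2) * cinner A z (u \<alpha>) * u \<alpha> x)"
    by (subst sum.swap) (simp add: cinner_def sum_distrib_left mult_ac)
  finally show ?thesis .
qed

lemma spectral_decomp_eigenvector:
  assumes sd: "spectral_decomp A R S lam u" and x: "x \<in> A" and \<beta>: "\<beta> < S"
  shows "(\<Sum>y\<in>A. R x y * u \<beta> y) = of_real ((lam \<beta>)^2) * u \<beta> x"
proof -
  have "(\<Sum>y\<in>A. R x y * u \<beta> y) = (\<Sum>\<gamma><S. if \<gamma> = \<beta> then of_real ((lam \<gamma>)^2) * u \<gamma> x else 0)"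
    unfolding spectral_decomp_apply[OF sd x] using sd \<beta>
    by (intro sum.cong refl) (auto simp: spectral_decomp_def orthonormal_def)
  then show ?thesis using \<beta> by simp
qed

lemma spectral_decomp_hermitian:
  assumes "spectral_decomp A R S lam u"
  shows "\<forall>x\<in>A. \<forall>y\<in>A. R x y = cnj (R y x)"
  using assms by (simp add: spectral_decomp_def mult_ac)

lemma spectral_decomp_overlap:
  assumes sd: "spectral_decomp A R S lam u" and sd': "spectral_decomp A R S' lam' u'"
    and \<alpha>: "\<alpha> < S" and \<beta>: "\<beta> < S'" and overlap: "cinner A (u' \<beta>) (u \<alpha>) \<noteq> 0"
  shows "lam \<alpha> = lam' \<beta>"
proof -
  have "of_real ((lam' \<beta>)^2) * cinner A (u' \<beta>) (u \<alpha>) = cinner A (\<lambda>x. \<Sum>y\<in>A. R x y * u' \<beta> y) (u \<alpha>)"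
    unfolding cinner_scale_left[symmetric]
    by (rule cinner_cong) (simp_all add: spectral_decomp_eigenvector[OF sd' _ \<beta>])
  also have "\<dots> = cinner A (u' \<beta>) (\<lambda>x. \<Sum>y\<in>A. R x y * u \<alpha> y)"
    by (rule cinner_hermitian_apply[OF spectral_decomp_hermitian[OF sd]])
  also have "\<dots> = of_real ((lam \<alpha>)^2) * cinner A (u' \<beta>) (u \<alpha>)"
    using cinner_scale_right[of A "u' \<beta>" "of_real ((lam \<alpha>)^2)" "u \<alpha>"]
    by (subst cinner_cong[where y' = "\<lambda>x. of_real ((lam \<alpha>)^2) * u \<alpha> x"])
      (simp_all add: spectral_decomp_eigenvector[OF sd _ \<alpha>])
  finally have "(lam' \<beta>)^2 = (lam \<alpha>)^2" using overlap of_real_eq_iff by fastforce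
  then show ?thesis using sd sd' \<alpha> \<beta> by (simp add: spectral_decomp_def power2_eq_iff_nonneg less_imp_le)
qed

lemma spectral_decomp_expand:
  assumes sd: "spectral_decomp A R S lam u" and sd': "spectral_decomp A R S' lam' u'"
    and \<beta>: "\<beta> < S'" and x: "x \<in> A"
  shows "u' \<beta> x = (\<Sum>\<alpha><S. cinner A (u' \<beta>) (u \<alpha>) * u \<alpha> x)"
proof -
  have "of_real ((lam' \<beta>)^2) * u' \<beta> x = (\<Sum>\<alpha><S. of_real ((lam \<alpha>)^2) * cinner A (u' \<beta>) (u \<alpha>) * u \<alpha> x)"
    using spectral_decomp_eigenvector[OF sd' x \<beta>] spectral_decomp_apply[OF sd x] by simp
  also have "\<dots> = of_real ((lam' \<beta>)^2) * (\<Sum>\<alpha><S. cinner A (u' \<beta>) (u \<alpha>) * u \<alpha> x)"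
    unfolding sum_distrib_left
  proof (intro sum.cong refl)
    fix \<alpha> assume "\<alpha> \<in> {..<S}"
    then show "of_real ((lam \<alpha>)^2) * cinner A (u' \<beta>) (u \<alpha>) * u \<alpha> x =
        of_real ((lam' \<beta>)^2) * (cinner A (u' \<beta>) (u \<alpha>) * u \<alpha> x)"
      using spectral_decomp_overlap[OF sd sd' _ \<beta>] by (cases "cinner A (u' \<beta>) (u \<alpha>) = 0") auto
  qed
  moreover have "lam' \<beta> \<noteq> 0" using sd' \<beta> by (auto simp: spectral_decomp_def)
  ultimately show ?thesis by simp
qed

lemma spectral_function_unique:
  assumes sd: "spectral_decomp A R S lam u" and sd': "spectral_decomp A R S' lam' u'"
    and x: "x \<in> A" and y: "y \<in> A"
  shows "(\<Sum>\<alpha><S. g (lam \<alpha>) * u \<alpha> x * cnj (u \<alpha> y)) = (\<Sum>\<beta><S'. g (lam' \<beta>) * u' \<beta> x * cnj (u' \<beta> y))"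
proof -
  define c where "c \<alpha> \<beta> = cinner A (u' \<beta>) (u \<alpha>)" for \<alpha> \<beta>
  have "(\<Sum>\<beta><S'. g (lam' \<beta>) * u' \<beta> x * cnj (u' \<beta> y))
      = (\<Sum>\<beta><S'. \<Sum>\<alpha><S. g (lam' \<beta>) * (c \<alpha> \<beta> * u \<alpha> x) * cnj (u' \<beta> y))"
    using spectral_decomp_expand[OF sd sd' _ x]
    by (intro sum.cong refl) (simp add: c_def sum_distrib_left sum_distrib_right)
  also have "\<dots> = (\<Sum>\<alpha><S. \<Sum>\<beta><S'. g (lam \<alpha>) * u \<alpha> x * (c \<alpha> \<beta> * cnj (u' \<beta> y)))"
  proof (subst sum.swap, intro sum.cong refl)
    fix \<alpha> \<beta> assume "\<alpha> \<in> {..<S}" "\<beta> \<in> {..<S'}"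
    then show "g (lam' \<beta>) * (c \<alpha> \<beta> * u \<alpha> x) * cnj (u' \<beta> y) = g (lam \<alpha>) * u \<alpha> x * (c \<alpha> \<beta> * cnj (u' \<beta> y))"
      using spectral_decomp_overlap[OF sd sd'] by (cases "c \<alpha> \<beta> = 0") (auto simp: c_def mult_ac)
  qed
  also have "\<dots> = (\<Sum>\<alpha><S. g (lam \<alpha>) * u \<alpha> x * cnj (\<Sum>\<beta><S'. cinner A (u \<alpha>) (u' \<beta>) * u' \<beta> y))"
  proof -
    have "c \<alpha> \<beta> = cnj (cinner A (u \<alpha>) (u' \<beta>))" for \<alpha> \<beta> by (simp add: c_def cnj_cinner)
    then show ?thesis by (simp add: sum_distrib_left)
  qed
  also have "\<dots> = (\<Sum>\<alpha><S. g (lam \<alpha>) * u \<alpha> x * cnj (u \<alpha> y))"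
    using spectral_decomp_expand[OF sd' sd _ y] by simp
  finally show ?thesis by simp
qed


section \<open>Multi-indices\<close>

lemma finite_idx: "finite I \<Longrightarrow> finite (idx dims I)"
proof -
  assume fI: "finite I"
  have "idx dims I \<subseteq> (\<lambda>f i. if i \<in> I then f i else 0) ` (PiE I (\<lambda>i. {..<dims i}))"
  proof
    fix a assume a: "a \<in> idx dims I"
    have "a = (\<lambda>i. if i \<in> I then restrict a I i else 0)" using a by (auto simp: idx_def fun_eq_iff)
    moreover have "restrict a I \<in> PiE I (\<lambda>i. {..<dims i})" using a by (auto simp: idx_def)
    ultimately show "a \<in> (\<lambda>f i. if i \<in> I then f i else 0) ` (PiE I (\<lambda>i. {..<dims i}))" by blast
  qed
  then show ?thesis by (rule finite_subset) (intro finite_imageI finite_PiE fI, simp)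
qed

lemma idx_empty: "idx dims {} = {zidx}" by (auto simp: idx_def zidx_def)

lemma merge_in_idx: "I \<subseteq> U \<Longrightarrow> a \<in> idx dims I \<Longrightarrow> c \<in> idx dims (U - I) \<Longrightarrow> Defs.merge I a c \<in> idx dims U"
  by (auto simp: idx_def Defs.merge_def)

lemma restr_in_idx: "J \<subseteq> I \<Longrightarrow> x \<in> idx dims I \<Longrightarrow> restr J x \<in> idx dims J"
  by (auto simp: idx_def restr_def)

lemma restr_merge_left: "a \<in> idx dims I \<Longrightarrow> restr I (Defs.merge I a c) = a"
  by (auto simp: idx_def restr_def Defs.merge_def fun_eq_iff)

lemma restr_merge_right: "c \<in> idx dims K \<Longrightarrow> I \<inter> K = {} \<Longrightarrow> restr K (Defs.merge I a c) = c"
  by (auto simp: idx_def restr_def Defs.merge_def fun_eq_iff)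

lemma merge_restr: "x \<in> idx dims U \<Longrightarrow> I \<subseteq> U \<Longrightarrow> Defs.merge I (restr I x) (restr (U - I) x) = x"
  by (auto simp: idx_def restr_def Defs.merge_def fun_eq_iff)

lemma restr_restr: "J \<subseteq> I \<Longrightarrow> restr J (restr I x) = restr J x"
  by (auto simp: restr_def fun_eq_iff)

lemma sum_idx_split:
  assumes "I \<subseteq> U"
  shows "(\<Sum>x\<in>idx dims U. f x) = (\<Sum>a\<in>idx dims I. \<Sum>c\<in>idx dims (U - I). f (Defs.merge I a c))"
proof -
  have "(\<Sum>a\<in>idx dims I. \<Sum>c\<in>idx dims (U - I). f (Defs.merge I a c)) =
      (\<Sum>p\<in>idx dims I \<times> idx dims (U - I). f (Defs.merge I (fst p) (snd p)))"
    by (subst sum.cartesian_product) (simp add: case_prod_beta)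
  also have "\<dots> = (\<Sum>x\<in>idx dims U. f x)"
    apply (rule sum.reindex_bij_witness[of _ "\<lambda>x. (restr I x, restr (U - I) x)" "\<lambda>p. Defs.merge I (fst p) (snd p)"])
    using assms by (auto simp: merge_restr restr_merge_left restr_merge_right intro: restr_in_idx merge_in_idx)
  finally show ?thesis by simp
qed

lemma merge_compl_swap: "I \<subseteq> U \<Longrightarrow> a \<in> idx dims I \<Longrightarrow> c \<in> idx dims (U - I) \<Longrightarrow> Defs.merge (U - I) c a = Defs.merge I a c"
  by (auto simp: idx_def Defs.merge_def fun_eq_iff)

lemma diff_diff_subset: "I \<subseteq> U \<Longrightarrow> U - (U - I) = I" by auto

section \<open>Matrices over a finite index set\<close>

definition mat_mul :: "'a set \<Rightarrow> ('a \<Rightarrow> 'a \<Rightarrow> complex) \<Rightarrow> ('a \<Rightarrow> 'a \<Rightarrow> complex) \<Rightarrow> ('a \<Rightarrow> 'a \<Rightarrow> complex)" where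
  "mat_mul A X Y = (\<lambda>a b. \<Sum>c\<in>A. X a c * Y c b)"

definition spectral_mat :: "'a set \<Rightarrow> nat \<Rightarrow> (nat \<Rightarrow> complex) \<Rightarrow> (nat \<Rightarrow> 'a \<Rightarrow> complex) \<Rightarrow> ('a \<Rightarrow> 'a \<Rightarrow> complex)" where
  "spectral_mat A S f u = (\<lambda>a b. if a \<in> A \<and> b \<in> A then (\<Sum>\<alpha><S. f \<alpha> * u \<alpha> a * cnj (u \<alpha> b)) else 0)"

definition mat_adj :: "('a \<Rightarrow> 'a \<Rightarrow> complex) \<Rightarrow> ('a \<Rightarrow> 'a \<Rightarrow> complex)" where
  "mat_adj X = (\<lambda>a b. cnj (X b a))"

definition supported :: "'a set \<Rightarrow> ('a \<Rightarrow> 'a \<Rightarrow> complex) \<Rightarrow> bool" where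
  "supported A X \<longleftrightarrow> (\<forall>a b. (a \<notin> A \<or> b \<notin> A) \<longrightarrow> X a b = 0)"

lemma mmul_eq_mat_mul: "mmul dims I = mat_mul (idx dims I)"
  by (simp add: fun_eq_iff mmul_def mat_mul_def)

lemma op_supported_eq_supported: "op_supported dims I = supported (idx dims I)"
  by (simp add: fun_eq_iff op_supported_def supported_def)

lemma mat_mul_assoc: "mat_mul A (mat_mul A X Y) Z = mat_mul A X (mat_mul A Y Z)"
proof (intro ext)
  fix a b
  have "mat_mul A (mat_mul A X Y) Z a b = (\<Sum>d\<in>A. \<Sum>c\<in>A. X a c * (Y c d * Z d b))"
    by (simp add: mat_mul_def sum_distrib_right mult.assoc)
  also have "\<dots> = (\<Sum>c\<in>A. \<Sum>d\<in>A. X a c * (Y c d * Z d b))" by (rule sum.swap)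
  also have "\<dots> = mat_mul A X (mat_mul A Y Z) a b" by (simp add: mat_mul_def sum_distrib_left)
  finally show "mat_mul A (mat_mul A X Y) Z a b = mat_mul A X (mat_mul A Y Z) a b" .
qed

lemma mat_adj_mat_adj [simp]: "mat_adj (mat_adj X) = X" by (simp add: mat_adj_def)

lemma mat_adj_mat_mul: "mat_adj (mat_mul A X Y) = mat_mul A (mat_adj Y) (mat_adj X)"
  by (simp add: mat_adj_def mat_mul_def fun_eq_iff mult.commute)

lemma supported_spectral_mat: "supported A (spectral_mat A S f u)" by (simp add: supported_def spectral_mat_def)

lemma mat_adj_spectral_mat: "mat_adj (spectral_mat A S f u) = spectral_mat A S (\<lambda>\<alpha>. cnj (f \<alpha>)) u"
  by (auto simp: mat_adj_def spectral_mat_def fun_eq_iff mult_ac)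

lemma mat_mul_spectral_mat:
  assumes fin: "finite A" and on: "orthonormal A u S"
  shows "mat_mul A (spectral_mat A S f u) (spectral_mat A S g u) = spectral_mat A S (\<lambda>\<alpha>. f \<alpha> * g \<alpha>) u"
proof (intro ext)
  fix a b
  show "mat_mul A (spectral_mat A S f u) (spectral_mat A S g u) a b = spectral_mat A S (\<lambda>\<alpha>. f \<alpha> * g \<alpha>) u a b"
  proof (cases "a \<in> A \<and> b \<in> A")
    case True
    have "mat_mul A (spectral_mat A S f u) (spectral_mat A S g u) a b =
        (\<Sum>c\<in>A. (\<Sum>\<alpha><S. f \<alpha> * u \<alpha> a * cnj (u \<alpha> c)) * (\<Sum>\<beta><S. g \<beta> * u \<beta> c * cnj (u \<beta> b)))"
      using True by (simp add: mat_mul_def spectral_mat_def)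
    also have "\<dots> = (\<Sum>c\<in>A. \<Sum>\<alpha><S. \<Sum>\<beta><S. f \<alpha> * u \<alpha> a * (g \<beta> * cnj (u \<beta> b)) * (u \<beta> c * cnj (u \<alpha> c)))"
      by (simp add: sum_product mult_ac)
    also have "\<dots> = (\<Sum>\<alpha><S. \<Sum>c\<in>A. \<Sum>\<beta><S. f \<alpha> * u \<alpha> a * (g \<beta> * cnj (u \<beta> b)) * (u \<beta> c * cnj (u \<alpha> c)))"
      by (rule sum.swap)
    also have "\<dots> = (\<Sum>\<alpha><S. \<Sum>\<beta><S. \<Sum>c\<in>A. f \<alpha> * u \<alpha> a * (g \<beta> * cnj (u \<beta> b)) * (u \<beta> c * cnj (u \<alpha> c)))"
      by (intro sum.cong refl) (rule sum.swap)
    also have "\<dots> = (\<Sum>\<alpha><S. \<Sum>\<beta><S. f \<alpha> * u \<alpha> a * (g \<beta> * cnj (u \<beta> b)) * (\<Sum>c\<in>A. u \<beta> c * cnj (u \<alpha> c)))"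
      by (simp only: sum_distrib_left)
    also have "\<dots> = (\<Sum>\<alpha><S. \<Sum>\<beta><S. if \<beta> = \<alpha> then f \<alpha> * u \<alpha> a * (g \<beta> * cnj (u \<beta> b)) else 0)"
      using on by (intro sum.cong refl) (auto simp: orthonormal_def cinner_def)
    also have "\<dots> = spectral_mat A S (\<lambda>\<alpha>. f \<alpha> * g \<alpha>) u a b"
      using True by (simp add: spectral_mat_def mult_ac)
    finally show ?thesis .
  qed (auto simp: mat_mul_def spectral_mat_def)
qed

definition mat_vec :: "'a set \<Rightarrow> ('a \<Rightarrow> 'a \<Rightarrow> complex) \<Rightarrow> ('a \<Rightarrow> complex) \<Rightarrow> ('a \<Rightarrow> complex)" where
  "mat_vec A X x = (\<lambda>a. \<Sum>b\<in>A. X a b * x b)"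

lemma mapp_eq_mat_vec: "mapp dims I = mat_vec (idx dims I)"
  by (simp add: fun_eq_iff mapp_def mat_vec_def)

lemma mat_vec_mat_mul: "mat_vec A (mat_mul A X Y) x = mat_vec A X (mat_vec A Y x)"
proof (intro ext)
  fix a
  have "mat_vec A (mat_mul A X Y) x a = (\<Sum>b\<in>A. \<Sum>c\<in>A. X a c * (Y c b * x b))"
    by (simp add: mat_vec_def mat_mul_def sum_distrib_right mult.assoc)
  also have "\<dots> = (\<Sum>c\<in>A. \<Sum>b\<in>A. X a c * (Y c b * x b))" by (rule sum.swap)
  also have "\<dots> = mat_vec A X (mat_vec A Y x) a" by (simp add: mat_vec_def sum_distrib_left)
  finally show "mat_vec A (mat_mul A X Y) x a = mat_vec A X (mat_vec A Y x) a" .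
qed

lemma mat_vec_unit: "finite A \<Longrightarrow> b \<in> A \<Longrightarrow> mat_vec A X (\<lambda>c. if c = b then 1 else 0) a = X a b"
proof -
  assume "finite A" "b \<in> A"
  have "mat_vec A X (\<lambda>c. if c = b then 1 else 0) a = (\<Sum>c\<in>A. if c = b then X a b else 0)"
    unfolding mat_vec_def by (rule sum.cong) auto
  then show ?thesis using \<open>finite A\<close> \<open>b \<in> A\<close> by simp
qed

lemma mat_mul_range_absorb:
  assumes fin: "finite A" and Qi: "mat_mul A Q Q = Q" and sP: "supported A P"
    and rng: "range (mat_vec A P) \<subseteq> range (mat_vec A Q)"
  shows "mat_mul A Q P = P"
proof (intro ext)
  fix a b
  show "mat_mul A Q P a b = P a b"
  proof (cases "b \<in> A")
    case False then show ?thesis using sP by (simp add: mat_mul_def supported_def)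
  next
    case True
    define e where "e = (\<lambda>c. if c = b then (1::complex) else 0)"
    from rng obtain z where z: "mat_vec A P e = mat_vec A Q z" by blast
    have "mat_vec A Q (mat_vec A P e) = mat_vec A P e"
      unfolding z mat_vec_mat_mul[symmetric] Qi ..
    hence "mat_vec A (mat_mul A Q P) e = mat_vec A P e" by (simp add: mat_vec_mat_mul)
    then show ?thesis using mat_vec_unit[OF fin True] unfolding e_def by metis
  qed
qed

lemma projection_eqI_range:
  assumes fin: "finite A"
    and sP: "supported A P" and iP: "mat_mul A P P = P" and hP: "mat_adj P = P"
    and sQ: "supported A Q" and iQ: "mat_mul A Q Q = Q" and hQ: "mat_adj Q = Q"
    and rng: "range (mat_vec A P) = range (mat_vec A Q)"
  shows "P = Q"
proof -
  have QP: "mat_mul A Q P = P" by (rule mat_mul_range_absorb[OF fin iQ sP]) (use rng in simp)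
  have PQ: "mat_mul A P Q = Q" by (rule mat_mul_range_absorb[OF fin iP sQ]) (use rng in simp)
  have "P = mat_adj (mat_mul A Q P)" using QP hP by simp
  also have "\<dots> = mat_mul A P Q" by (simp add: mat_adj_mat_mul hP hQ)
  finally show ?thesis using PQ by simp
qed

lemma selfadjoint_iff: "mat_adj X = X \<longleftrightarrow> (\<forall>a b. X b a = cnj (X a b))"
  unfolding mat_adj_def fun_eq_iff by metis

lemma range_mat_vec_eqI:
  assumes PR: "mat_mul A P R = R" and RQ: "mat_mul A R Q = P"
  shows "range (mat_vec A P) = range (mat_vec A R)"
proof (intro subset_antisym subsetI)
  fix y assume "y \<in> range (mat_vec A P)"
  then obtain x where "y = mat_vec A P x" by blast
  also have "\<dots> = mat_vec A R (mat_vec A Q x)" by (subst RQ[symmetric]) (rule mat_vec_mat_mul)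
  finally show "y \<in> range (mat_vec A R)" by blast
next
  fix y assume "y \<in> range (mat_vec A R)"
  then obtain x where "y = mat_vec A R x" by blast
  also have "\<dots> = mat_vec A P (mat_vec A R x)" by (subst PR[symmetric]) (rule mat_vec_mat_mul)
  finally show "y \<in> range (mat_vec A P)" by blast
qed

lemma supp_proj_eqI:
  assumes fin: "finite (idx dims I)"
    and P: "supported (idx dims I) P" "mat_mul (idx dims I) P P = P" "mat_adj P = P"
    and rng: "range (mat_vec (idx dims I) P) = range (mat_vec (idx dims I) (rho_red n dims psi I))"
  shows "supp_proj n dims psi I = P"
  unfolding supp_proj_def
proof (rule the_equality)
  show "op_supported dims I P \<and> mmul dims I P P = P \<and> (\<forall>a b. P b a = cnj (P a b)) \<and>
      range (mapp dims I P) = range (mapp dims I (rho_red n dims psi I))"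
    unfolding op_supported_eq_supported mmul_eq_mat_mul mapp_eq_mat_vec
    using P(1,2) rng selfadjoint_iff[THEN iffD1, OF P(3)] by blast
  fix Q assume Q: "op_supported dims I Q \<and> mmul dims I Q Q = Q \<and> (\<forall>a b. Q b a = cnj (Q a b)) \<and>
      range (mapp dims I Q) = range (mapp dims I (rho_red n dims psi I))"
  then have "supported (idx dims I) Q" "mat_mul (idx dims I) Q Q = Q" "mat_adj Q = Q"
    unfolding op_supported_eq_supported mmul_eq_mat_mul selfadjoint_iff by blast+
  moreover from Q have "range (mat_vec (idx dims I) Q) = range (mat_vec (idx dims I) P)"
    unfolding mapp_eq_mat_vec rng by blast
  ultimately show "Q = P" by (rule projection_eqI_range[OF fin _ _ _ P])
qed

lemma spectral_mat_cong: "(\<And>\<alpha>. \<alpha> < S \<Longrightarrow> f \<alpha> = g \<alpha>) \<Longrightarrow> spectral_mat A S f u = spectral_mat A S g u"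
  unfolding spectral_mat_def by (intro ext if_cong refl sum.cong) auto

lemma spectral_mat_selfadjoint: "(\<And>\<alpha>. \<alpha> < S \<Longrightarrow> cnj (f \<alpha>) = f \<alpha>) \<Longrightarrow> mat_adj (spectral_mat A S f u) = spectral_mat A S f u"
  unfolding mat_adj_spectral_mat by (rule spectral_mat_cong) simp

definition sesq :: "'a set \<Rightarrow> ('a \<Rightarrow> 'a \<Rightarrow> complex) \<Rightarrow> ('a \<Rightarrow> complex) \<Rightarrow> ('a \<Rightarrow> complex) \<Rightarrow> complex" where
  "sesq A X p q = (\<Sum>a\<in>A. \<Sum>b\<in>A. cnj (p a) * X a b * q b)"

lemma mat_entry_eq_sesq: "mat_entry dims I x M y = sesq (idx dims I) M x y"
  by (simp add: mat_entry_def sesq_def)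

lemma sesq_cong: "(\<And>a. a \<in> A \<Longrightarrow> p a = p' a) \<Longrightarrow> (\<And>a. a \<in> A \<Longrightarrow> q a = q' a) \<Longrightarrow> sesq A X p q = sesq A X p' q'"
  by (simp add: sesq_def)

lemma sesq_sum_expand:
  "sesq A X (\<lambda>c. \<Sum>\<alpha><S. p \<alpha> * f \<alpha> c) (\<lambda>c. \<Sum>\<beta><S'. q \<beta> * g \<beta> c) =
   (\<Sum>\<alpha><S. \<Sum>\<beta><S'. cnj (p \<alpha>) * q \<beta> * sesq A X (f \<alpha>) (g \<beta>))"
proof -
  have "sesq A X (\<lambda>c. \<Sum>\<alpha><S. p \<alpha> * f \<alpha> c) (\<lambda>c. \<Sum>\<beta><S'. q \<beta> * g \<beta> c) =
      (\<Sum>a\<in>A. \<Sum>b\<in>A. \<Sum>\<alpha><S. \<Sum>\<beta><S'. cnj (p \<alpha>) * q \<beta> * (cnj (f \<alpha> a) * X a b * g \<beta> b))"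
    by (simp add: sesq_def sum_product sum_distrib_left sum_distrib_right mult_ac)
  also have "\<dots> = (\<Sum>a\<in>A. \<Sum>\<alpha><S. \<Sum>b\<in>A. \<Sum>\<beta><S'. cnj (p \<alpha>) * q \<beta> * (cnj (f \<alpha> a) * X a b * g \<beta> b))"
    by (intro sum.cong refl) (rule sum.swap)
  also have "\<dots> = (\<Sum>\<alpha><S. \<Sum>a\<in>A. \<Sum>b\<in>A. \<Sum>\<beta><S'. cnj (p \<alpha>) * q \<beta> * (cnj (f \<alpha> a) * X a b * g \<beta> b))"
    by (rule sum.swap)
  also have "\<dots> = (\<Sum>\<alpha><S. \<Sum>a\<in>A. \<Sum>\<beta><S'. \<Sum>b\<in>A. cnj (p \<alpha>) * q \<beta> * (cnj (f \<alpha> a) * X a b * g \<beta> b))"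
    by (intro sum.cong refl) (rule sum.swap)
  also have "\<dots> = (\<Sum>\<alpha><S. \<Sum>\<beta><S'. \<Sum>a\<in>A. \<Sum>b\<in>A. cnj (p \<alpha>) * q \<beta> * (cnj (f \<alpha> a) * X a b * g \<beta> b))"
    by (intro sum.cong refl) (rule sum.swap)
  also have "\<dots> = (\<Sum>\<alpha><S. \<Sum>\<beta><S'. cnj (p \<alpha>) * q \<beta> * sesq A X (f \<alpha>) (g \<beta>))"
    by (simp add: sesq_def sum_distrib_left)
  finally show ?thesis .
qed

lemma sesq_sandwich:
  assumes hs: "mat_adj s = s"
    and fp: "\<And>a. a \<in> A \<Longrightarrow> (\<Sum>a'\<in>A. s a a' * p a') = p a"
    and fq: "\<And>a. a \<in> A \<Longrightarrow> (\<Sum>a'\<in>A. s a a' * q a') = q a"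
  shows "sesq A (mat_mul A (mat_mul A s X) s) p q = sesq A X p q"
proof -
  have ps: "(\<Sum>a\<in>A. cnj (p a) * s a b) = cnj (p b)" if b: "b \<in> A" for b
  proof -
    have "s a b = cnj (s b a)" for a using hs unfolding mat_adj_def by metis
    then have "(\<Sum>a\<in>A. cnj (p a) * s a b) = cnj (\<Sum>a\<in>A. s b a * p a)" by (simp add: mult.commute)
    then show ?thesis using fp[OF b] by simp
  qed
  have "sesq A (mat_mul A (mat_mul A s X) s) p q = (\<Sum>a\<in>A. \<Sum>a'\<in>A. cnj (p a) * (\<Sum>b'\<in>A. (\<Sum>b\<in>A. s a b * X b b') * s b' a') * q a')"
    by (simp add: sesq_def mat_mul_def)
  also have "\<dots> = (\<Sum>a\<in>A. \<Sum>a'\<in>A. \<Sum>b'\<in>A. \<Sum>b\<in>A. cnj (p a) * s a b * X b b' * (s b' a' * q a'))"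
    by (intro sum.cong refl) (simp add: sum_distrib_left sum_distrib_right mult_ac)
  also have "\<dots> = (\<Sum>a\<in>A. \<Sum>b'\<in>A. \<Sum>a'\<in>A. \<Sum>b\<in>A. cnj (p a) * s a b * X b b' * (s b' a' * q a'))"
    by (rule sum.cong[OF refl], rule sum.swap)
  also have "\<dots> = (\<Sum>a\<in>A. \<Sum>b'\<in>A. \<Sum>b\<in>A. \<Sum>a'\<in>A. cnj (p a) * s a b * X b b' * (s b' a' * q a'))"
    by (rule sum.cong[OF refl], rule sum.cong[OF refl], rule sum.swap)
  also have "\<dots> = (\<Sum>a\<in>A. \<Sum>b'\<in>A. \<Sum>b\<in>A. cnj (p a) * s a b * X b b' * q b')"
    by (intro sum.cong refl) (simp add: sum_distrib_left[symmetric] fq)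
  also have "\<dots> = (\<Sum>b'\<in>A. \<Sum>a\<in>A. \<Sum>b\<in>A. cnj (p a) * s a b * X b b' * q b')"
    by (rule sum.swap)
  also have "\<dots> = (\<Sum>b'\<in>A. \<Sum>b\<in>A. \<Sum>a\<in>A. cnj (p a) * s a b * X b b' * q b')"
    by (rule sum.cong[OF refl], rule sum.swap)
  also have "\<dots> = (\<Sum>b'\<in>A. \<Sum>b\<in>A. cnj (p b) * X b b' * q b')"
    by (intro sum.cong refl) (simp add: sum_distrib_right[symmetric] ps)
  also have "\<dots> = sesq A X p q"
    unfolding sesq_def by (rule sum.swap)
  finally show ?thesis .
qed

lemma spectral_proj_fixes_span:
  assumes on: "orthonormal A v S" and c: "c \<in> A"
    and w: "\<And>c. c \<in> A \<Longrightarrow> w c = (\<Sum>\<alpha><S. k \<alpha> * v \<alpha> c)"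
  shows "(\<Sum>c'\<in>A. spectral_mat A S (\<lambda>_. 1) v c c' * w c') = w c"
proof -
  have "(\<Sum>c'\<in>A. spectral_mat A S (\<lambda>_. 1) v c c' * w c') = (\<Sum>c'\<in>A. \<Sum>\<alpha><S. v \<alpha> c * (w c' * cnj (v \<alpha> c')))"
    using c by (intro sum.cong refl) (simp add: spectral_mat_def sum_distrib_left sum_distrib_right mult_ac)
  also have "\<dots> = (\<Sum>\<alpha><S. v \<alpha> c * cinner A w (v \<alpha>))"
    by (subst sum.swap) (simp add: cinner_def sum_distrib_left)
  also have "\<dots> = (\<Sum>\<alpha><S. k \<alpha> * v \<alpha> c)"
  proof (intro sum.cong refl)
    fix \<alpha> assume "\<alpha> \<in> {..<S}"
    have "cinner A w (v \<alpha>) = cinner A (\<lambda>c. \<Sum>\<beta><S. k \<beta> * v \<beta> c) (v \<alpha>)"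
      by (rule cinner_cong) (simp_all add: w)
    then show "v \<alpha> c * cinner A w (v \<alpha>) = k \<alpha> * v \<alpha> c"
      using cinner_orthonormal_sum[OF on] \<open>\<alpha> \<in> {..<S}\<close> by simp
  qed
  also have "\<dots> = w c" using c by (simp add: w)
  finally show ?thesis .
qed

lemma orthonormal_coeff:
  assumes on: "orthonormal A v S" and b: "\<beta> < S"
  shows "(\<Sum>c\<in>A. cnj (v \<beta> c) * (\<Sum>\<alpha><S. k \<alpha> * v \<alpha> c)) = k \<beta>"
  using cinner_orthonormal_sum[OF on b, of k] by (simp add: cinner_def mult.commute)

lemma orthonormal_parseval:
  assumes on: "orthonormal A v S"
  shows "(\<Sum>c\<in>A. (\<Sum>\<alpha><S. p \<alpha> * v \<alpha> c) * cnj (\<Sum>\<beta><S. q \<beta> * v \<beta> c)) = (\<Sum>\<alpha><S. p \<alpha> * cnj (q \<alpha>))"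
proof -
  have "(\<Sum>c\<in>A. (\<Sum>\<alpha><S. p \<alpha> * v \<alpha> c) * cnj (\<Sum>\<beta><S. q \<beta> * v \<beta> c)) =
      cinner A (\<lambda>c. \<Sum>\<alpha><S. p \<alpha> * v \<alpha> c) (\<lambda>c. \<Sum>\<beta><S. q \<beta> * v \<beta> c)"
    by (simp add: cinner_def)
  also have "\<dots> = (\<Sum>\<alpha><S. \<Sum>\<beta><S. p \<alpha> * cnj (q \<beta>) * cinner A (v \<alpha>) (v \<beta>))"
    by (simp add: cinner_sum_left cinner_sum_right cinner_scale_left cinner_scale_right sum_distrib_left mult_ac)
  also have "\<dots> = (\<Sum>\<alpha><S. \<Sum>\<beta><S. if \<alpha> = \<beta> then p \<alpha> * cnj (q \<beta>) else 0)"
    using on by (intro sum.cong refl) (auto simp: orthonormal_def)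
  finally show ?thesis by simp
qed

lemma sesq_mat_adj: "sesq A (mat_adj Y) p q = cnj (sesq A Y q p)"
proof -
  have "sesq A (mat_adj Y) p q = (\<Sum>a\<in>A. \<Sum>b\<in>A. cnj (p a) * cnj (Y b a) * q b)" by (simp add: sesq_def mat_adj_def)
  also have "\<dots> = (\<Sum>b\<in>A. \<Sum>a\<in>A. cnj (p a) * cnj (Y b a) * q b)" by (rule sum.swap)
  also have "\<dots> = cnj (sesq A Y q p)" by (simp add: sesq_def mult_ac)
  finally show ?thesis .
qed

lemma sum_swap_pairs: "(\<Sum>x\<in>A. \<Sum>y\<in>A. \<Sum>z\<in>B. \<Sum>w\<in>B. f x y z w) = (\<Sum>z\<in>B. \<Sum>w\<in>B. \<Sum>x\<in>A. \<Sum>y\<in>A. f x y z w)"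
proof -
  have "(\<Sum>x\<in>A. \<Sum>y\<in>A. \<Sum>z\<in>B. \<Sum>w\<in>B. f x y z w) = (\<Sum>x\<in>A. \<Sum>z\<in>B. \<Sum>y\<in>A. \<Sum>w\<in>B. f x y z w)"
    by (rule sum.cong[OF refl], rule sum.swap)
  also have "\<dots> = (\<Sum>z\<in>B. \<Sum>x\<in>A. \<Sum>y\<in>A. \<Sum>w\<in>B. f x y z w)" by (rule sum.swap)
  also have "\<dots> = (\<Sum>z\<in>B. \<Sum>x\<in>A. \<Sum>w\<in>B. \<Sum>y\<in>A. f x y z w)"
    by (rule sum.cong[OF refl], rule sum.cong[OF refl], rule sum.swap)
  also have "\<dots> = (\<Sum>z\<in>B. \<Sum>w\<in>B. \<Sum>x\<in>A. \<Sum>y\<in>A. f x y z w)"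
    by (rule sum.cong[OF refl], rule sum.swap)
  finally show ?thesis .
qed

lemma sum_card_Suc_subsets:
  assumes U: "finite U"
  shows "(\<Sum>I\<in>{I. I \<subseteq> U \<and> card I = Suc m}. \<Sum>j\<in>I. F (I - {j}) j) =
    (\<Sum>J\<in>{J. J \<subseteq> U \<and> card J = m}. \<Sum>j\<in>U - J. F J j)"
proof -
  have fin: "finite {I. I \<subseteq> U \<and> card I = k}" for k
    using U by (auto intro: finite_subset[of _ "Pow U"])
  have "(\<Sum>I\<in>{I. I \<subseteq> U \<and> card I = Suc m}. \<Sum>j\<in>I. F (I - {j}) j) =
      (\<Sum>(I, j)\<in>Sigma {I. I \<subseteq> U \<and> card I = Suc m} (\<lambda>I. I). F (I - {j}) j)"
    using fin U by (subst sum.Sigma) (auto intro: finite_subset)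
  also have "\<dots> = (\<Sum>(J, j)\<in>Sigma {J. J \<subseteq> U \<and> card J = m} (\<lambda>J. U - J). F J j)"
    by (rule sum.reindex_bij_witness[of _ "\<lambda>(J, j). (insert j J, j)" "\<lambda>(I, j). (I - {j}, j)"])
      (auto simp: insert_absorb finite_subset[OF _ U])
  also have "\<dots> = (\<Sum>J\<in>{J. J \<subseteq> U \<and> card J = m}. \<Sum>j\<in>U - J. F J j)"
    using fin U by (subst sum.Sigma) auto
  finally show ?thesis .
qed

section \<open>Schmidt decompositions of the state\<close>

locale pure_state =
  fixes n :: nat and dims :: "nat \<Rightarrow> nat" and psi :: "mindex \<Rightarrow> complex"
  assumes unit: "unit_state n dims psi"
begin

abbreviation parties where "parties \<equiv> {0..<n}"

lemma finite_idx_subset: "I \<subseteq> parties \<Longrightarrow> finite (idx dims I)"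
  by (rule finite_idx) (auto intro: finite_subset)

lemma finite_idx_compl: "finite (idx dims (parties - I))"
  by (rule finite_idx) auto

lemma schmidt_decomposition_exists: "I \<subseteq> parties \<Longrightarrow> \<exists>S lam u v. schmidt n dims psi I S lam u v"
proof -
  assume IU: "I \<subseteq> parties"
  interpret gram_factor "idx dims I" "idx dims (parties - I)" "\<lambda>a c. psi (Defs.merge I a c)"
    by unfold_locales (use IU finite_idx_subset finite_idx_compl in auto)
  show ?thesis unfolding schmidt_def by (rule singular_value_decomposition)
qed

definition "schmidt_rank I = fst (schmidt_choice n dims psi I)"
definition "schmidt_coeff I = fst (snd (schmidt_choice n dims psi I))"
definition "schmidt_left I = fst (snd (snd (schmidt_choice n dims psi I)))"
definition "schmidt_right I = snd (snd (snd (schmidt_choice n dims psi I)))"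

lemma schmidt_choice_eq: "schmidt_choice n dims psi I = (schmidt_rank I, schmidt_coeff I, schmidt_left I, schmidt_right I)"
  by (simp add: schmidt_rank_def schmidt_coeff_def schmidt_left_def schmidt_right_def)

lemma schmidt_chosen: "I \<subseteq> parties \<Longrightarrow> schmidt n dims psi I (schmidt_rank I) (schmidt_coeff I) (schmidt_left I) (schmidt_right I)"
proof -
  assume IU: "I \<subseteq> parties"
  from schmidt_decomposition_exists[OF IU] obtain S lam u v where "schmidt n dims psi I S lam u v" by blast
  hence ex: "\<exists>p. (\<lambda>(S, lam, u, v). schmidt n dims psi I S lam u v) p"
    by (intro exI[of _ "(S, lam, u, v)"]) simp
  have "(\<lambda>(S, lam, u, v). schmidt n dims psi I S lam u v) (schmidt_choice n dims psi I)"
    unfolding schmidt_choice_def by (rule someI_ex[OF ex])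
  then show ?thesis by (simp add: schmidt_choice_eq)
qed

context
  fixes I S lam u v
  assumes IU: "I \<subseteq> parties" and sch: "schmidt n dims psi I S lam u v"
begin

lemma schmidt_lam_pos: "\<alpha> < S \<Longrightarrow> lam \<alpha> > 0" using sch by (simp add: schmidt_def)

lemma schmidt_left_orthonormal: "orthonormal (idx dims I) u S"
  using sch by (simp add: schmidt_def orthonormal_def cinner_def)

lemma schmidt_right_orthonormal: "orthonormal (idx dims (parties - I)) v S"
  using sch by (simp add: schmidt_def orthonormal_def cinner_def)

lemma schmidt_expand: "a \<in> idx dims I \<Longrightarrow> c \<in> idx dims (parties - I) \<Longrightarrow>
    psi (Defs.merge I a c) = (\<Sum>\<alpha><S. complex_of_real (lam \<alpha>) * u \<alpha> a * v \<alpha> c)"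
  using sch by (simp add: schmidt_def)

lemma schmidt_swap: "schmidt n dims psi (parties - I) S lam v u"
proof -
  have "psi (Defs.merge (parties - I) c a) = (\<Sum>\<alpha><S. complex_of_real (lam \<alpha>) * v \<alpha> c * u \<alpha> a)"
    if c: "c \<in> idx dims (parties - I)" and a: "a \<in> idx dims I" for a c
    using schmidt_expand[OF a c] merge_compl_swap[OF IU a c] by (simp add: mult_ac)
  then show ?thesis using sch diff_diff_subset[OF IU] unfolding schmidt_def by simp
qed

lemma rho_red_spectral: "rho_red n dims psi I = spectral_mat (idx dims I) S (\<lambda>\<alpha>. of_real ((lam \<alpha>)^2)) u"
proof (intro ext)
  fix a b
  show "rho_red n dims psi I a b = spectral_mat (idx dims I) S (\<lambda>\<alpha>. of_real ((lam \<alpha>)^2)) u a b"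
  proof (cases "a \<in> idx dims I \<and> b \<in> idx dims I")
    case True
    have "rho_red n dims psi I a b = (\<Sum>c\<in>idx dims (parties - I).
        (\<Sum>\<alpha><S. (of_real (lam \<alpha>) * u \<alpha> a) * v \<alpha> c) * cnj (\<Sum>\<beta><S. (of_real (lam \<beta>) * u \<beta> b) * v \<beta> c))"
      using True by (simp add: rho_red_def schmidt_expand mult.assoc)
    also have "\<dots> = (\<Sum>\<alpha><S. of_real (lam \<alpha>) * u \<alpha> a * cnj (of_real (lam \<alpha>) * u \<alpha> b))"
      by (rule orthonormal_parseval[OF schmidt_right_orthonormal])
    finally show ?thesis using True by (simp add: spectral_mat_def power2_eq_square mult_ac)
  qed (auto simp: rho_red_def spectral_mat_def)
qed

lemma schmidt_spectral_decomp: "spectral_decomp (idx dims I) (rho_red n dims psi I) S lam u"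
  using schmidt_left_orthonormal schmidt_lam_pos by (simp add: spectral_decomp_def rho_red_spectral spectral_mat_def)

lemma supp_proj_spectral: "supp_proj n dims psi I = spectral_mat (idx dims I) S (\<lambda>_. 1) u"
proof (rule supp_proj_eqI[OF finite_idx_subset[OF IU]])
  let ?A = "idx dims I" and ?P = "spectral_mat (idx dims I) S (\<lambda>_. 1) u"
  note mul = mat_mul_spectral_mat[OF finite_idx_subset[OF IU] schmidt_left_orthonormal]
  show "supported ?A ?P" by (rule supported_spectral_mat)
  show "mat_mul ?A ?P ?P = ?P" by (simp add: mul)
  show "mat_adj ?P = ?P" by (rule spectral_mat_selfadjoint) simp
  show "range (mat_vec ?A ?P) = range (mat_vec ?A (rho_red n dims psi I))"
  proof (rule range_mat_vec_eqI)
    show "mat_mul ?A ?P (rho_red n dims psi I) = rho_red n dims psi I"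
      by (simp add: rho_red_spectral mul)
    show "mat_mul ?A (rho_red n dims psi I) (spectral_mat ?A S (\<lambda>\<alpha>. of_real (1 / (lam \<alpha>)^2)) u) = ?P"
      unfolding rho_red_spectral mul by (intro spectral_mat_cong) (frule schmidt_lam_pos, simp add: field_simps)
  qed
qed

lemma supp_proj_fixes_psi_schmidt:
  assumes a: "a \<in> idx dims I" and c: "c \<in> idx dims (parties - I)"
  shows "(\<Sum>a'\<in>idx dims I. supp_proj n dims psi I a a' * psi (Defs.merge I a' c)) = psi (Defs.merge I a c)"
  unfolding supp_proj_spectral
  by (rule spectral_proj_fixes_span[OF schmidt_left_orthonormal a, where k = "\<lambda>\<alpha>. of_real (lam \<alpha>) * v \<alpha> c"])
    (simp add: schmidt_expand c mult_ac)

end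

text \<open>\<open>\<langle>\<psi>| X \<otimes> C |\<psi>\<rangle>\<close> for \<open>X\<close> acting on \<open>H\<^sub>I\<close> and \<open>C\<close> on \<open>H\<^bsub>I\<^sup>C\<^esub>\<close>.\<close>
definition tensor_expect where
  "tensor_expect I X C = (\<Sum>a\<in>idx dims I. \<Sum>a'\<in>idx dims I. \<Sum>c\<in>idx dims (parties - I). \<Sum>c'\<in>idx dims (parties - I).
      cnj (psi (Defs.merge I a c)) * X a a' * C c c' * psi (Defs.merge I a' c'))"

lemma tensor_expect_sesq_compl: "tensor_expect I X C = (\<Sum>a\<in>idx dims I. \<Sum>a'\<in>idx dims I. X a a' *
    sesq (idx dims (parties - I)) C (\<lambda>c. psi (Defs.merge I a c)) (\<lambda>c. psi (Defs.merge I a' c)))"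
  unfolding tensor_expect_def sesq_def
  by (rule sum.cong[OF refl], rule sum.cong[OF refl]) (simp add: sum_distrib_left mult_ac)

lemma tensor_expect_sesq_subsys: "tensor_expect I X C = (\<Sum>c\<in>idx dims (parties - I). \<Sum>c'\<in>idx dims (parties - I). C c c' *
    sesq (idx dims I) X (\<lambda>a. psi (Defs.merge I a c)) (\<lambda>a. psi (Defs.merge I a c')))"
proof -
  let ?A = "idx dims I" and ?K = "idx dims (parties - I)"
  let ?F = "\<lambda>a a' c c'. cnj (psi (Defs.merge I a c)) * X a a' * C c c' * psi (Defs.merge I a' c')"
  have "tensor_expect I X C = (\<Sum>a\<in>?A. \<Sum>a'\<in>?A. \<Sum>c\<in>?K. \<Sum>c'\<in>?K. ?F a a' c c')" by (simp add: tensor_expect_def)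
  also have "\<dots> = (\<Sum>a\<in>?A. \<Sum>c\<in>?K. \<Sum>a'\<in>?A. \<Sum>c'\<in>?K. ?F a a' c c')"
    by (rule sum.cong[OF refl], rule sum.swap)
  also have "\<dots> = (\<Sum>c\<in>?K. \<Sum>a\<in>?A. \<Sum>a'\<in>?A. \<Sum>c'\<in>?K. ?F a a' c c')"
    by (rule sum.swap)
  also have "\<dots> = (\<Sum>c\<in>?K. \<Sum>a\<in>?A. \<Sum>c'\<in>?K. \<Sum>a'\<in>?A. ?F a a' c c')"
    by (rule sum.cong[OF refl], rule sum.cong[OF refl], rule sum.swap)
  also have "\<dots> = (\<Sum>c\<in>?K. \<Sum>c'\<in>?K. \<Sum>a\<in>?A. \<Sum>a'\<in>?A. ?F a a' c c')"
    by (rule sum.cong[OF refl], rule sum.swap)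
  also have "\<dots> = (\<Sum>c\<in>?K. \<Sum>c'\<in>?K. C c c' * sesq ?A X (\<lambda>a. psi (Defs.merge I a c)) (\<lambda>a. psi (Defs.merge I a c')))"
    unfolding sesq_def
    by (rule sum.cong[OF refl], rule sum.cong[OF refl]) (simp add: sum_distrib_left mult_ac)
  finally show ?thesis .
qed

lemma restrict_rho_mat_mul: "restrict_rho n dims psi I X =
    mat_mul (idx dims I) (mat_mul (idx dims I) (supp_proj n dims psi I) X) (supp_proj n dims psi I)"
  by (simp add: restrict_rho_def mmul_eq_mat_mul)

lemma supp_proj_selfadjoint: "I \<subseteq> parties \<Longrightarrow> mat_adj (supp_proj n dims psi I) = supp_proj n dims psi I"
  using supp_proj_spectral[OF _ schmidt_chosen] by (simp add: spectral_mat_selfadjoint)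

lemma supported_supp_proj: "I \<subseteq> parties \<Longrightarrow> supported (idx dims I) (supp_proj n dims psi I)"
  using supp_proj_spectral[OF _ schmidt_chosen] by (simp add: supported_spectral_mat)

lemma supp_proj_idem: "I \<subseteq> parties \<Longrightarrow> mat_mul (idx dims I) (supp_proj n dims psi I) (supp_proj n dims psi I) = supp_proj n dims psi I"
  using supp_proj_spectral[OF _ schmidt_chosen] mat_mul_spectral_mat[OF finite_idx_subset schmidt_left_orthonormal[OF _ schmidt_chosen]] by simp

lemma supp_proj_fixes_psi: "I \<subseteq> parties \<Longrightarrow> a \<in> idx dims I \<Longrightarrow> c \<in> idx dims (parties - I) \<Longrightarrow>
    (\<Sum>a'\<in>idx dims I. supp_proj n dims psi I a a' * psi (Defs.merge I a' c)) = psi (Defs.merge I a c)"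
  by (rule supp_proj_fixes_psi_schmidt[OF _ schmidt_chosen])

lemma supp_proj_compl_fixes_psi:
  assumes IU: "I \<subseteq> parties" and a: "a \<in> idx dims I" and c: "c \<in> idx dims (parties - I)"
  shows "(\<Sum>c'\<in>idx dims (parties - I). supp_proj n dims psi (parties - I) c c' * psi (Defs.merge I a c')) = psi (Defs.merge I a c)"
proof -
  have KU: "parties - I \<subseteq> parties" by auto
  have sw: "schmidt n dims psi (parties - I) (schmidt_rank I) (schmidt_coeff I) (schmidt_right I) (schmidt_left I)"
    by (rule schmidt_swap[OF IU schmidt_chosen[OF IU]])
  have a': "a \<in> idx dims (parties - (parties - I))" using a diff_diff_subset[OF IU] by simp
  have "(\<Sum>c'\<in>idx dims (parties - I). supp_proj n dims psi (parties - I) c c' * psi (Defs.merge (parties - I) c' a)) = psi (Defs.merge (parties - I) c a)"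
    by (rule supp_proj_fixes_psi_schmidt[OF KU sw c a'])
  moreover have "psi (Defs.merge (parties - I) c' a) = psi (Defs.merge I a c')" if "c' \<in> idx dims (parties - I)" for c'
    using merge_compl_swap[OF IU a that] by simp
  ultimately show ?thesis using merge_compl_swap[OF IU a c] by simp
qed

lemma tensor_expect_restrict_left: "I \<subseteq> parties \<Longrightarrow> tensor_expect I (restrict_rho n dims psi I X) C = tensor_expect I X C"
  unfolding tensor_expect_sesq_subsys restrict_rho_mat_mul
  by (intro sum.cong refl arg_cong2[where f="(*)"] sesq_sandwich supp_proj_selfadjoint supp_proj_fixes_psi) auto

lemma tensor_expect_restrict_right: "I \<subseteq> parties \<Longrightarrow> tensor_expect I X (restrict_rho n dims psi (parties - I) C) = tensor_expect I X C"
  unfolding tensor_expect_sesq_compl restrict_rho_mat_mul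
  by (intro sum.cong refl arg_cong2[where f="(*)"] sesq_sandwich supp_proj_selfadjoint supp_proj_compl_fixes_psi) auto

lemma tensor_expect_schmidt:
  assumes IU: "I \<subseteq> parties" and sch: "schmidt n dims psi I S lam u v"
  shows "tensor_expect I X C = (\<Sum>\<alpha><S. \<Sum>\<beta><S. complex_of_real (lam \<alpha> * lam \<beta>) *
      sesq (idx dims I) X (u \<alpha>) (u \<beta>) * sesq (idx dims (parties - I)) C (v \<alpha>) (v \<beta>))"
proof -
  let ?A = "idx dims I" and ?K = "idx dims (parties - I)"
  define B where "B \<alpha> \<beta> = sesq ?K C (v \<alpha>) (v \<beta>)" for \<alpha> \<beta>
  have row: "sesq ?K C (\<lambda>c. psi (Defs.merge I a c)) (\<lambda>c. psi (Defs.merge I a' c)) =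
      (\<Sum>\<alpha><S. \<Sum>\<beta><S. cnj (complex_of_real (lam \<alpha>) * u \<alpha> a) * (complex_of_real (lam \<beta>) * u \<beta> a') * B \<alpha> \<beta>)"
    if a: "a \<in> ?A" and a': "a' \<in> ?A" for a a'
  proof -
    have "sesq ?K C (\<lambda>c. psi (Defs.merge I a c)) (\<lambda>c. psi (Defs.merge I a' c)) =
        sesq ?K C (\<lambda>c. \<Sum>\<alpha><S. (complex_of_real (lam \<alpha>) * u \<alpha> a) * v \<alpha> c) (\<lambda>c. \<Sum>\<beta><S. (complex_of_real (lam \<beta>) * u \<beta> a') * v \<beta> c)"
      by (rule sesq_cong) (simp_all add: schmidt_expand[OF IU sch] a a' mult.assoc)
    then show ?thesis by (simp only: sesq_sum_expand B_def)
  qed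
  let ?F = "\<lambda>a a' \<alpha> \<beta>. X a a' * (cnj (complex_of_real (lam \<alpha>) * u \<alpha> a) * (complex_of_real (lam \<beta>) * u \<beta> a') * B \<alpha> \<beta>)"
  have "tensor_expect I X C = (\<Sum>a\<in>?A. \<Sum>a'\<in>?A. \<Sum>\<alpha><S. \<Sum>\<beta><S. ?F a a' \<alpha> \<beta>)"
    unfolding tensor_expect_sesq_compl by (intro sum.cong refl) (simp add: row sum_distrib_left)
  also have "\<dots> = (\<Sum>a\<in>?A. \<Sum>\<alpha><S. \<Sum>a'\<in>?A. \<Sum>\<beta><S. ?F a a' \<alpha> \<beta>)"
    by (rule sum.cong[OF refl], rule sum.swap)
  also have "\<dots> = (\<Sum>\<alpha><S. \<Sum>a\<in>?A. \<Sum>a'\<in>?A. \<Sum>\<beta><S. ?F a a' \<alpha> \<beta>)"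
    by (rule sum.swap)
  also have "\<dots> = (\<Sum>\<alpha><S. \<Sum>a\<in>?A. \<Sum>\<beta><S. \<Sum>a'\<in>?A. ?F a a' \<alpha> \<beta>)"
    by (rule sum.cong[OF refl], rule sum.cong[OF refl], rule sum.swap)
  also have "\<dots> = (\<Sum>\<alpha><S. \<Sum>\<beta><S. \<Sum>a\<in>?A. \<Sum>a'\<in>?A. ?F a a' \<alpha> \<beta>)"
    by (rule sum.cong[OF refl], rule sum.swap)
  also have "\<dots> = (\<Sum>\<alpha><S. \<Sum>\<beta><S. complex_of_real (lam \<alpha> * lam \<beta>) * sesq ?A X (u \<alpha>) (u \<beta>) * B \<alpha> \<beta>)"
    unfolding sesq_def
    by (rule sum.cong[OF refl], rule sum.cong[OF refl]) (simp add: sum_distrib_left sum_distrib_right mult_ac)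
  finally show ?thesis by (simp only: B_def)
qed

text \<open>\<open>W = \<Sum>\<^sub>\<alpha> u\<^sub>\<alpha> \<otimes> v\<^sub>\<alpha>\<close> is the isometric part of \<open>\<psi> = (\<rho>\<^sub>I\<^sup>1\<^sup>/\<^sup>2 \<otimes> 1) W\<close>; it
  identifies the supports of \<open>\<rho>\<^sub>I\<close> and \<open>\<rho>\<^bsub>I\<^sup>C\<^esub>\<close> (antilinearly), and \<open>transfer I\<close>
  carries operators on the first support to operators on the second.  Up to a sign this is
  the Hodge star on components.\<close>
definition schmidt_polar where "schmidt_polar I a c = (\<Sum>\<alpha><schmidt_rank I. schmidt_left I \<alpha> a * schmidt_right I \<alpha> c)"

definition transfer where
  "transfer I Y = (\<lambda>c c'. if c \<in> idx dims (parties - I) \<and> c' \<in> idx dims (parties - I) then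
     (\<Sum>a\<in>idx dims I. \<Sum>a'\<in>idx dims I. Y a a' * schmidt_polar I a' c * cnj (schmidt_polar I a c')) else 0)"

lemma schmidt_polar_formula:
  assumes IU: "I \<subseteq> parties" and sch: "schmidt n dims psi I S lam u v"
    and a: "a \<in> idx dims I" and c: "c \<in> idx dims (parties - I)"
  shows "(\<Sum>\<alpha><S. u \<alpha> a * v \<alpha> c) =
    (\<Sum>a'\<in>idx dims I. (\<Sum>\<alpha><S. complex_of_real (1 / lam \<alpha>) * u \<alpha> a * cnj (u \<alpha> a')) * psi (Defs.merge I a' c))"
proof -
  let ?A = "idx dims I"
  have "(\<Sum>a'\<in>?A. (\<Sum>\<alpha><S. complex_of_real (1 / lam \<alpha>) * u \<alpha> a * cnj (u \<alpha> a')) * psi (Defs.merge I a' c)) =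
      (\<Sum>a'\<in>?A. (\<Sum>\<alpha><S. complex_of_real (1 / lam \<alpha>) * u \<alpha> a * cnj (u \<alpha> a')) *
         (\<Sum>\<beta><S. complex_of_real (lam \<beta>) * u \<beta> a' * v \<beta> c))"
    by (intro sum.cong refl) (simp add: schmidt_expand[OF IU sch _ c])
  also have "\<dots> = (\<Sum>a'\<in>?A. \<Sum>\<alpha><S. \<Sum>\<beta><S. (complex_of_real (1 / lam \<alpha>) * u \<alpha> a * cnj (u \<alpha> a')) * (complex_of_real (lam \<beta>) * u \<beta> a' * v \<beta> c))"
    by (simp only: sum_product)
  also have "\<dots> = (\<Sum>\<alpha><S. \<Sum>a'\<in>?A. \<Sum>\<beta><S. (complex_of_real (1 / lam \<alpha>) * u \<alpha> a * cnj (u \<alpha> a')) * (complex_of_real (lam \<beta>) * u \<beta> a' * v \<beta> c))"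
    by (rule sum.swap)
  also have "\<dots> = (\<Sum>\<alpha><S. \<Sum>\<beta><S. \<Sum>a'\<in>?A. (complex_of_real (1 / lam \<alpha>) * u \<alpha> a * cnj (u \<alpha> a')) * (complex_of_real (lam \<beta>) * u \<beta> a' * v \<beta> c))"
    by (rule sum.cong[OF refl], rule sum.swap)
  also have "\<dots> = (\<Sum>\<alpha><S. \<Sum>\<beta><S. (complex_of_real (1 / lam \<alpha>) * u \<alpha> a) * (complex_of_real (lam \<beta>) * v \<beta> c) * (\<Sum>a'\<in>?A. u \<beta> a' * cnj (u \<alpha> a')))"
    by (intro sum.cong refl) (simp add: sum_distrib_left sum_divide_distrib mult_ac)
  also have "\<dots> = (\<Sum>\<alpha><S. \<Sum>\<beta><S. if \<beta> = \<alpha> then (complex_of_real (1 / lam \<alpha>) * u \<alpha> a) * (complex_of_real (lam \<beta>) * v \<beta> c) else 0)"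
    using schmidt_left_orthonormal[OF IU sch] by (intro sum.cong refl) (auto simp: orthonormal_def cinner_def)
  also have "\<dots> = (\<Sum>\<alpha><S. u \<alpha> a * v \<alpha> c)"
  proof (intro sum.cong refl)
    fix \<alpha> assume "\<alpha> \<in> {..<S}"
    then have "lam \<alpha> \<noteq> 0" using schmidt_lam_pos[OF IU sch] by fastforce
    then show "(\<Sum>\<beta><S. if \<beta> = \<alpha> then (complex_of_real (1 / lam \<alpha>) * u \<alpha> a) * (complex_of_real (lam \<beta>) * v \<beta> c) else 0) = u \<alpha> a * v \<alpha> c"
      using \<open>\<alpha> \<in> {..<S}\<close> by (simp add: field_simps)
  qed
  finally show ?thesis by simp
qed

text \<open>\<open>W = (\<rho>\<^sub>I\<^sup>-\<^sup>1\<^sup>/\<^sup>2 \<otimes> 1) \<psi>\<close> does not depend on the Schmidt decomposition.  This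
  matters because the decomposition chosen for \<open>I\<^sup>C\<close> need not be the swap of the one chosen
  for \<open>I\<close>.\<close>
lemma schmidt_polar_indep:
  assumes IU: "I \<subseteq> parties" and sch: "schmidt n dims psi I S lam u v" and sch': "schmidt n dims psi I S' lam' u' v'"
    and a: "a \<in> idx dims I" and c: "c \<in> idx dims (parties - I)"
  shows "(\<Sum>\<alpha><S. u \<alpha> a * v \<alpha> c) = (\<Sum>\<beta><S'. u' \<beta> a * v' \<beta> c)"
  unfolding schmidt_polar_formula[OF IU sch a c] schmidt_polar_formula[OF IU sch' a c]
  using spectral_function_unique[OF schmidt_spectral_decomp[OF IU sch] schmidt_spectral_decomp[OF IU sch'] a,
      of _ "\<lambda>x. of_real (1 / x)"]
  by simp

lemma schmidt_polar_compl:
  assumes IU: "I \<subseteq> parties" and a: "a \<in> idx dims I" and c: "c \<in> idx dims (parties - I)"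
  shows "schmidt_polar (parties - I) c a = schmidt_polar I a c"
proof -
  have KU: "parties - I \<subseteq> parties" by auto
  have sw: "schmidt n dims psi (parties - I) (schmidt_rank I) (schmidt_coeff I) (schmidt_right I) (schmidt_left I)"
    by (rule schmidt_swap[OF IU schmidt_chosen[OF IU]])
  have a': "a \<in> idx dims (parties - (parties - I))" using a diff_diff_subset[OF IU] by simp
  have "schmidt_polar (parties - I) c a = (\<Sum>\<alpha><schmidt_rank I. schmidt_right I \<alpha> c * schmidt_left I \<alpha> a)"
    unfolding schmidt_polar_def by (rule schmidt_polar_indep[OF KU schmidt_chosen[OF KU] sw c a'])
  then show ?thesis by (simp add: schmidt_polar_def mult.commute)
qed

lemma schmidt_polar_gram:
  assumes IU: "I \<subseteq> parties" and a: "a \<in> idx dims I" and b: "b \<in> idx dims I"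
  shows "(\<Sum>c\<in>idx dims (parties - I). schmidt_polar I a c * cnj (schmidt_polar I b c)) = supp_proj n dims psi I a b"
proof -
  have "(\<Sum>c\<in>idx dims (parties - I). schmidt_polar I a c * cnj (schmidt_polar I b c)) = (\<Sum>\<alpha><schmidt_rank I. schmidt_left I \<alpha> a * cnj (schmidt_left I \<alpha> b))"
    unfolding schmidt_polar_def
    using orthonormal_parseval[OF schmidt_right_orthonormal[OF IU schmidt_chosen[OF IU]], of "\<lambda>\<alpha>. schmidt_left I \<alpha> a" "\<lambda>\<alpha>. schmidt_left I \<alpha> b"] by simp
  then show ?thesis using a b by (simp add: supp_proj_spectral[OF IU schmidt_chosen[OF IU]] spectral_mat_def)
qed

lemma supported_transfer: "supported (idx dims (parties - I)) (transfer I Y)"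
  by (simp add: supported_def transfer_def)

lemma transfer_add: "transfer I (\<lambda>a b. Y1 a b + Y2 a b) = (\<lambda>c c'. transfer I Y1 c c' + transfer I Y2 c c')"
  by (auto simp: transfer_def fun_eq_iff sum.distrib distrib_right)

lemma transfer_scale: "transfer I (\<lambda>a b. k * Y a b) = (\<lambda>c c'. k * transfer I Y c c')"
  by (auto simp: transfer_def fun_eq_iff sum_distrib_left mult.assoc)

lemma transfer_zero: "transfer I (\<lambda>a b. 0) = (\<lambda>c c'. 0)"
  by (auto simp: transfer_def fun_eq_iff)

lemma supp_proj_fixes_schmidt_polar:
  assumes IU: "I \<subseteq> parties" and a: "a \<in> idx dims I" and c: "c \<in> idx dims (parties - I)"
  shows "(\<Sum>d\<in>idx dims (parties - I). supp_proj n dims psi (parties - I) c d * schmidt_polar I a d) = schmidt_polar I a c"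
proof -
  have KU: "parties - I \<subseteq> parties" by auto
  have sw: "schmidt n dims psi (parties - I) (schmidt_rank I) (schmidt_coeff I) (schmidt_right I) (schmidt_left I)"
    by (rule schmidt_swap[OF IU schmidt_chosen[OF IU]])
  show ?thesis
    unfolding supp_proj_spectral[OF KU sw]
    by (rule spectral_proj_fixes_span[OF schmidt_left_orthonormal[OF KU sw] c]) (simp add: schmidt_polar_def)
qed

lemma selfadjoint_entry: "mat_adj X = X \<Longrightarrow> X a b = cnj (X b a)"
  unfolding mat_adj_def by metis

lemma supp_proj_compl_mul_transfer:
  assumes IU: "I \<subseteq> parties"
  shows "mat_mul (idx dims (parties - I)) (supp_proj n dims psi (parties - I)) (transfer I Y) = transfer I Y"
proof (intro ext)
  fix c c'
  let ?K = "idx dims (parties - I)" and ?A = "idx dims I"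
  let ?s = "supp_proj n dims psi (parties - I)"
  show "mat_mul ?K ?s (transfer I Y) c c' = transfer I Y c c'"
  proof (cases "c \<in> ?K \<and> c' \<in> ?K")
    case True
    have "mat_mul ?K ?s (transfer I Y) c c' = (\<Sum>d\<in>?K. \<Sum>a\<in>?A. \<Sum>a'\<in>?A. Y a a' * cnj (schmidt_polar I a c') * (?s c d * schmidt_polar I a' d))"
      using True by (simp add: mat_mul_def transfer_def sum_distrib_left mult_ac)
    also have "\<dots> = (\<Sum>a\<in>?A. \<Sum>a'\<in>?A. \<Sum>d\<in>?K. Y a a' * cnj (schmidt_polar I a c') * (?s c d * schmidt_polar I a' d))"
      by (subst sum.swap) (rule sum.cong[OF refl], rule sum.swap)
    also have "\<dots> = (\<Sum>a\<in>?A. \<Sum>a'\<in>?A. Y a a' * cnj (schmidt_polar I a c') * schmidt_polar I a' c)"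
      using True by (intro sum.cong refl) (simp add: sum_distrib_left[symmetric] supp_proj_fixes_schmidt_polar[OF IU])
    also have "\<dots> = transfer I Y c c'" using True by (simp add: transfer_def mult_ac)
    finally show ?thesis .
  next
    case False
    then show ?thesis
      using supported_supp_proj[of "parties - I"] by (auto simp: mat_mul_def transfer_def supported_def)
  qed
qed

lemma mat_adj_transfer: "mat_adj (transfer I Y) = transfer I (mat_adj Y)"
proof (intro ext)
  fix c c'
  let ?A = "idx dims I"
  have "(\<Sum>a\<in>?A. \<Sum>a'\<in>?A. cnj (Y a a') * cnj (schmidt_polar I a' c') * schmidt_polar I a c) =
      (\<Sum>a'\<in>?A. \<Sum>a\<in>?A. cnj (Y a a') * cnj (schmidt_polar I a' c') * schmidt_polar I a c)" by (rule sum.swap)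
  then show "mat_adj (transfer I Y) c c' = transfer I (mat_adj Y) c c'"
    by (simp add: mat_adj_def transfer_def mult_ac)
qed

lemma restrict_rho_transfer:
  assumes IU: "I \<subseteq> parties"
  shows "restrict_rho n dims psi (parties - I) (transfer I Y) = transfer I Y"
proof -
  let ?K = "idx dims (parties - I)" and ?s = "supp_proj n dims psi (parties - I)"
  have "mat_mul ?K (transfer I Y) ?s = mat_adj (mat_mul ?K ?s (transfer I (mat_adj Y)))"
    by (simp add: mat_adj_mat_mul mat_adj_transfer supp_proj_selfadjoint)
  also have "\<dots> = transfer I Y"
    by (simp add: supp_proj_compl_mul_transfer[OF IU] mat_adj_transfer)
  finally show ?thesis
    by (simp add: restrict_rho_mat_mul supp_proj_compl_mul_transfer[OF IU])
qed

lemma transfer_transfer: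
  assumes IU: "I \<subseteq> parties" and sY: "supported (idx dims I) Y" and rY: "restrict_rho n dims psi I Y = Y"
  shows "transfer (parties - I) (transfer I Y) = Y"
proof (intro ext)
  fix a a'
  let ?A = "idx dims I" and ?K = "idx dims (parties - I)"
  let ?s = "supp_proj n dims psi I"
  show "transfer (parties - I) (transfer I Y) a a' = Y a a'"
  proof (cases "a \<in> ?A \<and> a' \<in> ?A")
    case False
    then show ?thesis using sY by (auto simp: transfer_def diff_diff_subset[OF IU] supported_def)
  next
    case True
    then have a: "a \<in> ?A" and a': "a' \<in> ?A" by auto
    have "transfer (parties - I) (transfer I Y) a a' = (\<Sum>c\<in>?K. \<Sum>c'\<in>?K. transfer I Y c c' * schmidt_polar I a c' * cnj (schmidt_polar I a' c))"
      using True by (simp add: transfer_def diff_diff_subset[OF IU] schmidt_polar_compl[OF IU])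
    also have "\<dots> = (\<Sum>c\<in>?K. \<Sum>c'\<in>?K. \<Sum>b\<in>?A. \<Sum>b'\<in>?A. Y b b' * (schmidt_polar I b' c * cnj (schmidt_polar I a' c)) * (schmidt_polar I a c' * cnj (schmidt_polar I b c')))"
      by (intro sum.cong refl) (simp add: transfer_def sum_distrib_left sum_distrib_right mult_ac)
    also have "\<dots> = (\<Sum>b\<in>?A. \<Sum>b'\<in>?A. \<Sum>c\<in>?K. \<Sum>c'\<in>?K. Y b b' * (schmidt_polar I b' c * cnj (schmidt_polar I a' c)) * (schmidt_polar I a c' * cnj (schmidt_polar I b c')))"
      by (rule sum_swap_pairs[symmetric])
    also have "\<dots> = (\<Sum>b\<in>?A. \<Sum>b'\<in>?A. Y b b' * (\<Sum>c\<in>?K. schmidt_polar I b' c * cnj (schmidt_polar I a' c)) * (\<Sum>c'\<in>?K. schmidt_polar I a c' * cnj (schmidt_polar I b c')))"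
      by (intro sum.cong refl) (simp add: sum_product sum_distrib_left mult_ac)
    also have "\<dots> = (\<Sum>b\<in>?A. \<Sum>b'\<in>?A. Y b b' * ?s b' a' * ?s a b)"
      using a a' by (intro sum.cong refl) (simp add: schmidt_polar_gram[OF IU])
    also have "\<dots> = mat_mul ?A (mat_mul ?A ?s Y) ?s a a'"
    proof -
      have "mat_mul ?A (mat_mul ?A ?s Y) ?s a a' = (\<Sum>b'\<in>?A. \<Sum>b\<in>?A. ?s a b * Y b b' * ?s b' a')"
        by (simp add: mat_mul_def sum_distrib_right)
      also have "\<dots> = (\<Sum>b\<in>?A. \<Sum>b'\<in>?A. ?s a b * Y b b' * ?s b' a')" by (rule sum.swap)
      finally show ?thesis by (simp add: mult_ac)
    qed
    also have "\<dots> = Y a a'" using rY by (simp add: restrict_rho_mat_mul)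
    finally show ?thesis .
  qed
qed

lemma sesq_transfer:
  assumes IU: "I \<subseteq> parties" and al: "\<alpha> < schmidt_rank I" and be: "\<beta> < schmidt_rank I"
  shows "sesq (idx dims (parties - I)) (transfer I Y) (schmidt_right I \<alpha>) (schmidt_right I \<beta>) = sesq (idx dims I) Y (schmidt_left I \<beta>) (schmidt_left I \<alpha>)"
proof -
  let ?A = "idx dims I" and ?K = "idx dims (parties - I)"
  have onv: "orthonormal ?K (schmidt_right I) (schmidt_rank I)" by (rule schmidt_right_orthonormal[OF IU schmidt_chosen[OF IU]])
  have p1: "(\<Sum>c\<in>?K. cnj (schmidt_right I \<alpha> c) * schmidt_polar I a' c) = schmidt_left I \<alpha> a'" for a'
    unfolding schmidt_polar_def using orthonormal_coeff[OF onv al, of "\<lambda>\<gamma>. schmidt_left I \<gamma> a'"] by (simp add: mult.commute)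
  have p2: "(\<Sum>c'\<in>?K. cnj (schmidt_polar I a c') * schmidt_right I \<beta> c') = cnj (schmidt_left I \<beta> a)" for a
  proof -
    have "(\<Sum>c'\<in>?K. cnj (schmidt_right I \<beta> c') * schmidt_polar I a c') = schmidt_left I \<beta> a"
      unfolding schmidt_polar_def using orthonormal_coeff[OF onv be, of "\<lambda>\<gamma>. schmidt_left I \<gamma> a"] by (simp add: mult.commute)
    then have "cnj (\<Sum>c'\<in>?K. cnj (schmidt_right I \<beta> c') * schmidt_polar I a c') = cnj (schmidt_left I \<beta> a)" by simp
    then show ?thesis by (simp add: mult.commute)
  qed
  have "sesq ?K (transfer I Y) (schmidt_right I \<alpha>) (schmidt_right I \<beta>) =
      (\<Sum>c\<in>?K. \<Sum>c'\<in>?K. \<Sum>a\<in>?A. \<Sum>a'\<in>?A. Y a a' * (cnj (schmidt_right I \<alpha> c) * schmidt_polar I a' c) * (cnj (schmidt_polar I a c') * schmidt_right I \<beta> c'))"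
    unfolding sesq_def by (intro sum.cong refl) (simp add: transfer_def sum_distrib_left sum_distrib_right mult_ac)
  also have "\<dots> = (\<Sum>a\<in>?A. \<Sum>a'\<in>?A. \<Sum>c\<in>?K. \<Sum>c'\<in>?K. Y a a' * (cnj (schmidt_right I \<alpha> c) * schmidt_polar I a' c) * (cnj (schmidt_polar I a c') * schmidt_right I \<beta> c'))"
    by (rule sum_swap_pairs[symmetric])
  also have "\<dots> = (\<Sum>a\<in>?A. \<Sum>a'\<in>?A. Y a a' * (\<Sum>c\<in>?K. cnj (schmidt_right I \<alpha> c) * schmidt_polar I a' c) * (\<Sum>c'\<in>?K. cnj (schmidt_polar I a c') * schmidt_right I \<beta> c'))"
    by (intro sum.cong refl) (simp add: sum_product sum_distrib_left mult_ac)
  also have "\<dots> = (\<Sum>a\<in>?A. \<Sum>a'\<in>?A. Y a a' * schmidt_left I \<alpha> a' * cnj (schmidt_left I \<beta> a))"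
    by (simp add: p1 p2)
  also have "\<dots> = sesq ?A Y (schmidt_left I \<beta>) (schmidt_left I \<alpha>)"
    by (simp add: sesq_def mult_ac)
  finally show ?thesis .
qed

section \<open>Entanglement forms and the Hodge star\<close>

definition form_comp where "form_comp I X \<longleftrightarrow> supported (idx dims I) X \<and> restrict_rho n dims psi I X = X"

lemma card_compl: "I \<subseteq> parties \<Longrightarrow> card (parties - I) = n - card I"
  by (simp add: card_Diff_subset finite_subset)

lemma supported_sandwich: "supported A s \<Longrightarrow> supported A (mat_mul A (mat_mul A s X) s)"
  by (auto simp: supported_def mat_mul_def)

lemma supported_restrict_rho: "I \<subseteq> parties \<Longrightarrow> supported (idx dims I) (restrict_rho n dims psi I X)"
  unfolding restrict_rho_mat_mul by (rule supported_sandwich[OF supported_supp_proj])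

lemma restrict_rho_idem: "I \<subseteq> parties \<Longrightarrow> restrict_rho n dims psi I (restrict_rho n dims psi I X) = restrict_rho n dims psi I X"
proof -
  assume IU: "I \<subseteq> parties"
  let ?A = "idx dims I" and ?s = "supp_proj n dims psi I"
  have ss: "mat_mul ?A ?s ?s = ?s" by (rule supp_proj_idem[OF IU])
  have "mat_mul ?A ?s (mat_mul ?A (mat_mul ?A ?s X) ?s) = mat_mul ?A (mat_mul ?A ?s X) ?s"
    by (simp add: mat_mul_assoc[symmetric] ss)
  moreover have "mat_mul ?A (mat_mul ?A (mat_mul ?A ?s X) ?s) ?s = mat_mul ?A (mat_mul ?A ?s X) ?s"
    by (simp add: mat_mul_assoc ss)
  ultimately show ?thesis unfolding restrict_rho_mat_mul by (simp add: mat_mul_assoc)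
qed

lemma form_comp_iff: "I \<subseteq> parties \<Longrightarrow> (\<exists>X. op_supported dims I X \<and> Y = restrict_rho n dims psi I X) \<longleftrightarrow> form_comp I Y"
proof
  assume IU: "I \<subseteq> parties"
  assume "\<exists>X. op_supported dims I X \<and> Y = restrict_rho n dims psi I X"
  then obtain X where "Y = restrict_rho n dims psi I X" by blast
  then show "form_comp I Y" using IU by (simp add: form_comp_def supported_restrict_rho restrict_rho_idem)
next
  assume "form_comp I Y"
  then show "\<exists>X. op_supported dims I X \<and> Y = restrict_rho n dims psi I X"
    by (intro exI[of _ Y]) (simp add: form_comp_def op_supported_eq_supported)
qed

lemma mem_Omega_iff: "\<omega> \<in> Omega n dims psi k \<longleftrightarrow>
    (\<forall>I. (I \<subseteq> parties \<and> card I = k \<longrightarrow> form_comp I (\<omega> I)) \<and> (\<not> (I \<subseteq> parties \<and> card I = k) \<longrightarrow> \<omega> I = (\<lambda>a b. 0)))"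
  unfolding Omega_def using form_comp_iff by auto

lemma Omega_comp: "\<omega> \<in> Omega n dims psi k \<Longrightarrow> I \<subseteq> parties \<Longrightarrow> card I = k \<Longrightarrow> form_comp I (\<omega> I)"
  by (simp add: mem_Omega_iff)

lemma Omega_outside: "\<omega> \<in> Omega n dims psi k \<Longrightarrow> \<not> (I \<subseteq> parties \<and> card I = k) \<Longrightarrow> \<omega> I = (\<lambda>a b. 0)"
  by (simp add: mem_Omega_iff)

lemma OmegaI: "(\<And>I. I \<subseteq> parties \<Longrightarrow> card I = k \<Longrightarrow> form_comp I (\<omega> I)) \<Longrightarrow> (\<And>I. \<not> (I \<subseteq> parties \<and> card I = k) \<Longrightarrow> \<omega> I = (\<lambda>a b. 0))
   \<Longrightarrow> \<omega> \<in> Omega n dims psi k"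
  by (simp add: mem_Omega_iff)

lemma restrict_rho_scale: "restrict_rho n dims psi I (\<lambda>a b. k * X a b) = (\<lambda>a b. k * restrict_rho n dims psi I X a b)"
  by (simp add: restrict_rho_mat_mul mat_mul_def fun_eq_iff sum_distrib_left sum_distrib_right mult_ac)

lemma restrict_rho_add: "restrict_rho n dims psi I (\<lambda>a b. X a b + Y a b) = (\<lambda>a b. restrict_rho n dims psi I X a b + restrict_rho n dims psi I Y a b)"
  by (simp add: restrict_rho_mat_mul mat_mul_def fun_eq_iff sum.distrib distrib_left distrib_right)

lemma form_comp_scale: "form_comp I X \<Longrightarrow> form_comp I (\<lambda>a b. k * X a b)"
  by (simp add: form_comp_def restrict_rho_scale supported_def)

lemma form_comp_add: "form_comp I X \<Longrightarrow> form_comp I Y \<Longrightarrow> form_comp I (\<lambda>a b. X a b + Y a b)"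
  by (simp add: form_comp_def restrict_rho_add supported_def)

lemma form_comp_zero: "form_comp I (\<lambda>a b. 0)"
  using restrict_rho_scale[of I 0 "\<lambda>a b. 0"] by (simp add: form_comp_def supported_def)

lemma restrict_rho_mat_adj: "I \<subseteq> parties \<Longrightarrow> restrict_rho n dims psi I (mat_adj X) = mat_adj (restrict_rho n dims psi I X)"
  unfolding restrict_rho_mat_mul by (simp add: mat_adj_mat_mul supp_proj_selfadjoint mat_mul_assoc)

lemma form_comp_mat_adj: "I \<subseteq> parties \<Longrightarrow> form_comp I X \<Longrightarrow> form_comp I (mat_adj X)"
proof -
  assume IU: "I \<subseteq> parties" and om: "form_comp I X"
  have "restrict_rho n dims psi I (mat_adj X) = mat_adj X"
    using restrict_rho_mat_adj[OF IU, of X] om by (simp add: form_comp_def)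
  moreover have "supported (idx dims I) (mat_adj X)" using om by (auto simp: form_comp_def supported_def mat_adj_def)
  ultimately show ?thesis by (simp add: form_comp_def)
qed

definition party_sign :: "nat set \<Rightarrow> complex" where "party_sign I = (-1) ^ (\<Sum>I)"

lemma party_sign_square: "party_sign I * party_sign I = 1"
  by (simp add: party_sign_def power_add[symmetric] mult_2[symmetric] power_mult)

lemma party_sign_compl: "I \<subseteq> parties \<Longrightarrow> party_sign (parties - I) * party_sign I = party_sign parties"
proof -
  assume IU: "I \<subseteq> parties"
  have "\<Sum>parties = \<Sum>(parties - I) + \<Sum>I" using IU by (simp add: sum.subset_diff finite_subset)
  then show ?thesis by (simp add: party_sign_def power_add)
qed

definition hodge :: "nat \<Rightarrow> eform \<Rightarrow> eform" where
  "hodge k \<eta> = (\<lambda>K. if K \<subseteq> parties \<and> card K = n - k then (\<lambda>c c'. party_sign (parties - K) * transfer (parties - K) (\<eta> (parties - K)) c c') else (\<lambda>a b. 0))"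

lemma hodge_add: "hodge k (form_add x y) = form_add (hodge k x) (hodge k y)"
  by (auto simp: hodge_def form_add_def fun_eq_iff transfer_add[unfolded fun_eq_iff] distrib_left)

lemma hodge_scale: "hodge k (form_scale c x) = form_scale c (hodge k x)"
  by (auto simp: hodge_def form_scale_def fun_eq_iff transfer_scale[unfolded fun_eq_iff])

lemma hodge_Omega:
  assumes kn: "k \<le> n" and eta: "\<eta> \<in> Omega n dims psi k"
  shows "hodge k \<eta> \<in> Omega n dims psi (n - k)"
proof (rule OmegaI)
  fix K assume KU: "K \<subseteq> parties" and cK: "card K = n - k"
  have IU: "parties - K \<subseteq> parties" by auto
  have "form_comp K (transfer (parties - K) (\<eta> (parties - K)))"
    unfolding form_comp_def using restrict_rho_transfer[OF IU, of "\<eta> (parties - K)"] supported_transfer[of "parties - K" "\<eta> (parties - K)"]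
    by (simp add: diff_diff_subset[OF KU])
  then show "form_comp K (hodge k \<eta> K)" using KU cK by (simp add: hodge_def form_comp_scale)
next
  fix K assume "\<not> (K \<subseteq> parties \<and> card K = n - k)"
  then show "hodge k \<eta> K = (\<lambda>a b. 0)" by (auto simp: hodge_def)
qed

lemma hodge_hodge:
  assumes kn: "k \<le> n" and eta: "\<eta> \<in> Omega n dims psi k"
  shows "hodge (n - k) (hodge k \<eta>) = form_scale (party_sign parties) \<eta>"
proof (intro ext)
  fix I a b
  show "hodge (n - k) (hodge k \<eta>) I a b = form_scale (party_sign parties) \<eta> I a b"
  proof (cases "I \<subseteq> parties \<and> card I = k")
    case True
    then have IU: "I \<subseteq> parties" and cI: "card I = k" by auto
    have KU: "parties - I \<subseteq> parties" by auto
    have cK: "card (parties - I) = n - k" using card_compl[OF IU] cI by simp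
    have om: "form_comp I (\<eta> I)" by (rule Omega_comp[OF eta IU cI])
    have "hodge (n - k) (hodge k \<eta>) I = (\<lambda>c c'. party_sign (parties - I) * transfer (parties - I) (\<lambda>a b. party_sign I * transfer I (\<eta> I) a b) c c')"
      using IU cI cK kn by (simp add: hodge_def diff_diff_subset[OF IU])
    also have "\<dots> = (\<lambda>c c'. party_sign (parties - I) * party_sign I * transfer (parties - I) (transfer I (\<eta> I)) c c')"
      by (simp add: transfer_scale mult.assoc)
    also have "\<dots> = (\<lambda>c c'. party_sign parties * \<eta> I c c')"
      using transfer_transfer[OF IU] om party_sign_compl[OF IU] by (simp add: form_comp_def)
    finally show ?thesis by (simp add: form_scale_def)
  next
    case False
    have "\<eta> I = (\<lambda>a b. 0)" by (rule Omega_outside[OF eta False])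
    moreover have "n - (n - k) = k" using kn by simp
    ultimately show ?thesis using False by (auto simp: hodge_def form_scale_def)
  qed
qed

lemma tensor_expect_sum_left: "tensor_expect I (\<lambda>a b. \<Sum>j\<in>J. F j a b) C = (\<Sum>j\<in>J. tensor_expect I (F j) C)"
proof -
  let ?A = "idx dims I"
  let ?B = "\<lambda>a a'. sesq (idx dims (parties - I)) C (\<lambda>c. psi (Defs.merge I a c)) (\<lambda>c. psi (Defs.merge I a' c))"
  have "tensor_expect I (\<lambda>a b. \<Sum>j\<in>J. F j a b) C = (\<Sum>a\<in>?A. \<Sum>a'\<in>?A. \<Sum>j\<in>J. F j a a' * ?B a a')"
    unfolding tensor_expect_sesq_compl by (simp add: sum_distrib_right)
  also have "\<dots> = (\<Sum>a\<in>?A. \<Sum>j\<in>J. \<Sum>a'\<in>?A. F j a a' * ?B a a')"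
    by (rule sum.cong[OF refl], rule sum.swap)
  also have "\<dots> = (\<Sum>j\<in>J. \<Sum>a\<in>?A. \<Sum>a'\<in>?A. F j a a' * ?B a a')"
    by (rule sum.swap)
  also have "\<dots> = (\<Sum>j\<in>J. tensor_expect I (F j) C)" unfolding tensor_expect_sesq_compl ..
  finally show ?thesis .
qed

lemma tensor_expect_scale_left: "tensor_expect I (\<lambda>a b. k * X a b) C = k * tensor_expect I X C"
  unfolding tensor_expect_sesq_compl by (simp add: sum_distrib_left mult.assoc)

lemma tensor_expect_zero_left: "tensor_expect I (\<lambda>a b. 0) C = 0"
  unfolding tensor_expect_sesq_compl by simp

lemma tensor_expect_sum_right: "tensor_expect I X (\<lambda>a b. \<Sum>j\<in>J. F j a b) = (\<Sum>j\<in>J. tensor_expect I X (F j))"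
proof -
  let ?K = "idx dims (parties - I)"
  let ?B = "\<lambda>c c'. sesq (idx dims I) X (\<lambda>a. psi (Defs.merge I a c)) (\<lambda>a. psi (Defs.merge I a c'))"
  have "tensor_expect I X (\<lambda>a b. \<Sum>j\<in>J. F j a b) = (\<Sum>c\<in>?K. \<Sum>c'\<in>?K. \<Sum>j\<in>J. F j c c' * ?B c c')"
    unfolding tensor_expect_sesq_subsys by (simp add: sum_distrib_right)
  also have "\<dots> = (\<Sum>c\<in>?K. \<Sum>j\<in>J. \<Sum>c'\<in>?K. F j c c' * ?B c c')"
    by (rule sum.cong[OF refl], rule sum.swap)
  also have "\<dots> = (\<Sum>j\<in>J. \<Sum>c\<in>?K. \<Sum>c'\<in>?K. F j c c' * ?B c c')"
    by (rule sum.swap)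
  also have "\<dots> = (\<Sum>j\<in>J. tensor_expect I X (F j))" unfolding tensor_expect_sesq_subsys ..
  finally show ?thesis .
qed

lemma tensor_expect_scale_right: "tensor_expect I X (\<lambda>a b. k * C a b) = k * tensor_expect I X C"
  unfolding tensor_expect_sesq_subsys by (simp add: sum_distrib_left mult.assoc)

lemma tensor_expect_transfer_schmidt:
  assumes IU: "I \<subseteq> parties"
  shows "tensor_expect I X (mat_adj (transfer I Y)) = (\<Sum>\<alpha><schmidt_rank I. \<Sum>\<beta><schmidt_rank I. complex_of_real (schmidt_coeff I \<alpha> * schmidt_coeff I \<beta>) *
      sesq (idx dims I) X (schmidt_left I \<alpha>) (schmidt_left I \<beta>) * cnj (sesq (idx dims I) Y (schmidt_left I \<alpha>) (schmidt_left I \<beta>)))"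
  unfolding tensor_expect_schmidt[OF IU schmidt_chosen[OF IU]]
  by (intro sum.cong refl) (simp add: sesq_mat_adj sesq_transfer[OF IU])

text \<open>The only place where \<open>\<psi>\<close> being a unit vector is used.\<close>
lemma schmidt_empty: "schmidt_rank {} = 1 \<and> schmidt_coeff {} 0 = 1 \<and> schmidt_left {} 0 zidx * cnj (schmidt_left {} 0 zidx) = 1"
proof -
  have E: "{} \<subseteq> parties" by simp
  note sch = schmidt_chosen[OF E]
  have on: "orthonormal {zidx} (schmidt_left {}) (schmidt_rank {})" using schmidt_left_orthonormal[OF E sch] by (simp add: idx_empty)
  have S1: "schmidt_rank {} \<le> 1" using orthonormal_le_card[OF _ on] by simp
  have rho1: "rho_red n dims psi {} zidx zidx = 1"
  proof -
    have "rho_red n dims psi {} zidx zidx = (\<Sum>c\<in>idx dims parties. psi c * cnj (psi c))"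
      by (simp add: rho_red_def idx_empty Defs.merge_def)
    also have "\<dots> = of_real (\<Sum>c\<in>idx dims parties. (cmod (psi c))^2)"
      unfolding of_real_sum by (intro sum.cong refl) (simp only: complex_norm_square)
    also have "\<dots> = 1" using unit by (simp add: unit_state_def)
    finally show ?thesis .
  qed
  have rr: "rho_red n dims psi {} zidx zidx = (\<Sum>\<alpha><schmidt_rank {}. complex_of_real ((schmidt_coeff {} \<alpha>)^2) * schmidt_left {} \<alpha> zidx * cnj (schmidt_left {} \<alpha> zidx))"
    by (simp add: rho_red_spectral[OF E sch] spectral_mat_def idx_empty)
  have S0: "schmidt_rank {} \<noteq> 0"
  proof
    assume "schmidt_rank {} = 0"
    then have "rho_red n dims psi {} zidx zidx = 0" using rr by simp
    with rho1 show False by simp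
  qed
  with S1 have S: "schmidt_rank {} = 1" by simp
  have uu: "schmidt_left {} 0 zidx * cnj (schmidt_left {} 0 zidx) = 1"
    using on S by (simp add: orthonormal_def cinner_def)
  have "complex_of_real ((schmidt_coeff {} 0)^2) * (schmidt_left {} 0 zidx * cnj (schmidt_left {} 0 zidx)) = 1"
    using rho1 rr S by (simp add: mult.assoc)
  then have "complex_of_real ((schmidt_coeff {} 0)^2) = 1" using uu by simp
  then have "(schmidt_coeff {} 0)^2 = 1" by (metis of_real_1 of_real_eq_iff)
  moreover have "schmidt_coeff {} 0 > 0" using schmidt_lam_pos[OF E sch] S by simp
  ultimately have "schmidt_coeff {} 0 = 1" by (simp add: power2_eq_1_iff)
  with S uu show ?thesis by simp
qed

lemma card_0_subsets: "{I. I \<subseteq> parties \<and> card I = 0} = {{}}"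
  using finite_subset[OF _ finite_atLeastLessThan[of 0 n]] by (fastforce simp: card_eq_0_iff)

text \<open>The paper's \<open>\<langle>\<omega>, \<eta>\<rangle> = tr ((\<omega> \<and> \<star>\<eta>)|\<^sub>\<rho>)\<close>.\<close>
lemma inner_form_tensor_expect: "inner_form n dims psi k \<omega> \<eta> = (\<Sum>I\<in>{I. I \<subseteq> parties \<and> card I = k}. tensor_expect I (\<omega> I) (mat_adj (transfer I (\<eta> I))))"
proof (cases "k = 0")
  case True
  have f: "schmidt_rank {} = 1" "schmidt_coeff {} 0 = 1" "schmidt_left {} 0 zidx * cnj (schmidt_left {} 0 zidx) = 1"
    using schmidt_empty by blast+
  have b: "sesq {zidx} X (schmidt_left {} 0) (schmidt_left {} 0) = X zidx zidx" for X
    using f(3) by (simp add: sesq_def mult_ac)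
  have "tensor_expect {} (\<omega> {}) (mat_adj (transfer {} (\<eta> {}))) = \<omega> {} zidx zidx * cnj (\<eta> {} zidx zidx)"
    using tensor_expect_transfer_schmidt[of "{}" "\<omega> {}" "\<eta> {}"] f by (simp add: idx_empty b)
  then show ?thesis using True card_0_subsets by (simp add: inner_form_def)
next
  case False
  have "inner_form n dims psi k \<omega> \<eta> = (\<Sum>I\<in>{I. I \<subseteq> parties \<and> card I = k}.
      \<Sum>\<alpha><schmidt_rank I. \<Sum>\<beta><schmidt_rank I. complex_of_real (schmidt_coeff I \<alpha> * schmidt_coeff I \<beta>) *
      sesq (idx dims I) (\<omega> I) (schmidt_left I \<alpha>) (schmidt_left I \<beta>) * cnj (sesq (idx dims I) (\<eta> I) (schmidt_left I \<alpha>) (schmidt_left I \<beta>)))"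
    using False by (simp add: inner_form_def schmidt_choice_eq mat_entry_eq_sesq)
  also have "\<dots> = (\<Sum>I\<in>{I. I \<subseteq> parties \<and> card I = k}. tensor_expect I (\<omega> I) (mat_adj (transfer I (\<eta> I))))"
    by (intro sum.cong refl) (simp add: tensor_expect_transfer_schmidt)
  finally show ?thesis .
qed

lemma sum_delta_mult: "\<gamma> < (S::nat) \<Longrightarrow> (\<Sum>\<alpha><S. (if \<alpha> = \<gamma> then 1 else 0) * f \<alpha>) = (f \<gamma> :: complex)"
proof -
  assume g: "\<gamma> < S"
  have "(\<Sum>\<alpha><S. (if \<alpha> = \<gamma> then 1 else 0) * f \<alpha>) = (\<Sum>\<alpha><S. if \<alpha> = \<gamma> then f \<alpha> else 0)"
    by (intro sum.cong) auto
  also have "\<dots> = f \<gamma>" using g by (subst sum.remove[of _ \<gamma>]) auto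
  finally show ?thesis .
qed

lemma sum_delta_mult2:
  assumes "\<alpha> < (S::nat)" "\<beta> < S"
  shows "(\<Sum>\<gamma><S. \<Sum>\<delta><S. (if \<gamma> = \<alpha> then 1 else 0) * ((if \<delta> = \<beta> then 1 else 0) * g \<gamma> \<delta>)) = (g \<alpha> \<beta> :: complex)"
proof -
  have "(\<Sum>\<gamma><S. \<Sum>\<delta><S. (if \<gamma> = \<alpha> then 1 else 0) * ((if \<delta> = \<beta> then 1 else 0) * g \<gamma> \<delta>)) =
      (\<Sum>\<gamma><S. (if \<gamma> = \<alpha> then 1 else 0) * g \<gamma> \<beta>)"
    by (intro sum.cong refl) (simp add: sum_distrib_left[symmetric] sum_delta_mult assms(2))
  also have "\<dots> = g \<alpha> \<beta>" by (rule sum_delta_mult[OF assms(1)])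
  finally show ?thesis .
qed

definition rank_one :: "mindex set \<Rightarrow> (mindex \<Rightarrow> complex) \<Rightarrow> (mindex \<Rightarrow> complex) \<Rightarrow> qop" where
  "rank_one A p q = (\<lambda>a b. if a \<in> A \<and> b \<in> A then p a * cnj (q b) else 0)"

lemma rank_one_sandwich:
  assumes hs: "mat_adj s = s" and ss: "supported A s"
    and fp: "\<And>a. a \<in> A \<Longrightarrow> (\<Sum>a'\<in>A. s a a' * p a') = p a"
    and fq: "\<And>a. a \<in> A \<Longrightarrow> (\<Sum>a'\<in>A. s a a' * q a') = q a"
  shows "mat_mul A (mat_mul A s (rank_one A p q)) s = rank_one A p q"
proof (intro ext)
  fix a b
  show "mat_mul A (mat_mul A s (rank_one A p q)) s a b = rank_one A p q a b"
  proof (cases "a \<in> A \<and> b \<in> A")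
    case True
    have q2: "(\<Sum>e\<in>A. cnj (q e) * s e b) = cnj (q b)"
    proof -
      have "s e b = cnj (s b e)" for e using selfadjoint_entry[OF hs] by metis
      then have "(\<Sum>e\<in>A. cnj (q e) * s e b) = cnj (\<Sum>e\<in>A. s b e * q e)" by (simp add: mult.commute)
      then show ?thesis using fq True by simp
    qed
    have "mat_mul A (mat_mul A s (rank_one A p q)) s a b = (\<Sum>e\<in>A. (\<Sum>d\<in>A. s a d * (p d * cnj (q e))) * s e b)"
      using True by (simp add: mat_mul_def rank_one_def cong: sum.cong)
    also have "\<dots> = (\<Sum>e\<in>A. (\<Sum>d\<in>A. s a d * p d) * (cnj (q e) * s e b))"
      by (intro sum.cong refl) (simp add: sum_distrib_right sum_distrib_left mult_ac)
    also have "\<dots> = (\<Sum>d\<in>A. s a d * p d) * (\<Sum>e\<in>A. cnj (q e) * s e b)"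
      by (simp add: sum_distrib_left)
    also have "\<dots> = rank_one A p q a b" using True fp q2 by (simp add: rank_one_def)
    finally show ?thesis .
  next
    case False
    then show ?thesis using ss by (auto simp: mat_mul_def rank_one_def supported_def)
  qed
qed

lemma sesq_rank_one: "sesq A (rank_one A p q) x y = (\<Sum>a\<in>A. cnj (x a) * p a) * (\<Sum>b\<in>A. cnj (q b) * y b)"
  by (simp add: sesq_def rank_one_def sum_product mult_ac)

lemma spectral_proj_sandwich:
  assumes cA: "c \<in> A" and c'A: "c' \<in> A"
  shows "mat_mul A (mat_mul A (spectral_mat A S (\<lambda>_. 1) v) C) (spectral_mat A S (\<lambda>_. 1) v) c c' =
    (\<Sum>\<alpha><S. \<Sum>\<beta><S. v \<alpha> c * sesq A C (v \<alpha>) (v \<beta>) * cnj (v \<beta> c'))"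
proof -
  let ?F = "\<lambda>e d \<alpha> \<beta>. v \<alpha> c * cnj (v \<beta> c') * (cnj (v \<alpha> d) * C d e * v \<beta> e)"
  have "mat_mul A (mat_mul A (spectral_mat A S (\<lambda>_. 1) v) C) (spectral_mat A S (\<lambda>_. 1) v) c c' =
      (\<Sum>e\<in>A. \<Sum>d\<in>A. (\<Sum>\<alpha><S. v \<alpha> c * cnj (v \<alpha> d)) * C d e * (\<Sum>\<beta><S. v \<beta> e * cnj (v \<beta> c')))"
    using cA c'A by (simp add: mat_mul_def spectral_mat_def sum_distrib_right cong: sum.cong)
  also have "\<dots> = (\<Sum>e\<in>A. \<Sum>d\<in>A. \<Sum>\<alpha><S. \<Sum>\<beta><S. ?F e d \<alpha> \<beta>)"
    by (intro sum.cong refl) (simp add: sum_product sum_distrib_left sum_distrib_right mult_ac)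
  also have "\<dots> = (\<Sum>\<alpha><S. \<Sum>\<beta><S. \<Sum>e\<in>A. \<Sum>d\<in>A. ?F e d \<alpha> \<beta>)"
    by (rule sum_swap_pairs)
  also have "\<dots> = (\<Sum>\<alpha><S. \<Sum>\<beta><S. \<Sum>d\<in>A. \<Sum>e\<in>A. ?F e d \<alpha> \<beta>)"
    by (rule sum.cong[OF refl], rule sum.cong[OF refl], rule sum.swap)
  also have "\<dots> = (\<Sum>\<alpha><S. \<Sum>\<beta><S. v \<alpha> c * sesq A C (v \<alpha>) (v \<beta>) * cnj (v \<beta> c'))"
    unfolding sesq_def by (intro sum.cong refl) (simp add: sum_distrib_left mult_ac)
  finally show ?thesis .
qed

lemma form_comp_rank_one:
  assumes IU: "I \<subseteq> parties" and \<alpha>: "\<alpha> < schmidt_rank I" and \<beta>: "\<beta> < schmidt_rank I"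
  shows "form_comp I (rank_one (idx dims I) (schmidt_left I \<alpha>) (schmidt_left I \<beta>))"
  unfolding form_comp_def restrict_rho_mat_mul
proof
  let ?A = "idx dims I" and ?u = "schmidt_left I"
  note sch = schmidt_chosen[OF IU]
  have fix_u: "(\<Sum>a'\<in>?A. supp_proj n dims psi I a a' * ?u \<gamma> a') = ?u \<gamma> a"
    if "a \<in> ?A" "\<gamma> < schmidt_rank I" for a \<gamma>
    unfolding supp_proj_spectral[OF IU sch]
    by (rule spectral_proj_fixes_span[OF schmidt_left_orthonormal[OF IU sch] that(1),
          of _ "\<lambda>\<alpha>. if \<alpha> = \<gamma> then 1 else 0"]) (simp add: sum_delta_mult that(2))
  show "supported ?A (rank_one ?A (?u \<alpha>) (?u \<beta>))" by (simp add: supported_def rank_one_def)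
  show "mat_mul ?A (mat_mul ?A (supp_proj n dims psi I) (rank_one ?A (?u \<alpha>) (?u \<beta>))) (supp_proj n dims psi I)
      = rank_one ?A (?u \<alpha>) (?u \<beta>)"
    by (rule rank_one_sandwich[OF supp_proj_selfadjoint[OF IU] supported_supp_proj[OF IU]])
      (use fix_u \<alpha> \<beta> in auto)
qed

lemma tensor_expect_rank_one:
  assumes IU: "I \<subseteq> parties" and \<alpha>: "\<alpha> < schmidt_rank I" and \<beta>: "\<beta> < schmidt_rank I"
  shows "tensor_expect I (rank_one (idx dims I) (schmidt_left I \<alpha>) (schmidt_left I \<beta>)) C =
    of_real (schmidt_coeff I \<alpha> * schmidt_coeff I \<beta>) *
    sesq (idx dims (parties - I)) C (schmidt_right I \<alpha>) (schmidt_right I \<beta>)"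
proof -
  let ?A = "idx dims I" and ?K = "idx dims (parties - I)"
  let ?S = "schmidt_rank I" and ?u = "schmidt_left I" and ?v = "schmidt_right I" and ?l = "schmidt_coeff I"
  note sch = schmidt_chosen[OF IU]
  note onu = schmidt_left_orthonormal[OF IU sch]
  have ob: "(\<Sum>a\<in>?A. cnj (?u \<gamma> a) * ?u \<alpha> a) = (if \<gamma> = \<alpha> then 1 else 0)" if "\<gamma> < ?S" for \<gamma>
    using onu that \<alpha> unfolding orthonormal_def cinner_def by (auto simp: mult.commute)
  have ob2: "(\<Sum>b\<in>?A. cnj (?u \<beta> b) * ?u \<delta> b) = (if \<delta> = \<beta> then 1 else 0)" if "\<delta> < ?S" for \<delta>
    using onu that \<beta> unfolding orthonormal_def cinner_def by (auto simp: mult.commute)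
  have "tensor_expect I (rank_one ?A (?u \<alpha>) (?u \<beta>)) C = (\<Sum>\<gamma><?S. \<Sum>\<delta><?S. (if \<gamma> = \<alpha> then 1 else 0) *
      ((if \<delta> = \<beta> then 1 else 0) * (of_real (?l \<gamma> * ?l \<delta>) * sesq ?K C (?v \<gamma>) (?v \<delta>))))"
    unfolding tensor_expect_schmidt[OF IU sch] sesq_rank_one by (intro sum.cong refl) (simp add: ob ob2)
  also have "\<dots> = of_real (?l \<alpha> * ?l \<beta>) * sesq ?K C (?v \<alpha>) (?v \<beta>)"
    by (rule sum_delta_mult2[OF \<alpha> \<beta>])
  finally show ?thesis .
qed

lemma form_comp_eq_zeroI:
  assumes IU: "I \<subseteq> parties" and C: "form_comp (parties - I) C"
    and zero: "\<And>\<alpha> \<beta>. \<alpha> < schmidt_rank I \<Longrightarrow> \<beta> < schmidt_rank I \<Longrightarrow>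
      sesq (idx dims (parties - I)) C (schmidt_right I \<alpha>) (schmidt_right I \<beta>) = 0"
  shows "C = (\<lambda>a b. 0)"
proof (intro ext)
  fix c c'
  let ?K = "idx dims (parties - I)" and ?S = "schmidt_rank I" and ?v = "schmidt_right I"
  have sw: "schmidt n dims psi (parties - I) ?S (schmidt_coeff I) ?v (schmidt_left I)"
    by (rule schmidt_swap[OF IU schmidt_chosen[OF IU]])
  show "C c c' = 0"
  proof (cases "c \<in> ?K \<and> c' \<in> ?K")
    case True
    have "C c c' = restrict_rho n dims psi (parties - I) C c c'" using C by (simp add: form_comp_def)
    also have "\<dots> = (\<Sum>\<alpha><?S. \<Sum>\<beta><?S. ?v \<alpha> c * sesq ?K C (?v \<alpha>) (?v \<beta>) * cnj (?v \<beta> c'))"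
      unfolding restrict_rho_mat_mul supp_proj_spectral[OF Diff_subset sw] using True by (simp add: spectral_proj_sandwich)
    also have "\<dots> = 0" by (simp add: zero)
    finally show ?thesis .
  next
    case False
    then show ?thesis using C by (auto simp: form_comp_def supported_def)
  qed
qed

text \<open>Testing against the rank-one operators \<open>|u\<alpha>\<rangle>\<langle>u\<beta>|\<close> recovers every matrix entry of
  \<open>C\<close> in the Schmidt basis, because all Schmidt coefficients are positive.\<close>
lemma tensor_expect_nondegenerate:
  assumes IU: "I \<subseteq> parties" and C: "form_comp (parties - I) C"
    and zero: "\<And>X. form_comp I X \<Longrightarrow> tensor_expect I X C = 0"
  shows "C = (\<lambda>a b. 0)"
proof (rule form_comp_eq_zeroI[OF IU C])
  fix \<alpha> \<beta> assume \<alpha>: "\<alpha> < schmidt_rank I" and \<beta>: "\<beta> < schmidt_rank I"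
  have "schmidt_coeff I \<alpha> * schmidt_coeff I \<beta> \<noteq> 0"
    using schmidt_lam_pos[OF IU schmidt_chosen[OF IU]] \<alpha> \<beta> by (metis mult_pos_pos less_irrefl)
  with zero[OF form_comp_rank_one[OF IU \<alpha> \<beta>]] show
    "sesq (idx dims (parties - I)) C (schmidt_right I \<alpha>) (schmidt_right I \<beta>) = 0"
    by (simp add: tensor_expect_rank_one[OF IU \<alpha> \<beta>])
qed

text \<open>The evaluation of \<open>\<omega> \<and> \<zeta>\<close> on \<open>\<rho>\<close>, for an \<open>m\<close>-form \<open>\<omega>\<close> and an \<open>(n - m)\<close>-form \<open>\<zeta>\<close>.\<close>
definition hodge_pairing :: "nat \<Rightarrow> eform \<Rightarrow> eform \<Rightarrow> complex" where
  "hodge_pairing m \<omega> \<zeta> = (\<Sum>J\<in>{J. J \<subseteq> parties \<and> card J = m}. party_sign J * tensor_expect J (\<omega> J) (\<zeta> (parties - J)))"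

definition form_at :: "nat set \<Rightarrow> qop \<Rightarrow> eform" where
  "form_at J X = (\<lambda>I. if I = J then X else (\<lambda>a b. 0))"

lemma finite_card_subsets: "finite {J. J \<subseteq> parties \<and> card J = m}"
  by (rule finite_subset[of _ "Pow parties"]) auto

lemma form_at_Omega: "J \<subseteq> parties \<Longrightarrow> card J = m \<Longrightarrow> form_comp J X \<Longrightarrow> form_at J X \<in> Omega n dims psi m"
  by (rule OmegaI) (auto simp: form_at_def form_comp_zero)

lemma sum_form_at:
  assumes J: "J \<subseteq> parties" "card J = m" and z: "\<And>I. F I (\<lambda>a b. 0) = 0"
  shows "(\<Sum>I\<in>{J. J \<subseteq> parties \<and> card J = m}. F I (form_at J X I)) = F J X"
proof -
  have "(\<Sum>I\<in>{J. J \<subseteq> parties \<and> card J = m}. F I (form_at J X I)) = (\<Sum>I\<in>{J. J \<subseteq> parties \<and> card J = m}. if I = J then F J X else 0)"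
    by (intro sum.cong refl) (simp add: form_at_def z)
  also have "\<dots> = F J X" using J finite_card_subsets by simp
  finally show ?thesis .
qed

lemma party_sign_nonzero: "party_sign J \<noteq> 0" by (simp add: party_sign_def)

lemma form_comp_transfer: "I \<subseteq> parties \<Longrightarrow> form_comp (parties - I) (transfer I Y)"
  by (simp add: form_comp_def restrict_rho_transfer supported_transfer)

lemma inner_form_nondegenerate:
  assumes xi: "\<xi> \<in> Omega n dims psi m"
    and P0: "\<And>\<omega>. \<omega> \<in> Omega n dims psi m \<Longrightarrow> inner_form n dims psi m \<omega> \<xi> = 0"
  shows "\<xi> = zero_form"
proof (intro ext)
  fix J a b
  show "\<xi> J a b = zero_form J a b"
  proof (cases "J \<subseteq> parties \<and> card J = m")
    case True
    then have JU: "J \<subseteq> parties" and cJ: "card J = m" by auto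
    have KU: "parties - J \<subseteq> parties" by auto
    have "tensor_expect J X (mat_adj (transfer J (\<xi> J))) = 0" if om: "form_comp J X" for X
    proof -
      have "inner_form n dims psi m (form_at J X) \<xi> = tensor_expect J X (mat_adj (transfer J (\<xi> J)))"
        unfolding inner_form_tensor_expect by (rule sum_form_at[OF JU cJ, of "\<lambda>I Y. tensor_expect I Y (mat_adj (transfer I (\<xi> I)))"]) (simp add: tensor_expect_zero_left)
      with P0[OF form_at_Omega[OF JU cJ om]] show ?thesis by simp
    qed
    moreover have "form_comp (parties - J) (mat_adj (transfer J (\<xi> J)))" by (rule form_comp_mat_adj[OF KU form_comp_transfer[OF JU]])
    ultimately have "mat_adj (transfer J (\<xi> J)) = (\<lambda>a b. 0)" by (intro tensor_expect_nondegenerate[OF JU]) auto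
    then have "transfer J (\<xi> J) = (\<lambda>a b. 0)" by (metis mat_adj_mat_adj mat_adj_def complex_cnj_zero)
    then have "transfer (parties - J) (transfer J (\<xi> J)) = (\<lambda>a b. 0)" by (simp add: transfer_zero)
    moreover have "transfer (parties - J) (transfer J (\<xi> J)) = \<xi> J"
      using Omega_comp[OF xi JU cJ] by (intro transfer_transfer[OF JU]) (auto simp: form_comp_def)
    ultimately show ?thesis by (simp add: zero_form_def)
  next
    case False
    then show ?thesis using Omega_outside[OF xi] by (simp add: zero_form_def)
  qed
qed

text \<open>The factor \<open>m\<close> in \<open>d\<^sup>m\<close>; \<open>d\<^sup>0\<close> has none.\<close>
definition d_coeff :: "nat \<Rightarrow> nat" where "d_coeff m = (if m = 0 then 1 else m)"

lemma d_coeff_pos: "d_coeff m > 0" by (simp add: d_coeff_def)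

lemma mat_mul_id_right:
  assumes fin: "finite A" and ss: "supported A s"
  shows "mat_mul A s (\<lambda>a b. if a = b \<and> a \<in> A then 1 else 0) = s"
proof (intro ext)
  fix a b
  have "mat_mul A s (\<lambda>a b. if a = b \<and> a \<in> A then 1 else 0) a b = (\<Sum>c\<in>A. if c = b then s a b else 0)"
    unfolding mat_mul_def by (rule sum.cong) auto
  also have "\<dots> = s a b"
    using fin ss by (cases "b \<in> A") (auto simp: supported_def)
  finally show "mat_mul A s (\<lambda>a b. if a = b \<and> a \<in> A then 1 else 0) a b = s a b" .
qed

lemma restr_empty: "restr {} a = zidx" by (simp add: restr_def zidx_def fun_eq_iff)

lemma idx_single_eq:
  assumes "a \<in> idx dims {j}" "b \<in> idx dims {j}" "a j = b j"
  shows "a = b"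
proof (intro ext)
  fix x show "a x = b x" using assms by (cases "x = j") (auto simp: idx_def)
qed

lemma dform_component:
  assumes IU: "I \<subseteq> parties" and cI: "card I = Suc m"
  shows "dform n dims psi m \<omega> I = restrict_rho n dims psi I
      (\<lambda>a b. of_nat (d_coeff m) * (\<Sum>j\<in>I. sten dims j (I - {j}) (\<omega> (I - {j})) a b))"
proof (cases "m = 0")
  case False
  then show ?thesis using IU cI by (simp add: dform_def d_coeff_def)
next
  case True
  then obtain j where I: "I = {j}" using cI card_1_singletonE by auto
  let ?Id = "\<lambda>a b. if a = b \<and> a \<in> idx dims I then 1 else (0::complex)"
  have sten_empty: "sten dims j {} (\<omega> {}) = (\<lambda>a b. \<omega> {} zidx zidx * ?Id a b)"
  proof (intro ext)
    fix a b
    show "sten dims j {} (\<omega> {}) a b = \<omega> {} zidx zidx * ?Id a b"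
    proof (cases "a \<in> idx dims {j} \<and> b \<in> idx dims {j} \<and> a j = b j")
      case True
      then have "a = b" using idx_single_eq by blast
      then show ?thesis using True by (simp add: sten_def restr_empty I)
    next
      case False
      then have "\<not> (a = b \<and> a \<in> idx dims I)" by (auto simp: I)
      then show ?thesis using False by (auto simp: sten_def I)
    qed
  qed
  have "restrict_rho n dims psi I (\<lambda>a b. of_nat (d_coeff m) * (\<Sum>j\<in>I. sten dims j (I - {j}) (\<omega> (I - {j})) a b))
      = restrict_rho n dims psi I (\<lambda>a b. \<omega> {} zidx zidx * ?Id a b)"
    using True by (simp add: I d_coeff_def sten_empty)
  also have "\<dots> = (\<lambda>a b. \<omega> {} zidx zidx * restrict_rho n dims psi I ?Id a b)"
    by (rule restrict_rho_scale)
  also have "restrict_rho n dims psi I ?Id = supp_proj n dims psi I"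
    unfolding restrict_rho_mat_mul using mat_mul_id_right[OF finite_idx_subset[OF IU] supported_supp_proj[OF IU]] supp_proj_idem[OF IU] by simp
  finally show ?thesis using True IU cI by (simp add: dform_def)
qed

lemma card_le_n: "I \<subseteq> parties \<Longrightarrow> card I \<le> n"
  using card_mono[of parties I] by simp

lemma dform_outside: "\<not> (I \<subseteq> parties \<and> card I = Suc m) \<Longrightarrow> dform n dims psi m \<omega> I = (\<lambda>a b. 0)"
  by (auto simp: dform_def)

lemma dform_top: "dform n dims psi n \<omega> = zero_form"
proof (intro ext)
  fix I a b
  have "\<not> (I \<subseteq> parties \<and> card I = Suc n)"
  proof
    assume "I \<subseteq> parties \<and> card I = Suc n"
    then show False using card_le_n[of I] by simp
  qed
  then show "dform n dims psi n \<omega> I a b = zero_form I a b" by (simp add: dform_outside zero_form_def)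
qed

lemma dform_Omega: "dform n dims psi m \<omega> \<in> Omega n dims psi (Suc m)"
proof (rule OmegaI)
  fix I assume IU: "I \<subseteq> parties" and cI: "card I = Suc m"
  show "form_comp I (dform n dims psi m \<omega> I)"
    unfolding dform_component[OF IU cI] form_comp_def using supported_restrict_rho[OF IU] restrict_rho_idem[OF IU] by simp
qed (rule dform_outside)

lemma sten_mat_adj: "sten dims j J (mat_adj X) = mat_adj (sten dims j J X)"
  by (auto simp: sten_def mat_adj_def fun_eq_iff)

lemma sten_scale: "sten dims j J (\<lambda>a b. k * X a b) = (\<lambda>a b. k * sten dims j J X a b)"
  by (auto simp: sten_def fun_eq_iff)

lemma dform_mat_adj: "dform n dims psi m (\<lambda>I. mat_adj (\<omega> I)) = (\<lambda>I. mat_adj (dform n dims psi m \<omega> I))"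
proof (intro ext)
  fix I a b
  show "dform n dims psi m (\<lambda>I. mat_adj (\<omega> I)) I a b = mat_adj (dform n dims psi m \<omega> I) a b"
  proof (cases "I \<subseteq> parties \<and> card I = Suc m")
    case True
    then have IU: "I \<subseteq> parties" and cI: "card I = Suc m" by auto
    have e: "(\<lambda>a b. of_nat (d_coeff m) * (\<Sum>j\<in>I. sten dims j (I - {j}) (mat_adj (\<omega> (I - {j}))) a b)) =
        mat_adj (\<lambda>a b. of_nat (d_coeff m) * (\<Sum>j\<in>I. sten dims j (I - {j}) (\<omega> (I - {j})) a b))"
      unfolding sten_mat_adj by (simp add: mat_adj_def)
    show ?thesis unfolding dform_component[OF IU cI] e restrict_rho_mat_adj[OF IU] ..
  next
    case False
    then show ?thesis by (simp add: dform_outside mat_adj_def)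
  qed
qed

lemma dform_scale: "dform n dims psi m (form_scale k \<omega>) = form_scale k (dform n dims psi m \<omega>)"
proof (intro ext)
  fix I a b
  show "dform n dims psi m (form_scale k \<omega>) I a b = form_scale k (dform n dims psi m \<omega>) I a b"
  proof (cases "I \<subseteq> parties \<and> card I = Suc m")
    case True
    then have IU: "I \<subseteq> parties" and cI: "card I = Suc m" by auto
    have e: "(\<lambda>a b. of_nat (d_coeff m) * (\<Sum>j\<in>I. sten dims j (I - {j}) (form_scale k \<omega> (I - {j})) a b)) =
        (\<lambda>a b. k * (of_nat (d_coeff m) * (\<Sum>j\<in>I. sten dims j (I - {j}) (\<omega> (I - {j})) a b)))"
      by (simp add: form_scale_def sten_scale sum_distrib_left mult_ac)
    have "dform n dims psi m (form_scale k \<omega>) I = (\<lambda>a b. k * dform n dims psi m \<omega> I a b)"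
      by (simp only: dform_component[OF IU cI] e restrict_rho_scale)
    then show ?thesis by (simp add: form_scale_def)
  next
    case False
    then show ?thesis by (simp add: dform_outside form_scale_def)
  qed
qed

definition id_tensor :: "nat \<Rightarrow> nat set \<Rightarrow> qop \<Rightarrow> qop" where
  "id_tensor j J X = (\<lambda>a b. if a \<in> idx dims (insert j J) \<and> b \<in> idx dims (insert j J) \<and> a j = b j
      then X (restr J a) (restr J b) else 0)"

definition insert_sign :: "nat \<Rightarrow> nat set \<Rightarrow> complex" where
  "insert_sign j J = (-1) ^ card {i\<in>J. i < j}"

lemma sten_id_tensor: "sten dims j J X = (\<lambda>a b. insert_sign j J * id_tensor j J X a b)"
  by (auto simp: sten_def id_tensor_def insert_sign_def fun_eq_iff)

lemma tensor_expect_global: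
  assumes IU: "I \<subseteq> parties"
  shows "tensor_expect I X C = (\<Sum>x\<in>idx dims parties. \<Sum>x'\<in>idx dims parties. cnj (psi x) * X (restr I x) (restr I x') *
      C (restr (parties - I) x) (restr (parties - I) x') * psi x')"
proof -
  let ?A = "idx dims I" and ?K = "idx dims (parties - I)"
  let ?G = "\<lambda>x x'. cnj (psi x) * X (restr I x) (restr I x') * C (restr (parties - I) x) (restr (parties - I) x') * psi x'"
  have dis: "I \<inter> (parties - I) = {}" by auto
  have "(\<Sum>x\<in>idx dims parties. \<Sum>x'\<in>idx dims parties. ?G x x') =
      (\<Sum>a\<in>?A. \<Sum>c\<in>?K. \<Sum>a'\<in>?A. \<Sum>c'\<in>?K. ?G (Defs.merge I a c) (Defs.merge I a' c'))"
    by (simp add: sum_idx_split[OF IU])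
  also have "\<dots> = (\<Sum>a\<in>?A. \<Sum>c\<in>?K. \<Sum>a'\<in>?A. \<Sum>c'\<in>?K.
      cnj (psi (Defs.merge I a c)) * X a a' * C c c' * psi (Defs.merge I a' c'))"
    by (intro sum.cong refl) (simp add: restr_merge_left restr_merge_right[OF _ dis])
  also have "\<dots> = (\<Sum>a\<in>?A. \<Sum>a'\<in>?A. \<Sum>c\<in>?K. \<Sum>c'\<in>?K.
      cnj (psi (Defs.merge I a c)) * X a a' * C c c' * psi (Defs.merge I a' c'))"
    by (rule sum.cong[OF refl], rule sum.swap)
  finally show ?thesis by (simp add: tensor_expect_def)
qed

lemma tensor_expect_id_tensor_shift:
  assumes jU: "j \<in> parties" and jJ: "j \<notin> J" and JU: "J \<subseteq> parties"
  shows "tensor_expect (insert j J) (id_tensor j J A) C = tensor_expect J A (id_tensor j (parties - insert j J) C)"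
proof -
  let ?I = "insert j J" and ?K = "parties - insert j J"
  have IU: "?I \<subseteq> parties" using jU JU by auto
  have UJ: "insert j ?K = parties - J" using jU jJ by auto
  have UI: "parties - ?I = ?K" by simp
  have l: "id_tensor j J A (restr ?I x) (restr ?I x') = (if x j = x' j then A (restr J x) (restr J x') else 0)"
    if "x \<in> idx dims parties" "x' \<in> idx dims parties" for x x'
  proof -
    have e1: "restr J (restr ?I x) = restr J x" "restr J (restr ?I x') = restr J x'" by (auto intro: restr_restr)
    have e2: "restr ?I x j = x j" "restr ?I x' j = x' j" by (auto simp: restr_def)
    have m: "restr ?I x \<in> idx dims ?I" "restr ?I x' \<in> idx dims ?I" using that restr_in_idx[OF IU] by auto
    show ?thesis unfolding id_tensor_def using e1 e2 m by simp
  qed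
  have r: "id_tensor j ?K C (restr (parties - J) x) (restr (parties - J) x') = (if x j = x' j then C (restr ?K x) (restr ?K x') else 0)"
    if "x \<in> idx dims parties" "x' \<in> idx dims parties" for x x'
  proof -
    have sub: "parties - J \<subseteq> parties" by auto
    have "restr (parties - J) x \<in> idx dims (insert j ?K)" "restr (parties - J) x' \<in> idx dims (insert j ?K)"
      using restr_in_idx[OF sub] that UJ by auto
    moreover have "?K \<subseteq> parties - J" by auto
    moreover have "restr ?K (restr (parties - J) x) = restr ?K x" "restr ?K (restr (parties - J) x') = restr ?K x'"
      by (auto intro: restr_restr)
    moreover have "restr (parties - J) x j = x j" "restr (parties - J) x' j = x' j" using jU jJ by (auto simp: restr_def)
    ultimately show ?thesis unfolding id_tensor_def by simp
  qed
  show ?thesis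
    unfolding tensor_expect_global[OF IU] tensor_expect_global[OF JU]
    by (intro sum.cong refl) (simp add: l r)
qed

lemma card_lt_split:
  assumes jU: "j \<in> parties" and jJ: "j \<notin> J" and JU: "J \<subseteq> parties"
  shows "card {i\<in>J. i < j} + card {i\<in>parties - insert j J. i < j} = j"
proof -
  have "{i\<in>J. i < j} \<union> {i\<in>parties - insert j J. i < j} = {..<j}" using jU JU by auto
  moreover have "{i\<in>J. i < j} \<inter> {i\<in>parties - insert j J. i < j} = {}" by auto
  moreover have "finite {i\<in>J. i < j}" "finite {i\<in>parties - insert j J. i < j}" by auto
  ultimately show ?thesis by (metis card_Un_disjoint card_lessThan)
qed

lemma insert_sign_square: "insert_sign j J * insert_sign j J = 1"
  by (simp add: insert_sign_def power_add[symmetric] mult_2[symmetric] power_mult)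

text \<open>Moving \<open>\<one>\<^sub>j\<close> from one tensor factor to the other changes the shuffle sign by
  \<open>(-1)\<^sup>j\<close>, which is exactly what \<open>party_sign\<close> absorbs.\<close>
lemma party_sign_insert_sign:
  assumes jU: "j \<in> parties" and jJ: "j \<notin> J" and JU: "J \<subseteq> parties"
  shows "party_sign (insert j J) * insert_sign j J = party_sign J * insert_sign j (parties - insert j J)"
proof -
  have fJ: "finite J" using JU by (auto intro: finite_subset)
  have s1: "party_sign (insert j J) = (-1) ^ j * party_sign J" using fJ jJ by (simp add: party_sign_def power_add)
  have e: "insert_sign j J * insert_sign j (parties - insert j J) = (-1) ^ j"
    unfolding insert_sign_def power_add[symmetric] card_lt_split[OF jU jJ JU] ..
  have "party_sign (insert j J) * insert_sign j J = party_sign J * (insert_sign j J * insert_sign j (parties - insert j J)) * insert_sign j J"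
    by (simp add: s1 e mult_ac)
  also have "\<dots> = party_sign J * insert_sign j (parties - insert j J) * (insert_sign j J * insert_sign j J)" by (simp add: mult_ac)
  finally show ?thesis by (simp add: insert_sign_square)
qed

lemma tensor_expect_dform_left:
  assumes IU: "I \<subseteq> parties" and cI: "card I = Suc m"
  shows "tensor_expect I (dform n dims psi m \<omega> I) C =
    of_nat (d_coeff m) * (\<Sum>j\<in>I. insert_sign j (I - {j}) * tensor_expect I (id_tensor j (I - {j}) (\<omega> (I - {j}))) C)"
  unfolding dform_component[OF IU cI] tensor_expect_restrict_left[OF IU] tensor_expect_scale_left tensor_expect_sum_left sten_id_tensor ..

lemma tensor_expect_dform_right:
  assumes JU: "J \<subseteq> parties" and cK: "card (parties - J) = Suc m"
  shows "tensor_expect J X (dform n dims psi m \<zeta> (parties - J)) =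
    of_nat (d_coeff m) * (\<Sum>j\<in>parties - J. insert_sign j (parties - insert j J) * tensor_expect J X (id_tensor j (parties - insert j J) (\<zeta> (parties - insert j J))))"
proof -
  have KU: "parties - J \<subseteq> parties" by auto
  have e: "parties - J - {j} = parties - insert j J" for j by auto
  show ?thesis
    unfolding dform_component[OF KU cK] tensor_expect_restrict_right[OF JU] tensor_expect_scale_right tensor_expect_sum_right sten_id_tensor e ..
qed

text \<open>The common value of both sides of \<open>hodge_pairing_dform\<close>: a sum over pairs \<open>(J, j)\<close>
  with \<open>j \<notin> J\<close>, where the identity factor \<open>\<one>\<^sub>j\<close> is moved between the two tensor factors.\<close>
definition d_pairing_term :: "eform \<Rightarrow> eform \<Rightarrow> nat set \<Rightarrow> nat \<Rightarrow> complex" where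
  "d_pairing_term \<omega> \<zeta> J j = party_sign J * (insert_sign j (parties - insert j J) *
     tensor_expect J (\<omega> J) (id_tensor j (parties - insert j J) (\<zeta> (parties - insert j J))))"

lemma hodge_pairing_dform_left:
  "hodge_pairing (Suc m) (dform n dims psi m \<omega>) \<zeta> =
    of_nat (d_coeff m) * (\<Sum>J\<in>{J. J \<subseteq> parties \<and> card J = m}. \<Sum>j\<in>parties - J. d_pairing_term \<omega> \<zeta> J j)"
proof -
  define G where "G J j = party_sign (insert j J) * (insert_sign j J *
    tensor_expect (insert j J) (id_tensor j J (\<omega> J)) (\<zeta> (parties - insert j J)))" for J j
  have "hodge_pairing (Suc m) (dform n dims psi m \<omega>) \<zeta> =
      (\<Sum>I\<in>{I. I \<subseteq> parties \<and> card I = Suc m}. of_nat (d_coeff m) * (\<Sum>j\<in>I. G (I - {j}) j))"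
    unfolding hodge_pairing_def
  proof (intro sum.cong refl)
    fix I assume "I \<in> {I. I \<subseteq> parties \<and> card I = Suc m}"
    then have IU: "I \<subseteq> parties" and cI: "card I = Suc m" by auto
    have "(\<Sum>j\<in>I. G (I - {j}) j) = (\<Sum>j\<in>I. party_sign I * (insert_sign j (I - {j}) *
        tensor_expect I (id_tensor j (I - {j}) (\<omega> (I - {j}))) (\<zeta> (parties - I))))"
      by (intro sum.cong refl) (simp add: G_def insert_absorb)
    then show "party_sign I * tensor_expect I (dform n dims psi m \<omega> I) (\<zeta> (parties - I)) =
        of_nat (d_coeff m) * (\<Sum>j\<in>I. G (I - {j}) j)"
      by (simp add: tensor_expect_dform_left[OF IU cI] sum_distrib_left mult_ac)
  qed
  also have "\<dots> = of_nat (d_coeff m) * (\<Sum>J\<in>{J. J \<subseteq> parties \<and> card J = m}. \<Sum>j\<in>parties - J. G J j)"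
    by (simp add: sum_distrib_left[symmetric] sum_card_Suc_subsets[OF finite_atLeastLessThan])
  also have "\<dots> = of_nat (d_coeff m) * (\<Sum>J\<in>{J. J \<subseteq> parties \<and> card J = m}. \<Sum>j\<in>parties - J. d_pairing_term \<omega> \<zeta> J j)"
  proof -
    have "G J j = d_pairing_term \<omega> \<zeta> J j" if JU: "J \<subseteq> parties" and j: "j \<in> parties - J" for J j
    proof -
      have jU: "j \<in> parties" and jJ: "j \<notin> J" using j by auto
      have "G J j = party_sign (insert j J) * insert_sign j J *
          tensor_expect J (\<omega> J) (id_tensor j (parties - insert j J) (\<zeta> (parties - insert j J)))"
        by (simp add: G_def tensor_expect_id_tensor_shift[OF jU jJ JU] mult.assoc)
      then show ?thesis
        by (simp add: d_pairing_term_def party_sign_insert_sign[OF jU jJ JU] mult.assoc)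
    qed
    then show ?thesis by (intro arg_cong2[where f="(*)"] refl sum.cong) auto
  qed
  finally show ?thesis .
qed

lemma hodge_pairing_dform_right:
  assumes mn: "Suc m \<le> n"
  shows "hodge_pairing m \<omega> (dform n dims psi (n - Suc m) \<zeta>) = of_nat (d_coeff (n - Suc m)) *
    (\<Sum>J\<in>{J. J \<subseteq> parties \<and> card J = m}. \<Sum>j\<in>parties - J. d_pairing_term \<omega> \<zeta> J j)"
  unfolding hodge_pairing_def sum_distrib_left
proof (intro sum.cong refl)
  fix J assume "J \<in> {J. J \<subseteq> parties \<and> card J = m}"
  then have JU: "J \<subseteq> parties" and cJ: "card J = m" by auto
  have cK: "card (parties - J) = Suc (n - Suc m)" using card_compl[OF JU] cJ mn by simp
  show "party_sign J * tensor_expect J (\<omega> J) (dform n dims psi (n - Suc m) \<zeta> (parties - J)) =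
      (\<Sum>j\<in>parties - J. of_nat (d_coeff (n - Suc m)) * d_pairing_term \<omega> \<zeta> J j)"
    by (simp add: tensor_expect_dform_right[OF JU cK] d_pairing_term_def sum_distrib_left mult_ac)
qed

lemma hodge_pairing_dform:
  assumes mn: "Suc m \<le> n"
  shows "of_nat (d_coeff (n - Suc m)) * hodge_pairing (Suc m) (dform n dims psi m \<omega>) \<zeta> =
         of_nat (d_coeff m) * hodge_pairing m \<omega> (dform n dims psi (n - Suc m) \<zeta>)"
  unfolding hodge_pairing_dform_left hodge_pairing_dform_right[OF mn] by (simp add: mult_ac)

definition form_adj :: "eform \<Rightarrow> eform" where "form_adj \<omega> = (\<lambda>I. mat_adj (\<omega> I))"

definition form_diff :: "eform \<Rightarrow> eform \<Rightarrow> eform" where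
  "form_diff x y = (\<lambda>I a b. x I a b - y I a b)"

lemma mat_adj_zero: "mat_adj (\<lambda>a b. 0) = (\<lambda>a b. 0)" by (simp add: mat_adj_def)

lemma form_adj_eq_zero_iff: "form_adj \<omega> = zero_form \<longleftrightarrow> \<omega> = zero_form"
  by (auto simp: form_adj_def zero_form_def mat_adj_def fun_eq_iff)

lemma Omega_diff: "x \<in> Omega n dims psi k \<Longrightarrow> y \<in> Omega n dims psi k \<Longrightarrow> form_diff x y \<in> Omega n dims psi k"
proof (rule OmegaI)
  fix I assume x: "x \<in> Omega n dims psi k" and y: "y \<in> Omega n dims psi k" and I: "I \<subseteq> parties" "card I = k"
  have "form_comp I (\<lambda>a b. x I a b + (-1) * y I a b)"
    by (intro form_comp_add form_comp_scale Omega_comp[OF x I(1,2)] Omega_comp[OF y I(1,2)])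
  then show "form_comp I (form_diff x y I)" by (simp add: form_diff_def)
next
  fix I assume x: "x \<in> Omega n dims psi k" and y: "y \<in> Omega n dims psi k" and I: "\<not> (I \<subseteq> parties \<and> card I = k)"
  then show "form_diff x y I = (\<lambda>a b. 0)" by (simp add: form_diff_def Omega_outside)
qed

lemma tensor_expect_diff_right: "tensor_expect I X (\<lambda>a b. A a b - B a b) = tensor_expect I X A - tensor_expect I X B"
  by (simp add: tensor_expect_sesq_subsys left_diff_distrib sum_subtractf)

lemma transfer_diff: "transfer I (\<lambda>a b. X a b - Y a b) = (\<lambda>c c'. transfer I X c c' - transfer I Y c c')"
proof -
  have e: "(\<lambda>a b. X a b - Y a b) = (\<lambda>a b. X a b + (-1) * Y a b)" by simp
  have "transfer I (\<lambda>a b. X a b + (-1) * Y a b) = (\<lambda>c c'. transfer I X c c' + (-1) * transfer I Y c c')"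
    by (simp only: transfer_add transfer_scale)
  then show ?thesis unfolding e by simp
qed

lemma inner_diff: "inner_form n dims psi m \<omega> (form_diff x y) = inner_form n dims psi m \<omega> x - inner_form n dims psi m \<omega> y"
proof -
  have "mat_adj (transfer I (form_diff x y I)) = (\<lambda>a b. mat_adj (transfer I (x I)) a b - mat_adj (transfer I (y I)) a b)" for I
    by (simp add: form_diff_def transfer_diff mat_adj_def)
  then show ?thesis unfolding inner_form_tensor_expect by (simp add: tensor_expect_diff_right sum_subtractf)
qed

lemma codiff_eqI:
  assumes k: "k \<noteq> 0" and xi: "\<xi> \<in> Omega n dims psi (k - 1)"
    and H: "\<And>\<omega>. \<omega> \<in> Omega n dims psi (k - 1) \<Longrightarrow>
      inner_form n dims psi k (dform n dims psi (k - 1) \<omega>) \<eta> = inner_form n dims psi (k - 1) \<omega> \<xi>"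
  shows "codiff n dims psi k \<eta> = \<xi>"
proof -
  let ?P = "\<lambda>\<xi>. \<xi> \<in> Omega n dims psi (k - 1) \<and> (\<forall>\<omega>\<in>Omega n dims psi (k - 1).
      inner_form n dims psi k (dform n dims psi (k - 1) \<omega>) \<eta> = inner_form n dims psi (k - 1) \<omega> \<xi>)"
  have c: "codiff n dims psi k \<eta> = (THE \<xi>. ?P \<xi>)" using k unfolding codiff_def by simp
  have uniq: "\<xi>' = \<xi>" if "?P \<xi>'" for \<xi>'
  proof -
    from that have xi': "\<xi>' \<in> Omega n dims psi (k - 1)" and H': "\<And>\<omega>. \<omega> \<in> Omega n dims psi (k - 1) \<Longrightarrow>
        inner_form n dims psi k (dform n dims psi (k - 1) \<omega>) \<eta> = inner_form n dims psi (k - 1) \<omega> \<xi>'" by auto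
    have "form_diff \<xi>' \<xi> = zero_form"
    proof (rule inner_form_nondegenerate)
      show "form_diff \<xi>' \<xi> \<in> Omega n dims psi (k - 1)" by (rule Omega_diff[OF xi' xi])
      fix \<omega> assume "\<omega> \<in> Omega n dims psi (k - 1)"
      then show "inner_form n dims psi (k - 1) \<omega> (form_diff \<xi>' \<xi>) = 0"
        using H H' by (simp add: inner_diff)
    qed
    then show ?thesis by (auto simp: form_diff_def zero_form_def fun_eq_iff)
  qed
  have P: "?P \<xi>" using xi H by blast
  have "(THE \<xi>. ?P \<xi>) = \<xi>" by (rule the_equality[of ?P \<xi>, OF P uniq]) 
  with c show ?thesis by simp
qed

lemma cnj_party_sign: "cnj (party_sign I) = party_sign I" by (simp add: party_sign_def)

lemma Omega_scale: "\<omega> \<in> Omega n dims psi k \<Longrightarrow> form_scale c \<omega> \<in> Omega n dims psi k"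
proof (rule OmegaI)
  fix I assume "\<omega> \<in> Omega n dims psi k" "I \<subseteq> parties" "card I = k"
  then show "form_comp I (form_scale c \<omega> I)" unfolding form_scale_def by (intro form_comp_scale Omega_comp)
next
  fix I assume "\<omega> \<in> Omega n dims psi k" "\<not> (I \<subseteq> parties \<and> card I = k)"
  then show "form_scale c \<omega> I = (\<lambda>a b. 0)" by (simp add: form_scale_def Omega_outside)
qed

lemma hodge_compl:
  assumes IU: "I \<subseteq> parties" and cI: "card I = k" and kn: "k \<le> n"
  shows "hodge k \<eta> (parties - I) = (\<lambda>c c'. party_sign I * transfer I (\<eta> I) c c')"
proof -
  have "card (parties - I) = n - k" using card_compl[OF IU] cI by simp
  then show ?thesis by (simp add: hodge_def diff_diff_subset[OF IU])
qed

definition hodge_d_adj :: "nat \<Rightarrow> eform \<Rightarrow> eform" where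
  "hodge_d_adj m \<eta> = dform n dims psi (n - Suc m) (form_adj (hodge (Suc m) \<eta>))"

definition codiff_ratio :: "nat \<Rightarrow> complex" where
  "codiff_ratio m = of_nat (d_coeff m) / of_nat (d_coeff (n - Suc m))"

text \<open>The codifferential as \<open>\<star> d \<star>\<close> up to conjugation, signs and the normalising factors
  of \<open>d\<close>.\<close>
definition codiff_form :: "nat \<Rightarrow> eform \<Rightarrow> eform" where
  "codiff_form m \<eta> = (\<lambda>J. if J \<subseteq> parties \<and> card J = m then transfer (parties - J)
      (mat_adj (\<lambda>a b. codiff_ratio m * party_sign J * hodge_d_adj m \<eta> (parties - J) a b))
    else (\<lambda>a b. 0))"

lemma codiff_ratio_nonzero: "codiff_ratio m \<noteq> 0"
  using d_coeff_pos[of m] d_coeff_pos[of "n - Suc m"] by (simp add: codiff_ratio_def)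

lemma hodge_d_adj_Omega:
  assumes "Suc m \<le> n"
  shows "hodge_d_adj m \<eta> \<in> Omega n dims psi (n - m)"
  using dform_Omega[of "n - Suc m"] assms by (simp add: hodge_d_adj_def Suc_diff_Suc)

lemma codiff_form_Omega: "codiff_form m \<eta> \<in> Omega n dims psi m"
proof (rule OmegaI)
  fix J assume JU: "J \<subseteq> parties" and "card J = m"
  then show "form_comp J (codiff_form m \<eta> J)"
    using form_comp_transfer[OF Diff_subset[of parties J]] by (simp add: codiff_form_def diff_diff_subset[OF JU])
qed (auto simp: codiff_form_def)

lemma transfer_codiff_form:
  assumes mn: "Suc m \<le> n" and JU: "J \<subseteq> parties" and cJ: "card J = m"
  shows "transfer J (codiff_form m \<eta> J) =
    mat_adj (\<lambda>a b. codiff_ratio m * party_sign J * hodge_d_adj m \<eta> (parties - J) a b)"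
proof -
  have "card (parties - J) = n - m" using card_compl[OF JU] cJ by simp
  then have "form_comp (parties - J) (hodge_d_adj m \<eta> (parties - J))"
    using Omega_comp[OF hodge_d_adj_Omega[OF mn] Diff_subset] by simp
  then have "form_comp (parties - J) (mat_adj (\<lambda>a b. codiff_ratio m * party_sign J * hodge_d_adj m \<eta> (parties - J) a b))"
    using form_comp_scale[where k = "codiff_ratio m * party_sign J"]
    by (intro form_comp_mat_adj[OF Diff_subset]) (simp add: mult.assoc)
  then show ?thesis
    using JU cJ transfer_transfer[OF Diff_subset[of parties J]] by (simp add: codiff_form_def diff_diff_subset[OF JU] form_comp_def)
qed

lemma inner_form_dform_codiff_form:
  assumes mn: "Suc m \<le> n" and \<eta>: "\<eta> \<in> Omega n dims psi (Suc m)"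
  shows "inner_form n dims psi (Suc m) (dform n dims psi m \<omega>) \<eta> = inner_form n dims psi m \<omega> (codiff_form m \<eta>)"
proof -
  define \<zeta> where "\<zeta> = form_adj (hodge (Suc m) \<eta>)"
  have "inner_form n dims psi (Suc m) (dform n dims psi m \<omega>) \<eta> = hodge_pairing (Suc m) (dform n dims psi m \<omega>) \<zeta>"
    unfolding inner_form_tensor_expect hodge_pairing_def
  proof (intro sum.cong refl)
    fix I assume "I \<in> {I. I \<subseteq> parties \<and> card I = Suc m}"
    then have IU: "I \<subseteq> parties" and cI: "card I = Suc m" by auto
    have "\<zeta> (parties - I) = (\<lambda>a b. cnj (party_sign I) * mat_adj (transfer I (\<eta> I)) a b)"
      using mn by (simp add: \<zeta>_def form_adj_def hodge_compl[OF IU cI] mat_adj_def)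
    then show "tensor_expect I (dform n dims psi m \<omega> I) (mat_adj (transfer I (\<eta> I))) =
        party_sign I * tensor_expect I (dform n dims psi m \<omega> I) (\<zeta> (parties - I))"
      by (simp add: tensor_expect_scale_right cnj_party_sign mult.assoc[symmetric] party_sign_square)
  qed
  also have "\<dots> = codiff_ratio m * hodge_pairing m \<omega> (hodge_d_adj m \<eta>)"
    using hodge_pairing_dform[OF mn, of \<omega> \<zeta>] d_coeff_pos[of "n - Suc m"]
    by (simp add: codiff_ratio_def hodge_d_adj_def \<zeta>_def field_simps)
  also have "\<dots> = inner_form n dims psi m \<omega> (codiff_form m \<eta>)"
    unfolding hodge_pairing_def inner_form_tensor_expect sum_distrib_left
    by (intro sum.cong refl) (simp add: transfer_codiff_form[OF mn] tensor_expect_scale_right mult_ac)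
  finally show ?thesis .
qed

lemma codiff_eq_codiff_form:
  assumes "Suc m \<le> n" and "\<eta> \<in> Omega n dims psi (Suc m)"
  shows "codiff n dims psi (Suc m) \<eta> = codiff_form m \<eta>"
  using codiff_form_Omega inner_form_dform_codiff_form[OF assms] by (intro codiff_eqI) simp_all

lemma codiff_form_eq_zero_iff:
  assumes mn: "Suc m \<le> n"
  shows "codiff_form m \<eta> = zero_form \<longleftrightarrow> hodge_d_adj m \<eta> = zero_form"
proof
  assume "hodge_d_adj m \<eta> = zero_form"
  then show "codiff_form m \<eta> = zero_form"
    by (auto simp: codiff_form_def zero_form_def mat_adj_zero transfer_zero fun_eq_iff)
next
  assume zero: "codiff_form m \<eta> = zero_form"
  show "hodge_d_adj m \<eta> = zero_form"
  proof (intro ext)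
    fix K a b
    show "hodge_d_adj m \<eta> K a b = zero_form K a b"
    proof (cases "K \<subseteq> parties \<and> card K = n - m")
      case True
      define J where "J = parties - K"
      have JU: "J \<subseteq> parties" and cJ: "card J = m" and KJ: "K = parties - J"
        using True card_compl[of K] mn by (auto simp: J_def)
      have "mat_adj (\<lambda>a b. codiff_ratio m * party_sign J * hodge_d_adj m \<eta> (parties - J) a b) = (\<lambda>a b. 0)"
        using transfer_codiff_form[OF mn JU cJ, of \<eta>] zero by (simp add: zero_form_def transfer_zero)
      then have "codiff_ratio m * party_sign J * hodge_d_adj m \<eta> K a b = 0"
        unfolding KJ by (metis mat_adj_mat_adj mat_adj_zero)
      then show ?thesis using codiff_ratio_nonzero party_sign_nonzero by (simp add: zero_form_def)
    next
      case False
      then show ?thesis using Omega_outside[OF hodge_d_adj_Omega[OF mn]] by (simp add: zero_form_def)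
    qed
  qed
qed

lemma codiff_eq_zero_iff:
  assumes kn: "k \<le> n" and eta: "\<eta> \<in> Omega n dims psi k"
  shows "codiff n dims psi k \<eta> = zero_form \<longleftrightarrow> dform n dims psi (n - k) (hodge k \<eta>) = zero_form"
proof (cases k)
  case 0
  then show ?thesis by (simp add: codiff_def dform_top)
next
  case (Suc m)
  have "hodge_d_adj m \<eta> = form_adj (dform n dims psi (n - k) (hodge k \<eta>))"
    unfolding hodge_d_adj_def form_adj_def Suc by (rule dform_mat_adj)
  then show ?thesis
    using kn eta Suc by (simp add: codiff_eq_codiff_form codiff_form_eq_zero_iff form_adj_eq_zero_iff)
qed

lemma dform_eq_zero_iff:
  assumes kn: "k \<le> n" and eta: "\<eta> \<in> Omega n dims psi k"
  shows "dform n dims psi k \<eta> = zero_form \<longleftrightarrow> codiff n dims psi (n - k) (hodge k \<eta>) = zero_form"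
proof -
  have nk: "n - (n - k) = k" using kn by simp
  have "codiff n dims psi (n - k) (hodge k \<eta>) = zero_form \<longleftrightarrow>
      dform n dims psi (n - (n - k)) (hodge (n - k) (hodge k \<eta>)) = zero_form"
    by (rule codiff_eq_zero_iff[OF _ hodge_Omega[OF kn eta]]) simp
  also have "\<dots> \<longleftrightarrow> form_scale (party_sign parties) (dform n dims psi k \<eta>) = zero_form"
    by (simp add: nk hodge_hodge[OF kn eta] dform_scale)
  also have "\<dots> \<longleftrightarrow> dform n dims psi k \<eta> = zero_form"
    using party_sign_nonzero[of parties] by (auto simp: form_scale_def zero_form_def fun_eq_iff)
  finally show ?thesis by simp
qed

lemma hodge_Harm:
  assumes kn: "k \<le> n" and h: "\<eta> \<in> Harm n dims psi k"
  shows "hodge k \<eta> \<in> Harm n dims psi (n - k)"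
proof -
  have eO: "\<eta> \<in> Omega n dims psi k" and d0: "dform n dims psi k \<eta> = zero_form"
    and c0: "codiff n dims psi k \<eta> = zero_form" using h by (auto simp: Harm_def)
  have "hodge k \<eta> \<in> Omega n dims psi (n - k)" by (rule hodge_Omega[OF kn eO])
  moreover have "dform n dims psi (n - k) (hodge k \<eta>) = zero_form" using codiff_eq_zero_iff[OF kn eO] c0 by simp
  moreover have "codiff n dims psi (n - k) (hodge k \<eta>) = zero_form" using dform_eq_zero_iff[OF kn eO] d0 by simp
  ultimately show ?thesis by (simp add: Harm_def)
qed

lemma Harm_scale:
  assumes kn: "k \<le> n" and x: "x \<in> Harm n dims psi k"
  shows "form_scale c x \<in> Harm n dims psi k"
proof -
  have xO: "x \<in> Omega n dims psi k" and d: "dform n dims psi k x = zero_form"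
    and \<delta>: "codiff n dims psi k x = zero_form" using x by (auto simp: Harm_def)
  have zero: "form_scale c zero_form = zero_form" by (simp add: form_scale_def zero_form_def)
  have "dform n dims psi (n - k) (hodge k x) = zero_form" using codiff_eq_zero_iff[OF kn xO] \<delta> by simp
  then have "codiff n dims psi k (form_scale c x) = zero_form"
    using codiff_eq_zero_iff[OF kn Omega_scale[OF xO]] by (simp add: hodge_scale dform_scale zero)
  then show ?thesis using Omega_scale[OF xO] d by (simp add: Harm_def dform_scale zero)
qed

lemma bij_betw_hodge_Harm:
  assumes kn: "k \<le> n"
  shows "bij_betw (hodge k) (Harm n dims psi k) (Harm n dims psi (n - k))"
proof (rule bij_betw_byWitness[where f' = "\<lambda>z. form_scale (party_sign parties) (hodge (n - k) z)"])
  have nk: "n - (n - k) = k" using kn by simp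
  have sign: "form_scale (party_sign parties) (form_scale (party_sign parties) x) = x" for x
    by (simp add: form_scale_def mult.assoc[symmetric] party_sign_square)
  show "\<forall>x\<in>Harm n dims psi k. form_scale (party_sign parties) (hodge (n - k) (hodge k x)) = x"
    using hodge_hodge[OF kn] sign by (simp add: Harm_def)
  show "\<forall>z\<in>Harm n dims psi (n - k). hodge k (form_scale (party_sign parties) (hodge (n - k) z)) = z"
    using hodge_hodge[of "n - k"] sign by (simp add: Harm_def hodge_scale nk)
  show "hodge k ` Harm n dims psi k \<subseteq> Harm n dims psi (n - k)"
    using hodge_Harm[OF kn] by blast
  show "(\<lambda>z. form_scale (party_sign parties) (hodge (n - k) z)) ` Harm n dims psi (n - k) \<subseteq> Harm n dims psi k"
    using hodge_Harm[of "n - k"] Harm_scale[OF kn] by (auto simp: nk)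
qed

end

theorem theorem3:
  fixes n :: nat and dims :: "nat \<Rightarrow> nat" and psi :: "mindex \<Rightarrow> complex" and k :: nat
  assumes "unit_state n dims psi"
    and "k \<le> n"
  shows "\<exists>f. bij_betw f (Harm n dims psi k) (Harm n dims psi (n - k)) \<and>
    (\<forall>x\<in>Harm n dims psi k. \<forall>y\<in>Harm n dims psi k. f (form_add x y) = form_add (f x) (f y)) \<and>
    (\<forall>c. \<forall>x\<in>Harm n dims psi k. f (form_scale c x) = form_scale c (f x))"
proof -
  interpret pure_state n dims psi by unfold_locales (rule assms(1))
  show ?thesis using bij_betw_hodge_Harm[OF assms(2)] hodge_add hodge_scale by blast
qed

end
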